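(* There is a unique linear map $\Delta:\mathcal{A}\to\mathcal{A}\otimes\mathcal{A}$ such that $(\mathcal{A},*,|,\Delta,\varepsilon)$ is a graded connected bialgebra (grading $\mathcal A_n=\mathbb K T_n$) and $\Delta(x\ltimes y)=\Delta(x)\ltimes\Delta(y)$ for all $x,y\in\mathcal{A}^+$ and $\ltimes\in\{\prec,\cdot,\succ\}$ (products on the right computed in $\mathcal A\overline\otimes\mathcal A$). It is given by $\Delta(|)=|\otimes|$ and, for every tree $t\neq|$, $$\Delta(t)=\sum_{c\text{ admissible cut of }t}G^c(t)\otimes P^c(t).$$
   Context: A tridendriform algebra over a field $\mathbb{K}$ is a vector space with products $\prec,\cdot,\succ$ such that, with $a*b=a\prec b+a\cdot b+a\succ b$: $(a\prec b)\prec c=a\prec(b*c)$, $(a\succ b)\prec c=a\succ(b\prec c)$, $(a*b)\succ c=a\succ(b\succ c)$, $(a\succ b)\cdot c=a\succ(b\cdot c)$, $(a\prec b)\cdot c=a\cdot(b\succ c)$, $(a\cdot b)\prec c=a\cdot(b\prec c)$, $(a\cdot b)\cdot c=a\cdot(b\cdot c)$. Trees: planar rooted trees in which every internal vertex has at least two children; the root vertex hangs from a trunk edge; leaves are edges without upper vertex. $|$ is the tree with one leaf and no internal vertex. $T_n$ = trees with $n+1$ leaves, $\mathcal{A}=\bigoplus_{n\ge0}\mathbb{K}T_n$, $\mathcal{A}^+=\bigoplus_{n\ge1}\mathbb{K}T_n$. For trees $x_0,\dots,x_k$ ($k\ge1$), $x_0\vee\cdots\vee x_k$ grafts them left to right on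 a new root vertex; each tree $x\ne|$ is uniquely $x^{(0)}\vee\cdots\vee x^{(k)}$. $Y=|\vee|$. Recursively: $x\prec y=x^{(0)}\vee\cdots\vee x^{(k-1)}\vee(x^{(k)}*y)$, $x\cdot y=x^{(0)}\vee\cdots\vee x^{(k-1)}\vee(x^{(k)}*y^{(0)})\vee y^{(1)}\vee\cdots\vee y^{(l)}$, $x\succ y=(x*y^{(0)})\vee y^{(1)}\vee\cdots\vee y^{(l)}$ for $x=x^{(0)}\vee\cdots\vee x^{(k)}$, $y=y^{(0)}\vee\cdots\vee y^{(l)}$, with $*=\prec+\cdot+\succ$ and $|*z=z*|=z$. $\mathcal A^+$ is the free tridendriform algebra on $Y$; $\mathcal A$ is its augmentation: $|$ is the unit of $*$ and for $a\in\mathcal A^+$: $|\prec a=0$, $a\prec|=a$, $|\succ a=a$, $a\succ|=0$, $|\cdot a=a\cdot|=0$. $\varepsilon:\mathcal A\to\mathbb K$ is $\varepsilon(|)=1$, $\varepsilon(\mathcal A^+)=0$. $\mathcal A\overline{\otimes}\mathcal A:=(\mathcal A^+\otimes\mathcal A^+)\oplus(\mathbb K|\otimes\mathcal A^+)\oplus(\mathcal A^+\otimes\mathbb K|)$ with products: $(a\otimes|)\ltimes(c\otimes|)=(a\ltimes c)\otimes|$, and $(a\otimes b)\ltimes(c\otimes d)=(a*c)\otimes(b\ltimes d)$ when $b,d$ are not both $|$. Cuts: an internal edge of a tree is an edge joining two internal vertices. A cut of $t$ is a nonempty set of internal edges; in addition there are the empty cut and the total cut (cutting the trunk below the root). A cut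 is admissible if every path from the root to a leaf meets at most one chosen edge; the empty and total cuts are admissible. For an admissible cut $c$ other than empty and total, removing the chosen edges yields $P^c(t)$, the component containing the root, and trees $G^c_1(t),\dots,G^c_m(t)$ ordered from left to right; $G^c(t)=G^c_1(t)*\cdots*G^c_m(t)$. For the empty cut $P^c(t)=t$, $G^c(t)=|$; for the total cut $P^c(t)=|$, $G^c(t)=t$. *)

theory Defs
  imports Main "HOL-Library.Poly_Mapping"
begin

text \<open>Leaf is the tree with one leaf and no internal vertex. Node ts is the grafting
  of the list ts (left to right) on a new root vertex.\<close>
datatype tree = Leaf | Node "tree list"

fun valid :: "tree \<Rightarrow> bool" where
  "valid Leaf = True"
| "valid (Node ts) = (2 \<le> length ts \<and> (\<forall>s\<in>set ts. valid s))"

fun leaves :: "tree \<Rightarrow> nat" where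
  "leaves Leaf = 1"
| "leaves (Node ts) = sum_list (map leaves ts)"

text \<open>degree: a tree in T_n has n+1 leaves\<close>
definition deg :: "tree \<Rightarrow> nat" where
  "deg t = leaves t - 1"

type_synonym 'k vec = "tree \<Rightarrow>\<^sub>0 'k"
type_synonym 'k vec2 = "(tree \<times> tree) \<Rightarrow>\<^sub>0 'k"

definition scale :: "'k::field \<Rightarrow> ('a \<Rightarrow>\<^sub>0 'k) \<Rightarrow> ('a \<Rightarrow>\<^sub>0 'k)" where
  "scale c p = Poly_Mapping.map (\<lambda>v. c * v) p"

definition tvec :: "tree \<Rightarrow> 'k::field vec" where
  "tvec t = Poly_Mapping.single t 1"

definition Aspace :: "'k::field vec set" where
  "Aspace = {a. Poly_Mapping.keys a \<subseteq> {t. valid t}}"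

definition Aplus :: "'k::field vec set" where
  "Aplus = {a. Poly_Mapping.keys a \<subseteq> {t. valid t \<and> t \<noteq> Leaf}}"

definition A2space :: "'k::field vec2 set" where
  "A2space = {p. Poly_Mapping.keys p \<subseteq> {(s, t). valid s \<and> valid t}}"

definition unitA :: "'k::field vec" where
  "unitA = tvec Leaf"

definition eps :: "'k::field vec \<Rightarrow> 'k" where
  "eps a = Poly_Mapping.lookup a Leaf"

definition tens :: "('a \<Rightarrow>\<^sub>0 'k::field) \<Rightarrow> ('b \<Rightarrow>\<^sub>0 'k) \<Rightarrow> ('a \<times> 'b \<Rightarrow>\<^sub>0 'k)" where
  "tens a b = (\<Sum>s\<in>Poly_Mapping.keys a. \<Sum>t\<in>Poly_Mapping.keys b. Poly_Mapping.single (s, t) (Poly_Mapping.lookup a s * Poly_Mapping.lookup b t))"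

fun lcomb :: "'k::field vec list \<Rightarrow> (tree list \<Rightarrow>\<^sub>0 'k)" where
  "lcomb [] = Poly_Mapping.single [] 1"
| "lcomb (a # as) = (\<Sum>t\<in>Poly_Mapping.keys a. \<Sum>ts\<in>Poly_Mapping.keys (lcomb as).
      Poly_Mapping.single (t # ts) (Poly_Mapping.lookup a t * Poly_Mapping.lookup (lcomb as) ts))"

definition graft :: "'k::field vec list \<Rightarrow> 'k vec" where
  "graft as = (\<Sum>ts\<in>Poly_Mapping.keys (lcomb as). Poly_Mapping.single (Node ts) (Poly_Mapping.lookup (lcomb as) ts))"

text \<open>Operation code: 0 = prec, 1 = dot (middle product), 2 = succ, 3 = star
  (the associative product, star = prec + dot + succ), including the augmentation
  conventions for the tree Leaf. The products Leaf prec Leaf, Leaf dot Leaf,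
  Leaf succ Leaf are not defined in the paper; they are set to 0 here and are never used.\<close>

lemma size_nth_less: "i < length ts \<Longrightarrow> size (ts ! i) < Suc (size_list size ts)"
  by (meson le_imp_less_Suc nth_mem size_list_estimation' order_refl)

lemma size_last_less: "ts \<noteq> [] \<Longrightarrow> size (last ts) < Suc (size_list size ts)"
  by (meson last_in_set le_imp_less_Suc size_list_estimation' order_refl)

lemma size_hd_less: "ts \<noteq> [] \<Longrightarrow> size (hd ts) < Suc (size_list size ts)"
  by (meson hd_in_set le_imp_less_Suc size_list_estimation' order_refl)

lemma size_last_hd_less: "xs \<noteq> [] \<Longrightarrow> ys \<noteq> [] \<Longrightarrow>
  size (last xs) + size (hd ys) < Suc (Suc (size_list size xs + size_list size ys))"
  using size_last_less[of xs] size_hd_less[of ys] by linarith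

function tp :: "nat \<Rightarrow> tree \<Rightarrow> tree \<Rightarrow> 'k::field vec" where
  "tp op x y =
    (if op = 3 then
       (if x = Leaf then tvec y else if y = Leaf then tvec x
        else tp 0 x y + tp 1 x y + tp 2 x y)
     else (case x of
       Leaf \<Rightarrow> (if y \<noteq> Leaf \<and> op = 2 then tvec y else 0)
     | Node xs \<Rightarrow> (case y of
         Leaf \<Rightarrow> (if op = 0 then tvec x else 0)
       | Node ys \<Rightarrow>
           (if xs = [] \<or> ys = [] then 0
            else if op = 0 then graft (map tvec (butlast xs) @ [tp 3 (last xs) y])
            else if op = 1 then graft (map tvec (butlast xs) @ [tp 3 (last xs) (hd ys)] @ map tvec (tl ys))
            else graft (tp 3 x (hd ys) # map tvec (tl ys))))))"
  by pat_completeness auto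
termination
  by (relation "measures [\<lambda>(op, x, y). size x + size y, \<lambda>(op, x, y). if op = 3 then 1 else 0]")
     (auto simp: size_last_less size_hd_less size_last_hd_less)

definition prodA :: "nat \<Rightarrow> 'k::field vec \<Rightarrow> 'k vec \<Rightarrow> 'k vec" where
  "prodA op a b = (\<Sum>s\<in>Poly_Mapping.keys a. \<Sum>t\<in>Poly_Mapping.keys b. scale (Poly_Mapping.lookup a s * Poly_Mapping.lookup b t) (tp op s t))"

abbreviation starA :: "'k::field vec \<Rightarrow> 'k vec \<Rightarrow> 'k vec" where
  "starA \<equiv> prodA 3"

text \<open>(a\<otimes>|) op (c\<otimes>|) = (a op c)\<otimes>|, and (a\<otimes>b) op (c\<otimes>d) = (a*c)\<otimes>(b op d) if b, d
  are not both |. Basis pairs outside A bar-tensor A (|\<otimes>|) are sent to 0 (never used).\<close>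
definition bar_basis :: "nat \<Rightarrow> tree \<times> tree \<Rightarrow> tree \<times> tree \<Rightarrow> 'k::field vec2" where
  "bar_basis op p q = (case (p, q) of ((a, b), (c, d)) \<Rightarrow>
     (if b = Leaf \<and> d = Leaf then
        (if a \<noteq> Leaf \<and> c \<noteq> Leaf then tens (tp op a c) unitA else 0)
      else tens (tp 3 a c) (tp op b d)))"

definition barprod :: "nat \<Rightarrow> 'k::field vec2 \<Rightarrow> 'k vec2 \<Rightarrow> 'k vec2" where
  "barprod op p q = (\<Sum>u\<in>Poly_Mapping.keys p. \<Sum>v\<in>Poly_Mapping.keys q. scale (Poly_Mapping.lookup p u * Poly_Mapping.lookup q v) (bar_basis op u v))"

definition prod2 :: "'k::field vec2 \<Rightarrow> 'k vec2 \<Rightarrow> 'k vec2" where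
  "prod2 p q = (\<Sum>(a, b)\<in>Poly_Mapping.keys p. \<Sum>(c, d)\<in>Poly_Mapping.keys q.
      scale (Poly_Mapping.lookup p (a, b) * Poly_Mapping.lookup q (c, d)) (tens (tp 3 a c) (tp 3 b d)))"

definition homog :: "nat \<Rightarrow> 'k::field vec \<Rightarrow> bool" where
  "homog n a \<longleftrightarrow> (\<forall>t\<in>Poly_Mapping.keys a. deg t = n)"

definition Delta_id :: "('k::field vec \<Rightarrow> 'k vec2) \<Rightarrow> 'k vec2 \<Rightarrow> ((tree \<times> tree) \<times> tree \<Rightarrow>\<^sub>0 'k)" where
  "Delta_id D p = (\<Sum>(s, t)\<in>Poly_Mapping.keys p. scale (Poly_Mapping.lookup p (s, t)) (tens (D (tvec s)) (tvec t)))"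

definition id_Delta :: "('k::field vec \<Rightarrow> 'k vec2) \<Rightarrow> 'k vec2 \<Rightarrow> (tree \<times> (tree \<times> tree) \<Rightarrow>\<^sub>0 'k)" where
  "id_Delta D p = (\<Sum>(s, t)\<in>Poly_Mapping.keys p. scale (Poly_Mapping.lookup p (s, t)) (tens (tvec s) (D (tvec t))))"

text \<open>(\<epsilon> \<otimes> id) and (id \<otimes> \<epsilon>), identifying K \<otimes> A and A \<otimes> K with A\<close>
definition eps_id :: "'k::field vec2 \<Rightarrow> 'k vec" where
  "eps_id p = (\<Sum>(s, t)\<in>Poly_Mapping.keys p. scale (Poly_Mapping.lookup p (s, t) * eps (tvec s)) (tvec t))"

definition id_eps :: "'k::field vec2 \<Rightarrow> 'k vec" where
  "id_eps p = (\<Sum>(s, t)\<in>Poly_Mapping.keys p. scale (Poly_Mapping.lookup p (s, t) * eps (tvec t)) (tvec s))"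

definition linear_A :: "('k::field vec \<Rightarrow> 'k vec2) \<Rightarrow> bool" where
  "linear_A D \<longleftrightarrow> (\<forall>a\<in>Aspace. D a \<in> A2space) \<and>
     (\<forall>a\<in>Aspace. \<forall>b\<in>Aspace. D (a + b) = D a + D b) \<and>
     (\<forall>a\<in>Aspace. \<forall>c. D (scale c a) = scale c (D a))"

definition graded_connected_bialgebra :: "('k::field vec \<Rightarrow> 'k vec2) \<Rightarrow> bool" where
  "graded_connected_bialgebra D \<longleftrightarrow>
     \<comment> \<open>associative unital algebra\<close>
     (\<forall>a\<in>(Aspace :: 'k vec set). \<forall>b\<in>(Aspace :: 'k vec set). \<forall>c\<in>(Aspace :: 'k vec set). starA (starA a b) c = starA a (starA b c)) \<and>
     (\<forall>a\<in>(Aspace :: 'k vec set). starA unitA a = a \<and> starA a unitA = a) \<and>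
     \<comment> \<open>coassociative counital coalgebra\<close>
     (\<forall>a\<in>(Aspace :: 'k vec set). \<forall>u v w. Poly_Mapping.lookup (Delta_id D (D a)) ((u, v), w) = Poly_Mapping.lookup (id_Delta D (D a)) (u, (v, w))) \<and>
     (\<forall>a\<in>(Aspace :: 'k vec set). eps_id (D a) = a \<and> id_eps (D a) = a) \<and>
     \<comment> \<open>compatibility: D and \<epsilon> are unital algebra morphisms\<close>
     (\<forall>a\<in>(Aspace :: 'k vec set). \<forall>b\<in>(Aspace :: 'k vec set). D (starA a b) = prod2 (D a) (D b)) \<and>
     D unitA = tens unitA unitA \<and>
     (\<forall>a\<in>(Aspace :: 'k vec set). \<forall>b\<in>(Aspace :: 'k vec set). eps (starA a b) = eps a * eps b) \<and>
     eps (unitA :: 'k vec) = 1 \<and>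
     \<comment> \<open>graded\<close>
     (\<forall>n m (a :: 'k vec) b. a \<in> (Aspace :: 'k vec set) \<longrightarrow> b \<in> (Aspace :: 'k vec set) \<longrightarrow> homog n a \<longrightarrow> homog m b \<longrightarrow> homog (n + m) (starA a b)) \<and>
     (\<forall>n a. a \<in> (Aspace :: 'k vec set) \<longrightarrow> homog n a \<longrightarrow> (\<forall>(s, t)\<in>Poly_Mapping.keys (D a). deg s + deg t = n)) \<and>
     (\<forall>n (a :: 'k vec). a \<in> (Aspace :: 'k vec set) \<longrightarrow> homog n a \<longrightarrow> 0 < n \<longrightarrow> eps a = 0) \<and>
     \<comment> \<open>connected: A_0 = K |\<close>
     {a \<in> (Aspace :: 'k vec set). homog 0 a} = range (\<lambda>c. scale c unitA)"

definition tridendriform_compatible :: "('k::field vec \<Rightarrow> 'k vec2) \<Rightarrow> bool" where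
  "tridendriform_compatible D \<longleftrightarrow>
     (\<forall>x\<in>Aplus. \<forall>y\<in>Aplus. \<forall>op < 3. D (prodA op x y) = barprod op (D x) (D y))"

fun valid_path :: "tree \<Rightarrow> nat list \<Rightarrow> bool" where
  "valid_path t [] = True"
| "valid_path Leaf (i # p) = False"
| "valid_path (Node ts) (i # p) = (i < length ts \<and> valid_path (ts ! i) p)"

fun subtree_at :: "tree \<Rightarrow> nat list \<Rightarrow> tree" where
  "subtree_at t [] = t"
| "subtree_at Leaf (i # p) = Leaf"
| "subtree_at (Node ts) (i # p) = (if i < length ts then subtree_at (ts ! i) p else Leaf)"

text \<open>Positions of internal vertices. The position p \<noteq> [] stands for the (internal) edge
  below the internal vertex at p; the position [] stands for the trunk (total cut).\<close>
definition ipos :: "tree \<Rightarrow> nat list set" where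
  "ipos t = {p. valid_path t p \<and> subtree_at t p \<noteq> Leaf}"

text \<open>admissible cuts: empty cut {}, total cut {[]}, and nonempty sets of internal edges
  such that each root-to-leaf path meets at most one of them (prefix antichains)\<close>
definition admissible_cuts :: "tree \<Rightarrow> nat list set set" where
  "admissible_cuts t = {C. C \<subseteq> ipos t \<and>
     (\<forall>p\<in>C. \<forall>q\<in>C. p \<noteq> q \<longrightarrow> \<not> (\<exists>r. q = p @ r))}"

function prune :: "nat list set \<Rightarrow> tree \<Rightarrow> tree" where
  "prune C t = (if [] \<in> C then Leaf else (case t of Leaf \<Rightarrow> Leaf
     | Node ts \<Rightarrow> Node (map (\<lambda>i. prune {p. i # p \<in> C} (ts ! i)) [0..<length ts])))"
  by pat_completeness auto
termination
  by (relation "measure (\<lambda>(C, t). size t)") (auto simp: size_nth_less)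

function forest :: "nat list set \<Rightarrow> tree \<Rightarrow> tree list" where
  "forest C t = (if [] \<in> C then [t] else (case t of Leaf \<Rightarrow> []
     | Node ts \<Rightarrow> concat (map (\<lambda>i. forest {p. i # p \<in> C} (ts ! i)) [0..<length ts])))"
  by pat_completeness auto
termination
  by (relation "measure (\<lambda>(C, t). size t)") (auto simp: size_nth_less)

text \<open>P^c(t): the part containing the root; each cut edge becomes a leaf of P^c(t)
  (and the trunk of the corresponding G^c_i(t)).\<close>
definition Pcut :: "nat list set \<Rightarrow> tree \<Rightarrow> tree" where
  "Pcut C t = prune C t"

text \<open>G^c(t) = G^c_1(t) * ... * G^c_m(t) (left to right), | for the empty cut\<close>
definition Gcut :: "nat list set \<Rightarrow> tree \<Rightarrow> 'k::field vec" where
  "Gcut C t = foldr (\<lambda>s acc. starA (tvec s) acc) (forest C t) unitA"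

definition Delta_tree :: "tree \<Rightarrow> 'k::field vec2" where
  "Delta_tree t = (if t = Leaf then tens unitA unitA
     else (\<Sum>C\<in>admissible_cuts t. tens (Gcut C t) (tvec (Pcut C t))))"

definition Delta_cut :: "'k::field vec \<Rightarrow> 'k vec2" where
  "Delta_cut a = (\<Sum>t\<in>Poly_Mapping.keys a. scale (Poly_Mapping.lookup a t) (Delta_tree t))"

end

theory Submission
  imports Defs
begin

(*
  An admissible cut of t = Node [t_1, ..., t_k] is either the total cut or a tuple of admissible
  cuts of the subtrees t_i.  Hence the cut coproduct satisfies the recursion

    Delta t = t (x) | + sum (G_1 * ... * G_k) (x) Node [P_1, ..., P_k],

  the sum ranging over the terms G_i (x) P_i of Delta t_i.  Each of the products x < y, x . y and
  x > y of two trees grafts a single star product of smaller trees (the last child of x with y,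
  the last child of x with the first child of y, x with the first child of y) onto a new root.
  Through the recursion, compatibility of Delta with one of the three products therefore reduces
  to multiplicativity of Delta on a star product of smaller trees, and multiplicativity is the sum
  of the three compatibilities; both are proved by one induction on the number of leaves, as are
  the tridendriform axioms on trees.  Coassociativity and the counit property follow from the
  same recursion by induction on trees.  Conversely, the unit, counit and grading axioms force
  the values of a compatible coproduct on | and on Y, and every other tree is x < y, x . y or
  x > y of two trees with fewer leaves, so the coproduct is unique.
*)

section \<open>Linear extension\<close>

lemma lookup_scale [simp]: "Poly_Mapping.lookup (scale c p) x = c * Poly_Mapping.lookup p x"
  unfolding scale_def by transfer (simp add: when_def)

lemma scale_add_right: "scale c (p + q) = scale c p + scale c q"
  by (rule poly_mapping_eqI) (simp add: lookup_add algebra_simps)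

lemma scale_add_left: "scale (c + d) p = scale c p + scale d p"
  by (rule poly_mapping_eqI) (simp add: lookup_add algebra_simps)

lemma scale_scale [simp]: "scale c (scale d p) = scale (c * d) p"
  by (rule poly_mapping_eqI) (simp add: algebra_simps)

lemma scale_one [simp]: "scale 1 p = p"
  by (rule poly_mapping_eqI) simp

lemma scale_zero_left [simp]: "scale 0 p = 0"
  by (rule poly_mapping_eqI) simp

lemma scale_zero_right [simp]: "scale c 0 = 0"
  by (rule poly_mapping_eqI) simp

lemma scale_sum: "scale c (sum f I) = (\<Sum>i\<in>I. scale c (f i))"
  by (rule poly_mapping_eqI) (simp add: lookup_sum sum_distrib_left)

lemma scale_single [simp]: "scale c (Poly_Mapping.single x d) = Poly_Mapping.single x (c * d)"
  by (rule poly_mapping_eqI) (simp add: lookup_single when_def)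

lemma keys_scale: "Poly_Mapping.keys (scale c p) \<subseteq> Poly_Mapping.keys p"
  by (auto simp: in_keys_iff)

lemma lookup_tvec: "Poly_Mapping.lookup (tvec t) x = (if x = t then 1 else 0)"
  by (simp add: tvec_def lookup_single when_def)

lemma keys_tvec [simp]: "Poly_Mapping.keys (tvec t :: 'k::field vec) = {t}"
  by (simp add: tvec_def)

definition lin :: "('a \<Rightarrow> ('b \<Rightarrow>\<^sub>0 'k::field)) \<Rightarrow> ('a \<Rightarrow>\<^sub>0 'k) \<Rightarrow> ('b \<Rightarrow>\<^sub>0 'k)" where
  "lin f a = (\<Sum>x\<in>Poly_Mapping.keys a. scale (Poly_Mapping.lookup a x) (f x))"

lemma lin_superset:
  assumes "finite S" "Poly_Mapping.keys a \<subseteq> S"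
  shows "lin f a = (\<Sum>x\<in>S. scale (Poly_Mapping.lookup a x) (f x))"
  unfolding lin_def
  by (rule sum.mono_neutral_left) (use assms in \<open>auto simp: in_keys_iff\<close>)

lemma lin_add: "lin f (a + b) = lin f a + lin f b"
proof -
  let ?S = "Poly_Mapping.keys a \<union> Poly_Mapping.keys b"
  have "lin f (a + b) = (\<Sum>x\<in>?S. scale (Poly_Mapping.lookup (a + b) x) (f x))"
    by (rule lin_superset) (use keys_add[of a b] in auto)
  also have "\<dots> = (\<Sum>x\<in>?S. scale (Poly_Mapping.lookup a x) (f x)) + (\<Sum>x\<in>?S. scale (Poly_Mapping.lookup b x) (f x))"
    by (simp add: lookup_add scale_add_left sum.distrib)
  also have "\<dots> = lin f a + lin f b"
    by (subst (1 2) lin_superset[of ?S]) auto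
  finally show ?thesis .
qed

lemma lin_scale: "lin f (scale c a) = scale c (lin f a)"
proof -
  have "lin f (scale c a) = (\<Sum>x\<in>Poly_Mapping.keys a. scale (Poly_Mapping.lookup (scale c a) x) (f x))"
    by (rule lin_superset) (auto simp: keys_scale[THEN subsetD])
  then show ?thesis by (simp add: lin_def scale_sum)
qed

lemma lin_zero [simp]: "lin f 0 = 0"
  by (simp add: lin_def)

lemma lin_single [simp]: "lin f (Poly_Mapping.single x c) = scale c (f x)"
  by (subst lin_superset[of "{x}"]) auto

lemma lin_tvec [simp]: "lin f (tvec t) = f t"
  by (simp add: tvec_def)

lemma lin_sum: "lin f (sum g I) = (\<Sum>i\<in>I. lin f (g i))"
  by (induction I rule: infinite_finite_induct) (auto simp: lin_add)

lemma lin_fadd: "lin (\<lambda>x. f x + g x) a = lin f a + lin g a"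
  by (simp add: lin_def scale_add_right sum.distrib)

lemma lin_fsum: "lin (\<lambda>x. \<Sum>i\<in>I. f i x) a = (\<Sum>i\<in>I. lin (f i) a)"
  unfolding lin_def scale_sum by (rule sum.swap)

lemma lin_fzero [simp]: "lin (\<lambda>x. 0) a = 0"
  by (simp add: lin_def)

lemma lin_cong: "(\<And>x. x \<in> Poly_Mapping.keys a \<Longrightarrow> f x = g x) \<Longrightarrow> lin f a = lin g a"
  by (simp add: lin_def)

lemma lin_lin: "lin g (lin f a) = lin (\<lambda>x. lin g (f x)) a"
proof -
  have "lin g (lin f a) = lin g (\<Sum>x\<in>Poly_Mapping.keys a. scale (Poly_Mapping.lookup a x) (f x))"
    by (simp only: lin_def[of f a])
  also have "\<dots> = lin (\<lambda>x. lin g (f x)) a"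
    by (simp only: lin_sum lin_scale lin_def[of "\<lambda>x. lin g (f x)" a])
  finally show ?thesis .
qed

lemma lookup_lin: "Poly_Mapping.lookup (lin f a) y = (\<Sum>x\<in>Poly_Mapping.keys a. Poly_Mapping.lookup a x * Poly_Mapping.lookup (f x) y)"
  by (simp add: lin_def lookup_sum)

lemma keys_lin: "Poly_Mapping.keys (lin f a) \<subseteq> (\<Union>x\<in>Poly_Mapping.keys a. Poly_Mapping.keys (f x))"
proof
  fix y assume "y \<in> Poly_Mapping.keys (lin f a)"
  then have "(\<Sum>x\<in>Poly_Mapping.keys a. Poly_Mapping.lookup a x * Poly_Mapping.lookup (f x) y) \<noteq> 0"
    by (simp add: in_keys_iff lookup_lin)
  then obtain x where "x \<in> Poly_Mapping.keys a" "Poly_Mapping.lookup (f x) y \<noteq> 0"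
    by (metis (no_types, lifting) mult_zero_right sum.neutral)
  then show "y \<in> (\<Union>x\<in>Poly_Mapping.keys a. Poly_Mapping.keys (f x))" by (auto simp: in_keys_iff)
qed

lemma keys_linI: "(\<And>x. x \<in> Poly_Mapping.keys a \<Longrightarrow> Poly_Mapping.keys (f x) \<subseteq> S) \<Longrightarrow> Poly_Mapping.keys (lin f a) \<subseteq> S"
  using keys_lin by fastforce

lemma lin_id: "lin (\<lambda>x. Poly_Mapping.single x 1) a = a"
proof (rule poly_mapping_eqI)
  fix y
  have "(\<Sum>x\<in>Poly_Mapping.keys a. Poly_Mapping.lookup a x * Poly_Mapping.lookup (Poly_Mapping.single x 1) y)
      = (\<Sum>x\<in>Poly_Mapping.keys a. if x = y then Poly_Mapping.lookup a x else 0)"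
    by (rule sum.cong) (auto simp: lookup_single when_def)
  also have "\<dots> = Poly_Mapping.lookup a y" by (simp add: sum.delta in_keys_iff)
  finally show "Poly_Mapping.lookup (lin (\<lambda>x. Poly_Mapping.single x 1) a) y = Poly_Mapping.lookup a y"
    by (simp add: lookup_lin)
qed

lemma lin_id_tvec: "lin tvec a = a"
  unfolding tvec_def[abs_def] by (rule lin_id)

lemma lin_swap: "lin (\<lambda>x. lin (\<lambda>y. h x y) b) a = lin (\<lambda>y. lin (\<lambda>x. h x y) a) b"
  unfolding lin_def scale_sum scale_scale
  by (subst sum.swap) (simp add: mult.commute)

lemma lin_eq_zero: "(\<And>x. x \<in> Poly_Mapping.keys a \<Longrightarrow> f x = 0) \<Longrightarrow> lin f a = 0"
  by (simp add: lin_def)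

lemma prodA_lin: "prodA op a b = lin (\<lambda>s. lin (\<lambda>t. tp op s t) b) a"
  by (simp add: prodA_def lin_def scale_sum)

lemma tens_lin: "tens a b = lin (\<lambda>s. lin (\<lambda>t. Poly_Mapping.single (s, t) 1) b) a"
  by (simp add: tens_def lin_def scale_sum mult.commute)

lemma barprod_lin: "barprod op p q = lin (\<lambda>u. lin (\<lambda>v. bar_basis op u v) q) p"
  by (simp add: barprod_def lin_def scale_sum)

lemma prod2_lin: "prod2 p q = lin (\<lambda>u. lin (\<lambda>v. tens (tp 3 (fst u) (fst v)) (tp 3 (snd u) (snd v))) q) p"
  by (simp add: prod2_def lin_def scale_sum case_prod_beta)

lemma Delta_id_lin: "Delta_id D p = lin (\<lambda>u. tens (D (tvec (fst u))) (tvec (snd u))) p"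
  by (simp add: Delta_id_def lin_def case_prod_beta)

lemma id_Delta_lin: "id_Delta D p = lin (\<lambda>u. tens (tvec (fst u)) (D (tvec (snd u)))) p"
  by (simp add: id_Delta_def lin_def case_prod_beta)

lemma eps_id_lin: "eps_id p = lin (\<lambda>u. scale (eps (tvec (fst u))) (tvec (snd u))) p"
  by (simp add: eps_id_def lin_def case_prod_beta)

lemma id_eps_lin: "id_eps p = lin (\<lambda>u. scale (eps (tvec (snd u))) (tvec (fst u))) p"
  by (simp add: id_eps_def lin_def case_prod_beta)

lemma Delta_cut_lin: "Delta_cut a = lin Delta_tree a"
  by (simp add: Delta_cut_def lin_def)

lemma lcomb_Cons_lin: "lcomb (a # as) = lin (\<lambda>t. lin (\<lambda>ts. Poly_Mapping.single (t # ts) 1) (lcomb as)) a"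
  by (simp add: lin_def scale_sum mult.commute)

declare lcomb.simps(2) [simp del]

lemma graft_lin: "graft as = lin (\<lambda>ts. tvec (Node ts)) (lcomb as)"
  by (simp add: graft_def lin_def tvec_def)

lemma tens_tvec [simp]: "tens (tvec s) (tvec t) = Poly_Mapping.single (s, t) 1"
  by (simp add: tens_lin)

lemma prodA_tvec [simp]: "prodA op (tvec s) (tvec t) = tp op s t"
  by (simp add: prodA_lin)

lemma eps_tvec: "eps (tvec t) = (if t = Leaf then 1 else 0)"
  by (simp add: eps_def lookup_tvec)

lemma eps_lin: "eps (lin f a) = (\<Sum>x\<in>Poly_Mapping.keys a. Poly_Mapping.lookup a x * eps (f x))"
  by (simp add: eps_def lookup_lin)

lemma tens_lin_left: "tens (lin f a) b = lin (\<lambda>s. tens (f s) b) a"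
  by (simp add: tens_lin lin_lin)

lemma tens_lin_right: "tens a (lin f b) = lin (\<lambda>t. tens a (f t)) b"
proof -
  have "tens a (lin f b) = lin (\<lambda>s. lin (\<lambda>t. lin (\<lambda>q. Poly_Mapping.single (s, q) 1) (f t)) b) a"
    by (simp add: tens_lin lin_lin)
  also have "\<dots> = lin (\<lambda>t. lin (\<lambda>s. lin (\<lambda>q. Poly_Mapping.single (s, q) 1) (f t)) a) b"
    by (rule lin_swap)
  finally show ?thesis by (simp add: tens_lin)
qed

lemma lin_tens: "lin h (tens a b) = lin (\<lambda>s. lin (\<lambda>t. h (s, t)) b) a"
  by (simp add: tens_lin lin_lin)

lemma tens_single_right: "tens a (Poly_Mapping.single q 1) = lin (\<lambda>s. Poly_Mapping.single (s, q) 1) a"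
  by (simp add: tens_lin)

lemma tens_add_left: "tens (a + b) c = tens a c + tens b c"
  by (simp add: tens_lin lin_add)

lemma tens_add_right: "tens a (b + c) = tens a b + tens a c"
  by (simp add: tens_lin lin_add lin_fadd)

lemma tens_zero_left [simp]: "tens 0 b = 0" by (simp add: tens_lin)
lemma tens_zero_right [simp]: "tens a 0 = 0" by (simp add: tens_lin)

section \<open>The products on trees\<close>

definition graft_at :: "tree list \<Rightarrow> 'k::field vec \<Rightarrow> tree list \<Rightarrow> 'k vec" where
  "graft_at pre v post = lin (\<lambda>t. tvec (Node (pre @ t # post))) v"

lemma lcomb_tvecs: "lcomb (map tvec ts) = Poly_Mapping.single ts 1"
  by (induction ts) (simp_all add: lcomb_Cons_lin)

lemma lcomb_hole: "lcomb (map tvec pre @ v # map tvec post) = lin (\<lambda>t. Poly_Mapping.single (pre @ t # post) 1) v"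
proof (induction pre)
  case Nil
  then show ?case by (simp add: lcomb_Cons_lin lcomb_tvecs)
next
  case (Cons p pre)
  then show ?case by (simp add: lcomb_Cons_lin lin_lin)
qed

lemma graft_hole: "graft (map tvec pre @ v # map tvec post) = graft_at pre v post"
  by (simp add: graft_lin lcomb_hole lin_lin graft_at_def)

lemma graft_at_tvec [simp]: "graft_at pre (tvec t) post = tvec (Node (pre @ t # post))"
  by (simp add: graft_at_def)

declare tp.simps [simp del]

fun children :: "tree \<Rightarrow> tree list" where
  "children Leaf = []"
| "children (Node ts) = ts"

definition valid_node :: "tree \<Rightarrow> bool" where
  "valid_node t \<longleftrightarrow> valid t \<and> t \<noteq> Leaf"

lemma valid_node_Node: "valid_node t \<Longrightarrow> t = Node (children t) \<and> 2 \<le> length (children t) \<and> (\<forall>s\<in>set (children t). valid s)"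
  by (cases t) (auto simp: valid_node_def)

lemma valid_node_children_ne: "valid_node t \<Longrightarrow> children t \<noteq> []"
  using valid_node_Node by fastforce

lemma tp3_Leaf_left [simp]: "tp 3 Leaf y = tvec y"
  by (rule trans[OF tp.simps]) simp

lemma tp3_Leaf_right [simp]: "tp 3 x Leaf = tvec x"
  by (rule trans[OF tp.simps]) simp

lemma tp3_split: "x \<noteq> Leaf \<Longrightarrow> y \<noteq> Leaf \<Longrightarrow> tp 3 x y = tp 0 x y + tp 1 x y + tp 2 x y"
  by (rule trans[OF tp.simps]) simp

lemma tp0_Leaf_left [simp]: "tp 0 Leaf y = 0"
  by (rule trans[OF tp.simps]) simp

lemma tp1_Leaf_left [simp]: "tp 1 Leaf y = 0"
  by (rule trans[OF tp.simps]) simp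

lemma tp2_Leaf_left: "y \<noteq> Leaf \<Longrightarrow> tp 2 Leaf y = tvec y"
  by (rule trans[OF tp.simps]) simp

lemma tp0_Leaf_right: "x \<noteq> Leaf \<Longrightarrow> tp 0 x Leaf = tvec x"
  by (rule trans[OF tp.simps]) (cases x; simp)

lemma tp1_Leaf_right [simp]: "tp 1 x Leaf = 0"
  by (rule trans[OF tp.simps]) (cases x; simp)

lemma tp2_Leaf_right [simp]: "tp 2 x Leaf = 0"
  by (rule trans[OF tp.simps]) (cases x; simp)

lemma tp0_Node: "x \<noteq> Leaf \<Longrightarrow> y \<noteq> Leaf \<Longrightarrow> children x \<noteq> [] \<Longrightarrow> children y \<noteq> [] \<Longrightarrow>
  tp 0 x y = graft_at (butlast (children x)) (tp 3 (last (children x)) y) []"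
  by (rule trans[OF tp.simps]) (cases x; cases y; simp add: graft_hole[of _ _ "[]", simplified])

lemma tp1_Node: "x \<noteq> Leaf \<Longrightarrow> y \<noteq> Leaf \<Longrightarrow> children x \<noteq> [] \<Longrightarrow> children y \<noteq> [] \<Longrightarrow>
  tp 1 x y = graft_at (butlast (children x)) (tp 3 (last (children x)) (hd (children y))) (tl (children y))"
  by (rule trans[OF tp.simps]) (cases x; cases y; simp add: graft_hole)

lemma tp2_Node: "x \<noteq> Leaf \<Longrightarrow> y \<noteq> Leaf \<Longrightarrow> children x \<noteq> [] \<Longrightarrow> children y \<noteq> [] \<Longrightarrow>
  tp 2 x y = graft_at [] (tp 3 x (hd (children y))) (tl (children y))"
  by (rule trans[OF tp.simps]) (cases x; cases y; simp add: graft_hole[of "[]", simplified])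

lemma graft_at_lin: "graft_at pre (lin f v) post = lin (\<lambda>t. graft_at pre (f t) post) v"
  by (simp add: graft_at_def lin_lin)

lemma keys_graft_at: "Poly_Mapping.keys (graft_at pre v post) \<subseteq> (\<lambda>t. Node (pre @ t # post)) ` Poly_Mapping.keys v"
  unfolding graft_at_def by (rule keys_linI) auto

lemma prodA_lin_left: "prodA op (lin f a) b = lin (\<lambda>x. prodA op (f x) b) a"
  by (simp add: prodA_lin lin_lin)

lemma prodA_lin_right: "prodA op a (lin f b) = lin (\<lambda>y. prodA op a (f y)) b"
proof -
  have "prodA op a (lin f b) = lin (\<lambda>s. lin (\<lambda>y. lin (\<lambda>t. tp op s t) (f y)) b) a"
    by (simp add: prodA_lin lin_lin)
  also have "\<dots> = lin (\<lambda>y. lin (\<lambda>s. lin (\<lambda>t. tp op s t) (f y)) a) b"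
    by (rule lin_swap)
  finally show ?thesis by (simp add: prodA_lin)
qed

lemma prodA_tvec_left: "prodA op (tvec s) b = lin (tp op s) b"
  by (simp add: prodA_lin)

lemma prodA_tvec_right: "prodA op a (tvec t) = lin (\<lambda>s. tp op s t) a"
  by (simp add: prodA_lin)

lemma prodA_add_left: "prodA op (a + b) c = prodA op a c + prodA op b c"
  by (simp add: prodA_lin lin_add)

lemma prodA_add_right: "prodA op a (b + c) = prodA op a b + prodA op a c"
  by (simp add: prodA_lin lin_add lin_fadd)

lemma prodA_graft_at_left: "prodA op (graft_at pre v post) (tvec z) = lin (\<lambda>t. tp op (Node (pre @ t # post)) z) v"
  by (simp add: graft_at_def prodA_tvec_right lin_lin)

lemma prodA_graft_at_right: "prodA op (tvec x) (graft_at pre v post) = lin (\<lambda>t. tp op x (Node (pre @ t # post))) v"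
  by (simp add: graft_at_def prodA_lin_right)

lemma in_keys_addD: "x \<in> Poly_Mapping.keys (a + b) \<Longrightarrow> x \<in> Poly_Mapping.keys a \<or> x \<in> Poly_Mapping.keys b"
  using keys_add[of a b] by blast

lemma leaves_pos: "valid t \<Longrightarrow> 1 \<le> leaves t"
proof (induction t)
  case Leaf
  then show ?case by simp
next
  case (Node ts)
  then obtain s where "s \<in> set ts" by (cases ts) auto
  with Node have "1 \<le> leaves s" by auto
  also have "leaves s \<le> sum_list (map leaves ts)"
    using \<open>s \<in> set ts\<close> by (simp add: member_le_sum_list)
  finally show ?case by simp
qed

lemma sum_list_leaves_pos: "xs \<noteq> [] \<Longrightarrow> \<forall>s\<in>set xs. valid s \<Longrightarrow> 1 \<le> sum_list (map leaves xs)"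
  by (cases xs) (auto dest: leaves_pos)

lemma keys_tp_Leaf_left: "Poly_Mapping.keys (tp op Leaf y) \<subseteq> {y}"
  by (subst tp.simps) auto

lemma keys_tp_Leaf_right: "Poly_Mapping.keys (tp op x Leaf) \<subseteq> {x}"
  by (subst tp.simps) (auto split: tree.splits)

lemma keys_graft_at_invariant:
  assumes "w \<in> Poly_Mapping.keys (graft_at pre v post)" "\<And>t. t \<in> Poly_Mapping.keys v \<Longrightarrow> valid t \<and> leaves t + 1 = n"
    and "\<forall>s\<in>set (pre @ post). valid s" "pre @ post \<noteq> []"
  shows "valid w \<and> leaves w + 1 = sum_list (map leaves pre) + n + sum_list (map leaves post) \<and> w \<noteq> Leaf"
proof -
  from assms(1) keys_graft_at obtain t where "w = Node (pre @ t # post)" "t \<in> Poly_Mapping.keys v" by blast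
  with assms(2-4) show ?thesis by (cases pre; cases post) auto
qed

lemma keys_tp_invariant:
  "valid x \<Longrightarrow> valid y \<Longrightarrow> w \<in> Poly_Mapping.keys (tp op x y :: 'k::field vec) \<Longrightarrow>
     valid w \<and> leaves w + 1 = leaves x + leaves y \<and> (w = Leaf \<longrightarrow> x = Leaf \<and> y = Leaf)"
proof (induction op x y arbitrary: w rule: tp.induct)
  case (1 op x y)
  show ?case
  proof (cases "x = Leaf \<or> y = Leaf")
    case True
    then consider "x = Leaf" | "y = Leaf" by blast
    then show ?thesis
      using "1.prems" keys_tp_Leaf_left[of op y] keys_tp_Leaf_right[of op x] by cases auto
  next
    case False
    then have nx: "x \<noteq> Leaf" and ny: "y \<noteq> Leaf" by auto
    then obtain xs ys where x: "x = Node xs" and y: "y = Node ys" by (cases x; cases y) auto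
    with "1.prems" have xs: "2 \<le> length xs" "\<forall>s\<in>set xs. valid s"
      and ys: "2 \<le> length ys" "\<forall>s\<in>set ys. valid s" by auto
    then have ne: "xs \<noteq> []" "ys \<noteq> []" "butlast xs \<noteq> []" "tl ys \<noteq> []"
      by (cases xs rule: rev_cases; cases ys; auto)+
    have lx: "leaves x = sum_list (map leaves (butlast xs)) + leaves (last xs)"
      using x ne(1) by (cases xs rule: rev_cases) auto
    have ly: "leaves y = leaves (hd ys) + sum_list (map leaves (tl ys))"
      using y ne(2) by (cases ys) auto
    have v: "valid (last xs)" "valid (hd ys)" "\<forall>s\<in>set (butlast xs). valid s" "\<forall>s\<in>set (tl ys). valid s"
      using xs(2) ys(2) ne by (auto dest: in_set_butlastD list.set_sel(2))
    consider "op = 3" | "op = 0" | "op = 1" | "op \<noteq> 0 \<and> op \<noteq> 1 \<and> op \<noteq> 3" by blast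
    then show ?thesis
    proof cases
      case 1
      have "w \<in> Poly_Mapping.keys (tp 0 x y + tp 1 x y + tp 2 x y :: 'k vec)"
        using "1.prems"(3) by (simp only: 1 tp3_split[OF nx ny])
      then have "w \<in> Poly_Mapping.keys (tp 0 x y :: 'k vec) \<union> Poly_Mapping.keys (tp 1 x y :: 'k vec) \<union> Poly_Mapping.keys (tp 2 x y :: 'k vec)"
        by (meson Un_iff in_keys_addD)
      then show ?thesis using "1.IH"(1-3)[OF 1 nx ny] "1.prems"(1,2) nx by auto
    next
      case 2
      with "1.prems"(3) x y ne have "w \<in> Poly_Mapping.keys (graft_at (butlast xs) (tp 3 (last xs) y) [] :: 'k vec)"
        by (simp add: tp0_Node)
      with "1.IH"(4)[OF _ x y] 2 ne v "1.prems"(2) lx show ?thesis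
        by (auto dest!: keys_graft_at_invariant)
    next
      case 3
      with "1.prems"(3) x y ne have "w \<in> Poly_Mapping.keys (graft_at (butlast xs) (tp 3 (last xs) (hd ys)) (tl ys) :: 'k vec)"
        by (simp add: tp1_Node del: One_nat_def)
      with "1.IH"(5)[OF _ x y] 3 ne v lx ly show ?thesis
        by (auto dest!: keys_graft_at_invariant)
    next
      case 4
      with "1.prems"(3) x y ne have "w \<in> Poly_Mapping.keys (graft_at [] (tp 3 x (hd ys)) (tl ys) :: 'k vec)"
        by (subst (asm) tp.simps) (simp add: graft_hole[of "[]", simplified])
      with "1.IH"(6)[OF _ x y] 4 ne v "1.prems"(1) ly show ?thesis
        by (auto dest!: keys_graft_at_invariant)
    qed
  qed
qed

lemma keys_tp:
  assumes "valid x" "valid y" "w \<in> Poly_Mapping.keys (tp op x y :: 'k::field vec)"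
  shows "valid w" "leaves w + 1 = leaves x + leaves y" "w = Leaf \<Longrightarrow> x = Leaf \<and> y = Leaf"
  using keys_tp_invariant[OF assms] by auto

lemma keys_tp_valid_node:
  assumes "valid x" "valid y" "x \<noteq> Leaf \<or> y \<noteq> Leaf" "w \<in> Poly_Mapping.keys (tp op x y :: 'k::field vec)"
  shows "valid_node w"
  using keys_tp[OF assms(1,2,4)] assms(3) by (auto simp: valid_node_def)

section \<open>The tridendriform axioms on trees\<close>

declare One_nat_def [simp del]

lemma valid_node_obtain_last:
  assumes "valid_node x"
  obtains bx xk where "x = Node (bx @ [xk])" "bx \<noteq> []" "valid xk" "\<forall>s\<in>set bx. valid s" "leaves xk < leaves x"
proof -
  from valid_node_Node[OF assms] have x: "x = Node (children x)" "2 \<le> length (children x)" "\<forall>s\<in>set (children x). valid s" by auto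
  then obtain bx xk where e: "children x = bx @ [xk]" by (cases "children x" rule: rev_cases) auto
  with x have "bx \<noteq> []" by auto
  moreover have "1 \<le> sum_list (map leaves bx)" using sum_list_leaves_pos[OF \<open>bx \<noteq> []\<close>] x e by auto
  ultimately show ?thesis using that[of bx xk] x e by auto
qed

lemma valid_node_obtain_first:
  assumes "valid_node y"
  obtains y0 ty where "y = Node (y0 # ty)" "ty \<noteq> []" "valid y0" "\<forall>s\<in>set ty. valid s" "leaves y0 < leaves y"
proof -
  from valid_node_Node[OF assms] have y: "y = Node (children y)" "2 \<le> length (children y)" "\<forall>s\<in>set (children y). valid s" by auto
  then obtain y0 ty where e: "children y = y0 # ty" by (cases "children y") auto
  with y have "ty \<noteq> []" by auto
  moreover have "1 \<le> sum_list (map leaves ty)" using sum_list_leaves_pos[OF \<open>ty \<noteq> []\<close>] y e by auto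
  ultimately show ?thesis using that[of y0 ty] y e by auto
qed

lemma valid_node_obtain_first_last:
  assumes "valid_node y"
  obtains y0 bty ly where "y = Node (y0 # bty @ [ly])" "valid y0" "valid ly" "\<forall>s\<in>set bty. valid s"
proof -
  obtain y0 ty where y: "y = Node (y0 # ty)" "ty \<noteq> []" "valid y0" "\<forall>s\<in>set ty. valid s"
    using valid_node_obtain_first[OF assms] by blast
  then obtain bty ly where "ty = bty @ [ly]" by (cases ty rule: rev_cases) auto
  then show ?thesis using that y by auto
qed

lemma valid_node_not_Leaf: "valid_node x \<Longrightarrow> x \<noteq> Leaf" by (simp add: valid_node_def)
lemma valid_node_valid: "valid_node x \<Longrightarrow> valid x" by (simp add: valid_node_def)

lemmas tp_Node_simps = tp0_Node tp1_Node tp2_Node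

lemma assoc_prec_prec:
  assumes x: "x = Node (bx @ [xk])" "bx \<noteq> []" and y: "valid_node y" and z: "valid_node z"
    and IH: "prodA 3 (tp 3 xk y) (tvec z) = prodA 3 (tvec xk) (tp 3 y z :: 'k::field vec)"
  shows "prodA 0 (tp 0 x y) (tvec z) = prodA 0 (tvec x) (tp 3 y z :: 'k vec)"
proof -
  have yz: "y \<noteq> Leaf" "z \<noteq> Leaf" "children y \<noteq> []" "children z \<noteq> []"
    using y z valid_node_children_ne valid_node_not_Leaf by auto
  have "prodA 0 (tp 0 x y) (tvec z) = prodA 0 (graft_at bx (tp 3 xk y) []) (tvec z :: 'k vec)"
    using x yz by (simp add: tp0_Node)
  also have "\<dots> = lin (\<lambda>t. graft_at bx (tp 3 t z) []) (tp 3 xk y)"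
    using yz by (simp add: prodA_graft_at_left tp0_Node)
  also have "\<dots> = graft_at bx (prodA 3 (tp 3 xk y) (tvec z)) []"
    by (simp add: graft_at_lin prodA_tvec_right)
  also have "\<dots> = graft_at bx (prodA 3 (tvec xk) (tp 3 y z)) []"
    using IH by simp
  also have "\<dots> = lin (\<lambda>w. graft_at bx (tp 3 xk w) []) (tp 3 y z)"
    by (simp add: graft_at_lin prodA_tvec_left)
  also have "\<dots> = lin (\<lambda>w. tp 0 x w) (tp 3 y z)"
  proof (rule lin_cong)
    fix w assume "w \<in> Poly_Mapping.keys (tp 3 y z :: 'k vec)"
    then have "valid_node w" using keys_tp_valid_node y z valid_node_valid valid_node_not_Leaf by blast
    then show "graft_at bx (tp 3 xk w) [] = tp 0 x w"
      using x by (simp add: tp0_Node valid_node_children_ne valid_node_not_Leaf)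
  qed
  also have "\<dots> = prodA 0 (tvec x) (tp 3 y z)"
    by (simp add: prodA_tvec_left)
  finally show ?thesis .
qed

lemma assoc_succ_prec:
  assumes x: "valid_node x" and y: "y = Node (y0 # bty @ [ly])" and z: "valid_node z"
  shows "prodA 0 (tp 2 x y) (tvec z) = prodA 2 (tvec x) (tp 0 y z :: 'k::field vec)"
proof -
  have xz: "x \<noteq> Leaf" "z \<noteq> Leaf" "children x \<noteq> []" "children z \<noteq> []"
    using x z valid_node_children_ne valid_node_not_Leaf by auto
  have "prodA 0 (tp 2 x y) (tvec z) = lin (\<lambda>t. graft_at (t # bty) (tp 3 ly z) []) (tp 3 x y0 :: 'k vec)"
    using xz y by (simp add: tp_Node_simps prodA_graft_at_left)
  also have "\<dots> = lin (\<lambda>u. graft_at [] (tp 3 x y0) (bty @ [u])) (tp 3 ly z)"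
    by (simp add: graft_at_def, rule lin_swap)
  also have "\<dots> = prodA 2 (tvec x) (tp 0 y z)"
    using xz y by (simp add: tp_Node_simps prodA_graft_at_right)
  finally show ?thesis .
qed

lemma assoc_star_succ:
  assumes x: "valid_node x" and y: "valid_node y" and z: "z = Node (z0 # tz)" "tz \<noteq> []"
    and IH: "prodA 3 (tp 3 x y) (tvec z0) = prodA 3 (tvec x) (tp 3 y z0 :: 'k::field vec)"
  shows "prodA 2 (tp 3 x y) (tvec z) = prodA 2 (tvec x) (tp 2 y z :: 'k vec)"
proof -
  have xy: "x \<noteq> Leaf" "y \<noteq> Leaf" "children x \<noteq> []" "children y \<noteq> []"
    using x y valid_node_children_ne valid_node_not_Leaf by auto
  have "prodA 2 (tp 3 x y) (tvec z) = lin (\<lambda>w. tp 2 w z) (tp 3 x y :: 'k vec)"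
    by (simp add: prodA_tvec_right)
  also have "\<dots> = lin (\<lambda>w. graft_at [] (tp 3 w z0) tz) (tp 3 x y)"
  proof (rule lin_cong)
    fix w assume "w \<in> Poly_Mapping.keys (tp 3 x y :: 'k vec)"
    then have "valid_node w" using keys_tp_valid_node x y valid_node_valid valid_node_not_Leaf by blast
    then show "tp 2 w z = graft_at [] (tp 3 w z0) tz"
      using z by (simp add: tp2_Node valid_node_children_ne valid_node_not_Leaf)
  qed
  also have "\<dots> = graft_at [] (prodA 3 (tp 3 x y) (tvec z0)) tz"
    by (simp add: graft_at_lin prodA_tvec_right)
  also have "\<dots> = graft_at [] (prodA 3 (tvec x) (tp 3 y z0)) tz"
    using IH by simp
  also have "\<dots> = lin (\<lambda>u. graft_at [] (tp 3 x u) tz) (tp 3 y z0)"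
    by (simp add: graft_at_lin prodA_tvec_left)
  also have "\<dots> = prodA 2 (tvec x) (tp 2 y z)"
    using xy z by (simp add: tp_Node_simps prodA_graft_at_right)
  finally show ?thesis .
qed

lemma assoc_succ_dot:
  assumes x: "valid_node x" and y: "y = Node (y0 # bty @ [ly])" and z: "z = Node (z0 # tz)"
  shows "prodA 1 (tp 2 x y) (tvec z) = prodA 2 (tvec x) (tp 1 y z :: 'k::field vec)"
proof -
  have xz: "x \<noteq> Leaf" "children x \<noteq> []"
    using x valid_node_children_ne valid_node_not_Leaf by auto
  have "prodA 1 (tp 2 x y) (tvec z) = lin (\<lambda>t. graft_at (t # bty) (tp 3 ly z0) tz) (tp 3 x y0 :: 'k vec)"
    using xz y z by (simp add: tp_Node_simps prodA_graft_at_left)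
  also have "\<dots> = lin (\<lambda>u. graft_at [] (tp 3 x y0) (bty @ u # tz)) (tp 3 ly z0)"
    by (simp add: graft_at_def, rule lin_swap)
  also have "\<dots> = prodA 2 (tvec x) (tp 1 y z)"
    using xz y z by (simp add: tp_Node_simps prodA_graft_at_right)
  finally show ?thesis .
qed

lemma assoc_prec_dot:
  assumes x: "x = Node (bx @ [xk])" "bx \<noteq> []" and y: "valid_node y" and z: "z = Node (z0 # tz)" "tz \<noteq> []"
    and IH: "prodA 3 (tp 3 xk y) (tvec z0) = prodA 3 (tvec xk) (tp 3 y z0 :: 'k::field vec)"
  shows "prodA 1 (tp 0 x y) (tvec z) = prodA 1 (tvec x) (tp 2 y z :: 'k vec)"
proof -
  have yy: "y \<noteq> Leaf" "children y \<noteq> []"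
    using y valid_node_children_ne valid_node_not_Leaf by auto
  have "prodA 1 (tp 0 x y) (tvec z) = lin (\<lambda>t. graft_at bx (tp 3 t z0) tz) (tp 3 xk y :: 'k vec)"
    using x yy z by (simp add: tp_Node_simps prodA_graft_at_left)
  also have "\<dots> = graft_at bx (prodA 3 (tp 3 xk y) (tvec z0)) tz"
    by (simp add: graft_at_lin prodA_tvec_right)
  also have "\<dots> = graft_at bx (prodA 3 (tvec xk) (tp 3 y z0)) tz"
    using IH by simp
  also have "\<dots> = lin (\<lambda>u. graft_at bx (tp 3 xk u) tz) (tp 3 y z0)"
    by (simp add: graft_at_lin prodA_tvec_left)
  also have "\<dots> = prodA 1 (tvec x) (tp 2 y z)"
    using x yy z by (simp add: tp_Node_simps prodA_graft_at_right)
  finally show ?thesis .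
qed

lemma assoc_dot_prec:
  assumes x: "x = Node (bx @ [xk])" "bx \<noteq> []" and y: "y = Node (y0 # bty @ [ly])" and z: "valid_node z"
  shows "prodA 0 (tp 1 x y) (tvec z) = prodA 1 (tvec x) (tp 0 y z :: 'k::field vec)"
proof -
  have zz: "z \<noteq> Leaf" "children z \<noteq> []"
    using z valid_node_children_ne valid_node_not_Leaf by auto
  have "prodA 0 (tp 1 x y) (tvec z) = lin (\<lambda>t. graft_at (bx @ t # bty) (tp 3 ly z) []) (tp 3 xk y0 :: 'k vec)"
    using x y zz by (simp add: tp_Node_simps prodA_graft_at_left butlast_append last_append)
  also have "\<dots> = lin (\<lambda>u. graft_at bx (tp 3 xk y0) (bty @ [u])) (tp 3 ly z)"
    by (simp add: graft_at_def, rule lin_swap)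
  also have "\<dots> = prodA 1 (tvec x) (tp 0 y z)"
    using x y zz by (simp add: tp_Node_simps prodA_graft_at_right)
  finally show ?thesis .
qed

lemma assoc_dot_dot:
  assumes x: "x = Node (bx @ [xk])" "bx \<noteq> []" and y: "y = Node (y0 # bty @ [ly])" and z: "z = Node (z0 # tz)"
  shows "prodA 1 (tp 1 x y) (tvec z) = prodA 1 (tvec x) (tp 1 y z :: 'k::field vec)"
proof -
  have "prodA 1 (tp 1 x y) (tvec z) = lin (\<lambda>t. graft_at (bx @ t # bty) (tp 3 ly z0) tz) (tp 3 xk y0 :: 'k vec)"
    using x y z by (simp add: tp_Node_simps prodA_graft_at_left butlast_append last_append)
  also have "\<dots> = lin (\<lambda>u. graft_at bx (tp 3 xk y0) (bty @ u # tz)) (tp 3 ly z0)"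
    by (simp add: graft_at_def, rule lin_swap)
  also have "\<dots> = prodA 1 (tvec x) (tp 1 y z)"
    using x y z by (simp add: tp_Node_simps prodA_graft_at_right)
  finally show ?thesis .
qed


lemma tp3_Leaf_eq_tvec: "tp 3 Leaf = tvec"
  by (rule ext) simp

lemma tp3_valid_node: "valid_node x \<Longrightarrow> valid_node y \<Longrightarrow> tp 3 x y = tp 0 x y + tp 1 x y + tp 2 x y"
  using tp3_split valid_node_not_Leaf by blast

lemma star_tp3_tvec_expand:
  assumes x: "valid_node x" and y: "valid_node y" and z: "valid_node z"
  shows "prodA 3 (tp 3 x y) (tvec z) =
      (prodA 0 (tp 0 x y) (tvec z) + prodA 0 (tp 1 x y) (tvec z) + prodA 0 (tp 2 x y) (tvec z))
    + (prodA 1 (tp 0 x y) (tvec z) + prodA 1 (tp 1 x y) (tvec z) + prodA 1 (tp 2 x y) (tvec z))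
    + prodA 2 (tp 3 x y) (tvec z :: 'k::field vec)"
proof -
  have split_z: "prodA 3 (tp 3 x y) (tvec z) = lin (\<lambda>w. tp 0 w z + tp 1 w z + tp 2 w z) (tp 3 x y :: 'k vec)"
    unfolding prodA_tvec_right
    by (intro lin_cong tp3_valid_node z) (use x y keys_tp_valid_node valid_node_def in blast)
  have split_xy: "prodA op (tp 3 x y) (tvec z) =
      prodA op (tp 0 x y) (tvec z) + prodA op (tp 1 x y) (tvec z) + prodA op (tp 2 x y) (tvec z :: 'k vec)" for op
    by (simp only: tp3_valid_node[OF x y] prodA_add_left)
  show ?thesis
    unfolding split_z lin_fadd prodA_tvec_right[symmetric] split_xy[of 0] split_xy[of 1]
    by (simp add: ac_simps)
qed

lemma tvec_star_tp3_expand: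
  assumes x: "valid_node x" and y: "valid_node y" and z: "valid_node z"
  shows "prodA 3 (tvec x) (tp 3 y z) =
      prodA 0 (tvec x) (tp 3 y z)
    + (prodA 1 (tvec x) (tp 0 y z) + prodA 1 (tvec x) (tp 1 y z) + prodA 1 (tvec x) (tp 2 y z))
    + (prodA 2 (tvec x) (tp 0 y z) + prodA 2 (tvec x) (tp 1 y z) + prodA 2 (tvec x) (tp 2 y z :: 'k::field vec))"
proof -
  have split_x: "prodA 3 (tvec x) (tp 3 y z) = lin (\<lambda>w. tp 0 x w + tp 1 x w + tp 2 x w) (tp 3 y z :: 'k vec)"
    unfolding prodA_tvec_left
    by (intro lin_cong tp3_valid_node x) (use y z keys_tp_valid_node valid_node_def in blast)
  have split_yz: "prodA op (tvec x) (tp 3 y z) =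
      prodA op (tvec x) (tp 0 y z) + prodA op (tvec x) (tp 1 y z) + prodA op (tvec x) (tp 2 y z :: 'k vec)" for op
    by (simp only: tp3_valid_node[OF y z] prodA_add_right)
  show ?thesis
    unfolding split_x lin_fadd prodA_tvec_left[symmetric] split_yz[of 1] split_yz[of 2]
    by (simp add: ac_simps)
qed

text \<open>The seven tridendriform axioms add up to associativity of the star product.\<close>

lemma assoc_tree:
  "valid x \<Longrightarrow> valid y \<Longrightarrow> valid z \<Longrightarrow> prodA 3 (tp 3 x y) (tvec z) = prodA 3 (tvec x) (tp 3 y z :: 'k::field vec)"
proof (induction "leaves x + leaves y + leaves z" arbitrary: x y z rule: less_induct)
  case less
  show ?case
  proof (cases "x = Leaf \<or> y = Leaf \<or> z = Leaf")
    case True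
    then show ?thesis
      by (auto simp: prodA_tvec_left prodA_tvec_right lin_id_tvec tp3_Leaf_eq_tvec)
  next
    case False
    then have nx: "valid_node x" and ny: "valid_node y" and nz: "valid_node z"
      using less.prems by (auto simp: valid_node_def)
    obtain bx xk where x: "x = Node (bx @ [xk])" "bx \<noteq> []" "valid xk" "leaves xk < leaves x"
      using valid_node_obtain_last[OF nx] by metis
    obtain y0 bty ly where y: "y = Node (y0 # bty @ [ly])"
      using valid_node_obtain_first_last[OF ny] by metis
    obtain z0 tz where z: "z = Node (z0 # tz)" "tz \<noteq> []" "valid z0" "leaves z0 < leaves z"
      using valid_node_obtain_first[OF nz] by metis
    have IH_xk_y_z: "prodA 3 (tp 3 xk y) (tvec z) = prodA 3 (tvec xk) (tp 3 y z :: 'k vec)"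
      using less x(3,4) by simp
    have IH_x_y_z0: "prodA 3 (tp 3 x y) (tvec z0) = prodA 3 (tvec x) (tp 3 y z0 :: 'k vec)"
      using less z(3,4) by simp
    have IH_xk_y_z0: "prodA 3 (tp 3 xk y) (tvec z0) = prodA 3 (tvec xk) (tp 3 y z0 :: 'k vec)"
      using less x(3,4) z(3,4) by simp
    show ?thesis
      unfolding star_tp3_tvec_expand[OF nx ny nz] tvec_star_tp3_expand[OF nx ny nz]
        assoc_prec_prec[OF x(1,2) ny nz IH_xk_y_z] assoc_succ_prec[OF nx y nz]
        assoc_star_succ[OF nx ny z(1,2) IH_x_y_z0] assoc_succ_dot[OF nx y z(1)]
        assoc_prec_dot[OF x(1,2) ny z(1,2) IH_xk_y_z0] assoc_dot_prec[OF x(1,2) y nz]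
        assoc_dot_dot[OF x(1,2) y z(1)]
      by (simp add: ac_simps)
  qed
qed

lemma prodA_expand_left: "prodA op a b = lin (\<lambda>s. prodA op (tvec s) b) a"
  by (subst (1) lin_id_tvec[symmetric, of a]) (simp only: prodA_lin_left)

lemma prodA_expand_right: "prodA op a b = lin (\<lambda>t. prodA op a (tvec t)) b"
  by (subst (1) lin_id_tvec[symmetric, of b]) (simp only: prodA_lin_right)

lemma AspaceI: "(\<And>t. t \<in> Poly_Mapping.keys a \<Longrightarrow> valid t) \<Longrightarrow> a \<in> Aspace"
  by (auto simp: Aspace_def)

lemma AspaceD: "a \<in> Aspace \<Longrightarrow> t \<in> Poly_Mapping.keys a \<Longrightarrow> valid t"
  by (auto simp: Aspace_def)

lemma tvec_Aspace: "valid t \<Longrightarrow> tvec t \<in> Aspace"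
  by (simp add: Aspace_def)

lemma tp_Aspace: "valid x \<Longrightarrow> valid y \<Longrightarrow> tp op x y \<in> Aspace"
  using keys_tp(1) by (blast intro: AspaceI)

lemma lin_Aspace: "(\<And>x. x \<in> Poly_Mapping.keys a \<Longrightarrow> f x \<in> Aspace) \<Longrightarrow> lin f a \<in> Aspace"
  unfolding Aspace_def mem_Collect_eq by (rule keys_linI) auto

lemma prodA_Aspace: "a \<in> Aspace \<Longrightarrow> b \<in> Aspace \<Longrightarrow> prodA op a b \<in> Aspace"
  unfolding prodA_lin by (intro lin_Aspace tp_Aspace) (auto dest: AspaceD)

lemma unitA_Aspace: "unitA \<in> Aspace"
  by (simp add: unitA_def tvec_Aspace)

lemma star_unit_left [simp]: "prodA 3 unitA a = a"
  by (simp add: unitA_def prodA_tvec_left tp3_Leaf_eq_tvec lin_id_tvec)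

lemma star_unit_right [simp]: "prodA 3 a unitA = a"
  by (simp add: unitA_def prodA_tvec_right lin_id_tvec)

lemma star_assoc:
  assumes "a \<in> Aspace" "b \<in> Aspace" "c \<in> Aspace"
  shows "prodA 3 (prodA 3 a b) c = prodA 3 a (prodA 3 b (c :: 'k::field vec))"
proof -
  have "prodA 3 (prodA 3 a b) c = lin (\<lambda>s. lin (\<lambda>t. prodA 3 (tp 3 s t) c) b) a"
    by (simp only: prodA_lin[of 3 a b] prodA_lin_left)
  also have "\<dots> = lin (\<lambda>s. lin (\<lambda>t. lin (\<lambda>u. prodA 3 (tvec s) (tp 3 t u)) c) b) a"
  proof (intro lin_cong)
    fix s t assume st: "s \<in> Poly_Mapping.keys a" "t \<in> Poly_Mapping.keys b"
    have "prodA 3 (tp 3 s t) c = lin (\<lambda>u. prodA 3 (tp 3 s t) (tvec u)) c"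
      by (rule prodA_expand_right)
    also have "\<dots> = lin (\<lambda>u. prodA 3 (tvec s) (tp 3 t u)) c"
      using assms st by (intro lin_cong) (simp add: assoc_tree AspaceD)
    finally show "prodA 3 (tp 3 s t) c = lin (\<lambda>u. prodA 3 (tvec s) (tp 3 t u)) c" .
  qed
  also have "\<dots> = lin (\<lambda>s. prodA 3 (tvec s) (prodA 3 b c)) a"
    by (simp only: prodA_lin[of 3 b c] prodA_lin_right)
  also have "\<dots> = prodA 3 a (prodA 3 b c)"
    by (rule prodA_expand_left[symmetric])
  finally show ?thesis .
qed

lemma assoc_tree4:
  assumes "valid a" "valid b" "valid c" "valid d"
  shows "prodA 3 (tp 3 a b) (tp 3 c d) = prodA 3 (prodA 3 (tvec a) (tp 3 b c)) (tvec d :: 'k::field vec)"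
proof -
  have "prodA 3 (tp 3 a b) (tp 3 c d) = prodA 3 (prodA 3 (tp 3 a b) (tvec c)) (tvec d :: 'k vec)"
    using assms by (simp add: star_assoc tp_Aspace tvec_Aspace)
  also have "\<dots> = prodA 3 (prodA 3 (tvec a) (tp 3 b c)) (tvec d)"
    using assms by (simp add: assoc_tree)
  finally show ?thesis .
qed

fun star_prod :: "'k::field vec list \<Rightarrow> 'k vec" where
  "star_prod [] = unitA"
| "star_prod (a # as) = prodA 3 a (star_prod as)"

lemma star_prod_Aspace: "\<forall>a\<in>set as. a \<in> Aspace \<Longrightarrow> star_prod as \<in> Aspace"
  by (induction as) (auto simp: unitA_Aspace intro!: prodA_Aspace)

lemma star_prod_append:
  "\<forall>a\<in>set as. a \<in> Aspace \<Longrightarrow> \<forall>b\<in>set bs. b \<in> Aspace \<Longrightarrow>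
    star_prod (as @ bs) = prodA 3 (star_prod as) (star_prod bs :: 'k::field vec)"
  by (induction as) (auto simp: star_assoc star_prod_Aspace)

lemma star_prod_concat:
  "\<forall>as\<in>set ass. \<forall>a\<in>set as. a \<in> Aspace \<Longrightarrow> star_prod (concat ass) = star_prod (map star_prod ass :: 'k::field vec list)"
  by (induction ass) (auto simp: star_prod_append star_prod_Aspace)

lemma Gcut_star_prod: "Gcut C t = star_prod (map tvec (forest C t))"
proof -
  have "foldr (\<lambda>s acc. prodA 3 (tvec s) acc) l unitA = star_prod (map tvec l)" for l :: "tree list"
    by (induction l) simp_all
  then show ?thesis unfolding Gcut_def .
qed

section \<open>Admissible cuts\<close>

lemma ipos_Leaf [simp]: "ipos Leaf = {}"
proof -
  { fix p assume "p \<in> ipos Leaf" then have False by (cases p) (auto simp: ipos_def) }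
  then show ?thesis by blast
qed

lemma ipos_Node: "ipos (Node ts) = insert [] {i # p | i p. i < length ts \<and> p \<in> ipos (ts ! i)}"
proof (intro set_eqI iffI)
  fix q assume "q \<in> ipos (Node ts)"
  then show "q \<in> insert [] {i # p | i p. i < length ts \<and> p \<in> ipos (ts ! i)}"
    by (cases q) (auto simp: ipos_def split: if_splits)
next
  fix q assume "q \<in> insert [] {i # p | i p. i < length ts \<and> p \<in> ipos (ts ! i)}"
  then show "q \<in> ipos (Node ts)"
    by (auto simp: ipos_def)
qed

lemma finite_ipos: "finite (ipos t)"
proof (induction t)
  case Leaf
  then show ?case by simp
next
  case (Node ts)
  have "{i # p | i p. i < length ts \<and> p \<in> ipos (ts ! i)} = (\<Union>i<length ts. (\<lambda>p. i # p) ` ipos (ts ! i))"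
    by auto
  moreover have "finite (\<Union>i<length ts. (\<lambda>p. i # p) ` ipos (ts ! i))"
    using Node by auto
  ultimately show ?case by (simp add: ipos_Node)
qed

definition prefix_free :: "nat list set \<Rightarrow> bool" where
  "prefix_free C \<longleftrightarrow> (\<forall>p\<in>C. \<forall>q\<in>C. p \<noteq> q \<longrightarrow> \<not> (\<exists>r. q = p @ r))"

lemma admissible_cuts_iff: "C \<in> admissible_cuts t \<longleftrightarrow> C \<subseteq> ipos t \<and> prefix_free C"
  by (simp add: admissible_cuts_def prefix_free_def)

lemma finite_admissible_cuts: "finite (admissible_cuts t)"
proof -
  have "admissible_cuts t \<subseteq> Pow (ipos t)" by (auto simp: admissible_cuts_iff)
  then show ?thesis using finite_ipos finite_subset by blast
qed

lemma admissible_cuts_Leaf: "admissible_cuts Leaf = {{}}"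
  by (auto simp: admissible_cuts_iff prefix_free_def)

declare prune.simps [simp del] forest.simps [simp del]

lemma prune_top: "[] \<in> C \<Longrightarrow> prune C t = Leaf"
  by (subst prune.simps) simp

lemma prune_Leaf [simp]: "prune C Leaf = Leaf"
  by (subst prune.simps) simp

lemma prune_Node: "[] \<notin> C \<Longrightarrow> prune C (Node ts) = Node (map (\<lambda>i. prune {p. i # p \<in> C} (ts ! i)) [0..<length ts])"
  by (subst prune.simps) simp

lemma forest_top: "[] \<in> C \<Longrightarrow> forest C t = [t]"
  by (subst forest.simps) simp

lemma forest_Leaf: "[] \<notin> C \<Longrightarrow> forest C Leaf = []"
  by (subst forest.simps) simp

lemma forest_Node: "[] \<notin> C \<Longrightarrow> forest C (Node ts) = concat (map (\<lambda>i. forest {p. i # p \<in> C} (ts ! i)) [0..<length ts])"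
  by (subst forest.simps) simp

lemma prune_empty [simp]: "prune {} t = t"
proof (induction t)
  case Leaf
  then show ?case by simp
next
  case (Node ts)
  have "map (\<lambda>i. prune {} (ts ! i)) [0..<length ts] = map (\<lambda>i. ts ! i) [0..<length ts]"
    using Node by (auto intro!: map_cong)
  then show ?case by (simp add: prune_Node map_nth)
qed

lemma forest_empty [simp]: "forest {} t = []"
proof (induction t)
  case Leaf
  then show ?case by (simp add: forest_Leaf)
next
  case (Node ts)
  then show ?case by (auto simp: forest_Node)
qed

lemma forest_valid: "valid t \<Longrightarrow> s \<in> set (forest C t) \<Longrightarrow> valid s"
proof (induction C t rule: forest.induct)
  case (1 C t)
  show ?case
  proof (cases "[] \<in> C")
    case True
    then show ?thesis using 1 by (simp add: forest_top)
  next
    case False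
    show ?thesis
    proof (cases t)
      case Leaf
      then show ?thesis using 1 False by (simp add: forest_Leaf)
    next
      case (Node ts)
      with 1(3) False obtain i where i: "i < length ts" "s \<in> set (forest {p. i # p \<in> C} (ts ! i))"
        by (auto simp: forest_Node)
      have "valid (ts ! i)" using 1(2) Node i by auto
      then show ?thesis using 1(1)[OF False Node _ _ i(2)] i by simp
    qed
  qed
qed

lemma forest_nonleaf: "C \<subseteq> ipos t \<Longrightarrow> s \<in> set (forest C t) \<Longrightarrow> s \<noteq> Leaf"
proof (induction C t rule: forest.induct)
  case (1 C t)
  show ?case
  proof (cases "[] \<in> C")
    case True
    then have "[] \<in> ipos t" using 1(2) by auto
    then show ?thesis using 1(3) True by (auto simp: forest_top ipos_def)
  next
    case False
    show ?thesis
    proof (cases t)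
      case Leaf
      then show ?thesis using 1 False by (simp add: forest_Leaf)
    next
      case (Node ts)
      with 1(3) False obtain i where i: "i < length ts" "s \<in> set (forest {p. i # p \<in> C} (ts ! i))"
        by (auto simp: forest_Node)
      have "{p. i # p \<in> C} \<subseteq> ipos (ts ! i)" using 1(2) Node by (auto simp: ipos_Node)
      have ii: "i \<in> set [0..<length ts]" using i by simp
      show ?thesis using 1(1)[OF False Node ii \<open>{p. i # p \<in> C} \<subseteq> ipos (ts ! i)\<close> i(2)] .
    qed
  qed
qed

lemma forest_ne: "C \<subseteq> ipos t \<Longrightarrow> p \<in> C \<Longrightarrow> forest C t \<noteq> []"
proof (induction C t arbitrary: p rule: forest.induct)
  case (1 C t)
  show ?case
  proof (cases "[] \<in> C")
    case True
    then show ?thesis by (simp add: forest_top)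
  next
    case False
    show ?thesis
    proof (cases t)
      case Leaf
      then show ?thesis using 1 by auto
    next
      case (Node ts)
      with 1(2,3) False obtain i p' where p: "p = i # p'" "i < length ts" "p' \<in> ipos (ts ! i)"
        by (auto simp: ipos_Node)
      have sub: "{q. i # q \<in> C} \<subseteq> ipos (ts ! i)" using 1(2) Node by (auto simp: ipos_Node)
      have ii: "i \<in> set [0..<length ts]" using p by simp
      have pp: "p' \<in> {q. i # q \<in> C}" using p 1(3) by simp
      have "forest {q. i # q \<in> C} (ts ! i) \<noteq> []"
        using 1(1)[OF False Node ii sub pp] .
      then show ?thesis using Node False p(2) by (auto simp: forest_Node)
    qed
  qed
qed

lemma map_upt_eq_map2:
  "length xs = length ys \<Longrightarrow> map (\<lambda>i. f (xs ! i) (ys ! i)) [0..<length ys] = map2 f xs ys"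
  by (rule nth_equalityI) simp_all

lemma in_listset_iff: "xs \<in> listset As \<longleftrightarrow> list_all2 (\<in>) xs As"
  by (induction As arbitrary: xs) (auto simp: set_Cons_def list_all2_Cons2)

lemma listset_Cons_image: "listset (A # As) = (\<lambda>(a, xs). a # xs) ` (A \<times> listset As)"
  by (auto simp: set_Cons_def)

lemma finite_listset: "\<forall>A\<in>set As. finite A \<Longrightarrow> finite (listset As)"
  by (induction As) (simp_all add: listset_Cons_image del: listset.simps(2))

lemma sum_listset_Cons:
  assumes "finite A" "\<forall>B\<in>set As. finite B"
  shows "sum f (listset (A # As)) = (\<Sum>a\<in>A. \<Sum>xs\<in>listset As. f (a # xs))"
proof -
  have "inj_on (\<lambda>(a, xs). a # xs) (A \<times> listset As)" by (auto simp: inj_on_def)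
  then have "sum f (listset (A # As)) = sum (f \<circ> (\<lambda>(a, xs). a # xs)) (A \<times> listset As)"
    unfolding listset_Cons_image by (rule sum.reindex)
  also have "\<dots> = (\<Sum>x\<in>A \<times> listset As. f (fst x # snd x))"
    by (simp add: case_prod_beta comp_def)
  also have "\<dots> = (\<Sum>a\<in>A. \<Sum>xs\<in>listset As. f (a # xs))"
    using assms finite_listset by (simp add: sum.cartesian_product case_prod_beta)
  finally show ?thesis .
qed

definition join_cuts :: "nat list set list \<Rightarrow> nat list set" where
  "join_cuts cs = {i # p | i p. i < length cs \<and> p \<in> cs ! i}"

lemma join_cuts_nth: "i < length cs \<Longrightarrow> {p. i # p \<in> join_cuts cs} = cs ! i"
  by (auto simp: join_cuts_def)

lemma join_cuts_Nil: "[] \<notin> join_cuts cs"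
  by (auto simp: join_cuts_def)

lemma inj_on_join_cuts: "inj_on join_cuts (listset As)"
proof (rule inj_onI)
  fix cs ds assume a: "cs \<in> listset As" "ds \<in> listset As" "join_cuts cs = join_cuts ds"
  then have l: "length cs = length ds" by (metis in_listset_iff list_all2_lengthD)
  have "cs ! i = ds ! i" if "i < length cs" for i
    using join_cuts_nth[of i cs] join_cuts_nth[of i ds] that l a(3) by simp
  then show "cs = ds" using l by (simp add: nth_equalityI)
qed

lemma join_cuts_admissible:
  assumes "cs \<in> listset (map admissible_cuts ts)"
  shows "join_cuts cs \<in> admissible_cuts (Node ts) - {{[]}}"
proof -
  from assms have l: "length cs = length ts"
    and ci: "\<And>i. i < length ts \<Longrightarrow> cs ! i \<subseteq> ipos (ts ! i) \<and> prefix_free (cs ! i)"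
    by (auto simp: in_listset_iff list_all2_conv_all_nth simp flip: admissible_cuts_iff)
  have "join_cuts cs \<subseteq> ipos (Node ts)"
    using ci l by (auto simp: join_cuts_def ipos_Node)
  moreover have "prefix_free (join_cuts cs)"
  proof (unfold prefix_free_def, intro ballI impI notI)
    fix p q assume pq: "p \<in> join_cuts cs" "q \<in> join_cuts cs" "p \<noteq> q" "\<exists>r. q = p @ r"
    from pq(1) obtain i p' where p: "p = i # p'" "i < length cs" "p' \<in> cs ! i"
      by (auto simp: join_cuts_def)
    from pq(2) obtain j q' where q: "q = j # q'" "q' \<in> cs ! j"
      by (auto simp: join_cuts_def)
    from pq(4) p q obtain r where "j = i" "q' = p' @ r" by auto
    with p q pq(3) have "p' \<in> cs ! i" "p' @ r \<in> cs ! i" "p' \<noteq> p' @ r" by auto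
    moreover have "prefix_free (cs ! i)" using ci p(2) l by simp
    ultimately show False unfolding prefix_free_def by blast
  qed
  ultimately show ?thesis using join_cuts_Nil by (auto simp: admissible_cuts_iff)
qed

lemma admissible_cut_eq_join_cuts:
  assumes "C \<in> admissible_cuts (Node ts) - {{[]}}"
  shows "C = join_cuts (map (\<lambda>i. {p. i # p \<in> C}) [0..<length ts])"
    and "map (\<lambda>i. {p. i # p \<in> C}) [0..<length ts] \<in> listset (map admissible_cuts ts)"
proof -
  from assms have sub: "C \<subseteq> ipos (Node ts)" and pf: "prefix_free C" and ne: "C \<noteq> {[]}"
    by (auto simp: admissible_cuts_iff)
  have "[] \<notin> C"
  proof
    assume "[] \<in> C"
    with ne obtain q where "q \<in> C" "q \<noteq> []" by blast
    with pf \<open>[] \<in> C\<close> show False unfolding prefix_free_def by (metis append_Nil)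
  qed
  with sub show "C = join_cuts (map (\<lambda>i. {p. i # p \<in> C}) [0..<length ts])"
    by (auto simp: join_cuts_def ipos_Node)
  have "{p. i # p \<in> C} \<in> admissible_cuts (ts ! i)" if "i < length ts" for i
  proof -
    have "prefix_free {p. i # p \<in> C}"
      using pf unfolding prefix_free_def by (metis (no_types, lifting) append_Cons list.inject mem_Collect_eq)
    with sub show ?thesis by (auto simp: admissible_cuts_iff ipos_Node)
  qed
  then show "map (\<lambda>i. {p. i # p \<in> C}) [0..<length ts] \<in> listset (map admissible_cuts ts)"
    by (simp add: in_listset_iff list_all2_conv_all_nth)
qed

lemma join_cuts_image:
  "join_cuts ` listset (map admissible_cuts ts) = admissible_cuts (Node ts) - {{[]}}"
proof (intro subset_antisym subsetI)
  fix C assume "C \<in> join_cuts ` listset (map admissible_cuts ts)"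
  then show "C \<in> admissible_cuts (Node ts) - {{[]}}" using join_cuts_admissible by blast
next
  fix C assume C: "C \<in> admissible_cuts (Node ts) - {{[]}}"
  show "C \<in> join_cuts ` listset (map admissible_cuts ts)"
    using admissible_cut_eq_join_cuts[OF C] by (rule image_eqI)
qed

lemma Pcut_join_cuts:
  assumes "cs \<in> listset (map admissible_cuts ts)"
  shows "Pcut (join_cuts cs) (Node ts) = Node (map2 Pcut cs ts)"
proof -
  have l: "length cs = length ts"
    using assms by (auto simp: in_listset_iff dest: list_all2_lengthD)
  then have "map (\<lambda>i. prune {p. i # p \<in> join_cuts cs} (ts ! i)) [0..<length ts] = map2 prune cs ts"
    by (simp add: join_cuts_nth flip: map_upt_eq_map2)
  then show ?thesis
    by (simp add: Pcut_def prune_Node join_cuts_Nil Pcut_def[abs_def])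
qed

lemma Gcut_join_cuts:
  assumes "valid (Node ts)" "cs \<in> listset (map admissible_cuts ts)"
  shows "Gcut (join_cuts cs) (Node ts) = (star_prod (map2 Gcut cs ts) :: 'k::field vec)"
proof -
  have l: "length cs = length ts"
    using assms by (auto simp: in_listset_iff dest: list_all2_lengthD)
  then have "map (\<lambda>i. forest {p. i # p \<in> join_cuts cs} (ts ! i)) [0..<length ts] = map2 forest cs ts"
    by (simp add: join_cuts_nth flip: map_upt_eq_map2)
  then have "forest (join_cuts cs) (Node ts) = concat (map2 forest cs ts)"
    by (simp add: forest_Node join_cuts_Nil)
  moreover have "\<forall>l\<in>set (map2 forest cs ts). \<forall>s\<in>set l. valid s"
    using assms(1) by (auto dest!: set_zip_rightD intro: forest_valid)
  ultimately show ?thesis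
    by (simp add: Gcut_star_prod map_concat star_prod_concat tvec_Aspace Gcut_star_prod[abs_def] comp_def split_def)
qed

section \<open>The recursive formula for the coproduct\<close>

text \<open>A basis element (G, [P_1, ..., P_k]) of fvec stands for G \<otimes> [P_1, ..., P_k]: the pruned
  subtrees are kept apart until node_right grafts them onto a common root.\<close>

type_synonym 'k fvec = "(tree \<times> tree list) \<Rightarrow>\<^sub>0 'k"


definition fmult :: "'k::field fvec \<Rightarrow> 'k fvec \<Rightarrow> 'k fvec" where
  "fmult E E' = lin (\<lambda>u. lin (\<lambda>v. tens (tp 3 (fst u) (fst v)) (Poly_Mapping.single (snd u @ snd v) 1)) E') E"

definition forest_of :: "'k::field vec2 \<Rightarrow> 'k fvec" where
  "forest_of P = lin (\<lambda>u. Poly_Mapping.single (fst u, [snd u]) 1) P"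

definition node_right :: "'k::field fvec \<Rightarrow> 'k vec2" where
  "node_right E = lin (\<lambda>u. Poly_Mapping.single (fst u, Node (snd u)) 1) E"

fun Delta_forest :: "tree list \<Rightarrow> 'k::field fvec" where
  "Delta_forest [] = Poly_Mapping.single (Leaf, []) 1"
| "Delta_forest (t # ts) = fmult (forest_of (Delta_tree t)) (Delta_forest ts)"

lemma fmult_tens:
  "fmult (tens a (Poly_Mapping.single ps 1)) (tens b (Poly_Mapping.single qs 1)) = tens (prodA 3 a b) (Poly_Mapping.single (ps @ qs) 1)"
  by (simp add: fmult_def lin_tens prodA_lin tens_lin_left)

lemma fmult_sum_left: "fmult (sum f I) E = (\<Sum>i\<in>I. fmult (f i) E)"
  by (simp add: fmult_def lin_sum)

lemma fmult_sum_right: "fmult E (sum f I) = (\<Sum>i\<in>I. fmult E (f i))"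
  by (simp add: fmult_def lin_sum lin_fsum)

lemma forest_of_sum: "forest_of (sum f I) = (\<Sum>i\<in>I. forest_of (f i))"
  by (simp add: forest_of_def lin_sum)

lemma node_right_sum: "node_right (sum f I) = (\<Sum>i\<in>I. node_right (f i))"
  by (simp add: node_right_def lin_sum)

lemma forest_of_tens: "forest_of (tens a (tvec p)) = tens a (Poly_Mapping.single [p] 1)"
  by (simp add: forest_of_def lin_tens tens_single_right)

lemma node_right_tens: "node_right (tens a (Poly_Mapping.single ps 1)) = tens a (tvec (Node ps))"
  by (simp add: node_right_def tens_single_right tvec_def lin_lin)

lemma tens_unit_single: "tens unitA (Poly_Mapping.single q 1) = Poly_Mapping.single (Leaf, q) 1"
  by (simp add: unitA_def tens_single_right)

lemma Delta_tree_Leaf: "Delta_tree Leaf = tens unitA unitA"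
  by (simp add: Delta_tree_def)

lemma Delta_tree_cut_sum: "Delta_tree t = (\<Sum>C\<in>admissible_cuts t. tens (Gcut C t) (tvec (Pcut C t)))"
  by (cases "t = Leaf") (simp_all add: Delta_tree_def admissible_cuts_Leaf Gcut_star_prod Pcut_def unitA_def)

lemma Delta_forest_cut_sum:
  "Delta_forest ts = (\<Sum>cs\<in>listset (map admissible_cuts ts).
     tens (star_prod (map2 Gcut cs ts)) (Poly_Mapping.single (map2 Pcut cs ts) 1) :: 'k::field fvec)"
proof (induction ts)
  case Nil
  then show ?case by (simp add: tens_unit_single)
next
  case (Cons t ts)
  have "(\<Sum>cs\<in>listset (map admissible_cuts (t # ts)).
      tens (star_prod (map2 Gcut cs (t # ts))) (Poly_Mapping.single (map2 Pcut cs (t # ts)) 1) :: 'k fvec)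
    = (\<Sum>c\<in>admissible_cuts t. \<Sum>cs\<in>listset (map admissible_cuts ts).
      fmult (forest_of (tens (Gcut c t) (tvec (Pcut c t))))
        (tens (star_prod (map2 Gcut cs ts)) (Poly_Mapping.single (map2 Pcut cs ts) 1)))"
    by (simp add: sum_listset_Cons finite_admissible_cuts forest_of_tens fmult_tens del: listset.simps(2))
  also have "\<dots> = fmult (forest_of (Delta_tree t)) (Delta_forest ts)"
    by (simp add: Cons Delta_tree_cut_sum forest_of_sum fmult_sum_left fmult_sum_right; rule sum.swap)
  finally show ?case by simp
qed

theorem Delta_tree_Node:
  assumes v: "valid (Node ts)"
  shows "Delta_tree (Node ts) = Poly_Mapping.single (Node ts, Leaf) 1 + node_right (Delta_forest ts :: 'k::field fvec)"
proof -
  let ?f = "\<lambda>C. tens (Gcut C (Node ts)) (tvec (Pcut C (Node ts))) :: 'k vec2"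
  have "{[]} \<in> admissible_cuts (Node ts)"
    by (simp add: admissible_cuts_iff ipos_Node prefix_free_def)
  then have "Delta_tree (Node ts) = ?f {[]} + sum ?f (admissible_cuts (Node ts) - {{[]}})"
    unfolding Delta_tree_cut_sum using finite_admissible_cuts by (simp add: sum.remove)
  also have "?f {[]} = Poly_Mapping.single (Node ts, Leaf) 1"
    by (simp add: Gcut_star_prod Pcut_def forest_top prune_top)
  also have "sum ?f (admissible_cuts (Node ts) - {{[]}}) = sum (?f \<circ> join_cuts) (listset (map admissible_cuts ts))"
    by (simp only: join_cuts_image[symmetric] sum.reindex[OF inj_on_join_cuts])
  also have "\<dots> = node_right (Delta_forest ts)"
    unfolding Delta_forest_cut_sum node_right_sum
    by (intro sum.cong refl) (simp add: node_right_tens Pcut_join_cuts Gcut_join_cuts[OF v])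
  finally show ?thesis .
qed

lemma keys_tens: "Poly_Mapping.keys (tens a b) \<subseteq> Poly_Mapping.keys a \<times> Poly_Mapping.keys b"
  unfolding tens_lin by (intro keys_linI) (auto dest: keys_lin[THEN subsetD])

lemma keys_fmult: "Poly_Mapping.keys (fmult (A :: 'k::field fvec) B) \<subseteq>
   {(h, ps @ qs) | g ps G qs h. (g, ps) \<in> Poly_Mapping.keys A \<and> (G, qs) \<in> Poly_Mapping.keys B \<and> h \<in> Poly_Mapping.keys (tp 3 g G :: 'k vec)}"
proof
  fix x assume "x \<in> Poly_Mapping.keys (fmult A B)"
  then have "x \<in> (\<Union>u\<in>Poly_Mapping.keys A. Poly_Mapping.keys (lin (\<lambda>v. tens (tp 3 (fst u) (fst v) :: 'k vec) (Poly_Mapping.single (snd u @ snd v) 1)) B))"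
    unfolding fmult_def by (rule keys_lin[THEN subsetD])
  then obtain u where u: "u \<in> Poly_Mapping.keys A"
    "x \<in> Poly_Mapping.keys (lin (\<lambda>v. tens (tp 3 (fst u) (fst v) :: 'k vec) (Poly_Mapping.single (snd u @ snd v) 1)) B)"
    by (rule UN_E)
  then have "x \<in> (\<Union>v\<in>Poly_Mapping.keys B. Poly_Mapping.keys (tens (tp 3 (fst u) (fst v) :: 'k vec) (Poly_Mapping.single (snd u @ snd v) (1::'k))))"
    by (intro keys_lin[THEN subsetD])
  then obtain v where v: "v \<in> Poly_Mapping.keys B"
    "x \<in> Poly_Mapping.keys (tens (tp 3 (fst u) (fst v) :: 'k vec) (Poly_Mapping.single (snd u @ snd v) (1::'k)))"
    by (rule UN_E)
  from keys_tens[THEN subsetD, OF v(2)] have "fst x \<in> Poly_Mapping.keys (tp 3 (fst u) (fst v) :: 'k vec)" "snd x = snd u @ snd v"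
    by auto
  then show "x \<in> {(h, ps @ qs) | g ps G qs h. (g, ps) \<in> Poly_Mapping.keys A \<and> (G, qs) \<in> Poly_Mapping.keys B \<and> h \<in> Poly_Mapping.keys (tp 3 g G :: 'k vec)}"
    using u(1) v(1) by (intro CollectI exI[of _ "fst u"] exI[of _ "snd u"] exI[of _ "fst v"] exI[of _ "snd v"] exI[of _ "fst x"]) (auto simp: prod_eq_iff)
qed

lemma keys_forest_of: "Poly_Mapping.keys (forest_of P) \<subseteq> {(g, [p]) | g p. (g, p) \<in> Poly_Mapping.keys P}"
  unfolding forest_of_def by (intro keys_linI) auto

lemma keys_node_right: "Poly_Mapping.keys (node_right E) \<subseteq> {(g, Node ps) | g ps. (g, ps) \<in> Poly_Mapping.keys E}"
  unfolding node_right_def by (intro keys_linI) auto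

definition forest_keys_inv :: "tree list \<Rightarrow> 'k::field fvec \<Rightarrow> bool" where
  "forest_keys_inv ts E \<longleftrightarrow> (\<forall>(g, ps)\<in>Poly_Mapping.keys E. valid g \<and> length ps = length ts \<and> (\<forall>p\<in>set ps. valid p) \<and>
      leaves g + sum_list (map leaves ps) = sum_list (map leaves ts) + 1)"

definition tree_keys_inv :: "tree \<Rightarrow> 'k::field vec2 \<Rightarrow> bool" where
  "tree_keys_inv t P \<longleftrightarrow> (\<forall>(g, p)\<in>Poly_Mapping.keys P. valid g \<and> valid p \<and> leaves g + leaves p = leaves t + 1)"

lemma forest_keys_inv_Nil: "forest_keys_inv [] (Delta_forest [] :: 'k::field fvec)"
  by (simp add: forest_keys_inv_def)

lemma forest_keys_inv_Cons:
  assumes "tree_keys_inv t (Delta_tree t :: 'k::field vec2)" "forest_keys_inv ts (Delta_forest ts :: 'k fvec)"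
  shows "forest_keys_inv (t # ts) (Delta_forest (t # ts) :: 'k fvec)"
  unfolding forest_keys_inv_def
proof (intro ballI)
  fix u assume "u \<in> Poly_Mapping.keys (Delta_forest (t # ts) :: 'k fvec)"
  then obtain g ps G qs h where u: "u = (h, ps @ qs)" "(g, ps) \<in> Poly_Mapping.keys (forest_of (Delta_tree t) :: 'k fvec)"
    "(G, qs) \<in> Poly_Mapping.keys (Delta_forest ts :: 'k fvec)" "h \<in> Poly_Mapping.keys (tp 3 g G :: 'k vec)"
    using keys_fmult by fastforce
  from u(2) obtain p where p: "ps = [p]" "(g, p) \<in> Poly_Mapping.keys (Delta_tree t :: 'k vec2)"
    using keys_forest_of by blast
  from assms(1) p have g: "valid g" "valid p" "leaves g + leaves p = leaves t + 1"
    by (auto simp: tree_keys_inv_def)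
  from assms(2) u(3) have G: "valid G" "length qs = length ts" "\<forall>p\<in>set qs. valid p"
    "leaves G + sum_list (map leaves qs) = sum_list (map leaves ts) + 1"
    by (auto simp: forest_keys_inv_def)
  from keys_tp[OF g(1) G(1) u(4)] have h: "valid h" "leaves h + 1 = leaves g + leaves G" by auto
  show "case u of (g, ps) \<Rightarrow> valid g \<and> length ps = length (t # ts) \<and> (\<forall>p\<in>set ps. valid p) \<and>
      leaves g + sum_list (map leaves ps) = sum_list (map leaves (t # ts)) + 1"
    using u(1) p(1) g G h by auto
qed

lemma forest_keys_inv_of_tree: "(\<And>t. t \<in> set ts \<Longrightarrow> tree_keys_inv t (Delta_tree t :: 'k::field vec2)) \<Longrightarrow> forest_keys_inv ts (Delta_forest ts :: 'k fvec)"
proof (induction ts)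
  case Nil
  show ?case by (rule forest_keys_inv_Nil)
next
  case (Cons a ts)
  then show ?case by (intro forest_keys_inv_Cons) auto
qed

lemma tree_keys_inv_Delta: "valid t \<Longrightarrow> tree_keys_inv t (Delta_tree t :: 'k::field vec2)"
proof (induction t)
  case Leaf
  then show ?case by (simp add: Delta_tree_Leaf tree_keys_inv_def unitA_def)
next
  case (Node ts)
  have KFts: "forest_keys_inv ts (Delta_forest ts :: 'k fvec)"
    using Node by (intro forest_keys_inv_of_tree) auto
  show ?case unfolding tree_keys_inv_def
  proof (intro ballI)
    fix u assume "u \<in> Poly_Mapping.keys (Delta_tree (Node ts) :: 'k vec2)"
    moreover have e: "Delta_tree (Node ts) = Poly_Mapping.single (Node ts, Leaf) (1::'k) + node_right (Delta_forest ts)"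
      using Delta_tree_Node[OF Node.prems] .
    ultimately have "u \<in> Poly_Mapping.keys (Poly_Mapping.single (Node ts, Leaf) (1::'k)) \<or> u \<in> Poly_Mapping.keys (node_right (Delta_forest ts :: 'k fvec))"
      by (simp only: e in_keys_addD)
    then show "case u of (g, p) \<Rightarrow> valid g \<and> valid p \<and> leaves g + leaves p = leaves (Node ts) + 1"
    proof
      assume "u \<in> Poly_Mapping.keys (Poly_Mapping.single (Node ts, Leaf) (1::'k))"
      then show ?thesis using Node.prems by auto
    next
      assume "u \<in> Poly_Mapping.keys (node_right (Delta_forest ts :: 'k fvec))"
      then obtain g ps where "u = (g, Node ps)" "(g, ps) \<in> Poly_Mapping.keys (Delta_forest ts :: 'k fvec)"
        using keys_node_right by blast
      with KFts Node.prems show ?thesis by (auto simp: forest_keys_inv_def)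
    qed
  qed
qed

lemma forest_keys_inv_Delta: "\<forall>t\<in>set ts. valid t \<Longrightarrow> forest_keys_inv ts (Delta_forest ts :: 'k::field fvec)"
proof (induction ts)
  case Nil
  show ?case by (rule forest_keys_inv_Nil)
next
  case (Cons a ts)
  then show ?case by (intro forest_keys_inv_Cons tree_keys_inv_Delta) auto
qed

lemma keys_Delta_tree:
  assumes "valid t" "(g, p) \<in> Poly_Mapping.keys (Delta_tree t :: 'k::field vec2)"
  shows "valid g" "valid p" "leaves g + leaves p = leaves t + 1"
  using tree_keys_inv_Delta[OF assms(1), where 'k='k] assms(2) by (auto simp: tree_keys_inv_def)

lemma keys_Delta_forest:
  assumes "\<forall>t\<in>set ts. valid t" "(g, ps) \<in> Poly_Mapping.keys (Delta_forest ts :: 'k::field fvec)"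
  shows "valid g" "length ps = length ts" "\<forall>p\<in>set ps. valid p"
    "leaves g + sum_list (map leaves ps) = sum_list (map leaves ts) + 1"
  using forest_keys_inv_Delta[OF assms(1), where 'k='k] assms(2) by (auto simp: forest_keys_inv_def)

lemma fmult_lin_left: "fmult (lin f E) E' = lin (\<lambda>u. fmult (f u) E') E"
  by (simp add: fmult_def lin_lin)

lemma fmult_lin_right: "fmult E (lin f E') = lin (\<lambda>v. fmult E (f v)) E'"
proof -
  have "fmult E (lin f E') = lin (\<lambda>u. lin (\<lambda>v. lin (\<lambda>w. tens (tp 3 (fst u) (fst w)) (Poly_Mapping.single (snd u @ snd w) 1)) (f v)) E') E"
    by (simp add: fmult_def lin_lin)
  also have "\<dots> = lin (\<lambda>v. lin (\<lambda>u. lin (\<lambda>w. tens (tp 3 (fst u) (fst w)) (Poly_Mapping.single (snd u @ snd w) 1)) (f v)) E) E'"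
    by (rule lin_swap)
  finally show ?thesis by (simp add: fmult_def)
qed

lemma single_pair_tens: "Poly_Mapping.single (g, ps) (1::'k::field) = tens (tvec g) (Poly_Mapping.single ps 1)"
  by (simp add: tens_single_right)

lemma fmult_single: "fmult (Poly_Mapping.single u 1) (Poly_Mapping.single v 1) =
   tens (tp 3 (fst u) (fst v)) (Poly_Mapping.single (snd u @ snd v) (1::'k::field))"
  by (simp add: fmult_def)

lemma fmult_unit_left: "fmult (Poly_Mapping.single (Leaf, []) 1) E = (E :: 'k::field fvec)"
proof -
  have "fmult (Poly_Mapping.single (Leaf, []) 1) E = lin (\<lambda>v. Poly_Mapping.single v 1) E"
    by (simp add: fmult_def tp3_Leaf_eq_tvec tens_tvec single_pair_tens[symmetric])
  then show ?thesis by (simp add: lin_id)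
qed

definition valid_heads :: "'k::field fvec \<Rightarrow> bool" where
  "valid_heads E \<longleftrightarrow> (\<forall>u\<in>Poly_Mapping.keys E. valid (fst u))"

lemma fmult_expand_left: "fmult X Y = lin (\<lambda>a. fmult (Poly_Mapping.single a 1) Y) X"
proof -
  have "fmult X Y = fmult (lin (\<lambda>a. Poly_Mapping.single a 1) X) Y" by (simp add: lin_id)
  then show ?thesis by (simp only: fmult_lin_left)
qed

lemma fmult_expand_right: "fmult X Y = lin (\<lambda>b. fmult X (Poly_Mapping.single b 1)) Y"
proof -
  have "fmult X Y = fmult X (lin (\<lambda>a. Poly_Mapping.single a 1) Y)" by (simp add: lin_id)
  then show ?thesis by (simp only: fmult_lin_right)
qed

lemma fmult_assoc:
  assumes "valid_heads A" "valid_heads B" "valid_heads (C :: 'k::field fvec)"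
  shows "fmult (fmult A B) C = fmult A (fmult B C)"
proof -
  let ?s = "\<lambda>a. Poly_Mapping.single a (1::'k)"
  have e1: "fmult A B = lin (\<lambda>a. lin (\<lambda>b. fmult (?s a) (?s b)) B) A"
    by (simp add: fmult_def fmult_single)
  have e2: "fmult B C = lin (\<lambda>b. lin (\<lambda>c. fmult (?s b) (?s c)) C) B"
    by (simp add: fmult_def fmult_single)
  have "fmult (fmult A B) C = lin (\<lambda>a. lin (\<lambda>b. fmult (fmult (?s a) (?s b)) C) B) A"
    unfolding e1 by (simp only: fmult_lin_left)
  also have "\<dots> = lin (\<lambda>a. lin (\<lambda>b. lin (\<lambda>c. fmult (fmult (?s a) (?s b)) (?s c)) C) B) A"
    by (subst fmult_expand_right) (rule refl)
  also have "\<dots> = lin (\<lambda>a. lin (\<lambda>b. lin (\<lambda>c. fmult (?s a) (fmult (?s b) (?s c))) C) B) A"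
  proof (intro lin_cong)
    fix a b c assume abc: "a \<in> Poly_Mapping.keys A" "b \<in> Poly_Mapping.keys B" "c \<in> Poly_Mapping.keys C"
    have v: "valid (fst a)" "valid (fst b)" "valid (fst c)" using assms abc by (auto simp: valid_heads_def)
    show "fmult (fmult (?s a) (?s b)) (?s c) = fmult (?s a) (fmult (?s b) (?s c))"
      using assoc_tree[OF v, where 'k='k]
      by (cases a; cases b; cases c) (simp add: single_pair_tens fmult_tens)
  qed
  also have "\<dots> = lin (\<lambda>a. fmult (?s a) (fmult B C)) A"
    unfolding e2 by (simp only: fmult_lin_right)
  also have "\<dots> = fmult A (fmult B C)"
    by (rule fmult_expand_left[symmetric])
  finally show ?thesis .
qed

lemma valid_heads_Delta_forest: "\<forall>t\<in>set ts. valid t \<Longrightarrow> valid_heads (Delta_forest ts :: 'k::field fvec)"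
  using keys_Delta_forest(1) by (fastforce simp: valid_heads_def)

lemma valid_heads_forest_of: "valid t \<Longrightarrow> valid_heads (forest_of (Delta_tree t :: 'k::field vec2))"
  unfolding valid_heads_def using keys_forest_of keys_Delta_tree(1) by fastforce

lemma Delta_forest_append: "\<forall>t\<in>set as. valid t \<Longrightarrow> \<forall>t\<in>set bs. valid t \<Longrightarrow> Delta_forest (as @ bs) = fmult (Delta_forest as) (Delta_forest bs :: 'k::field fvec)"
proof (induction as)
  case Nil
  then show ?case by (simp add: fmult_unit_left)
next
  case (Cons a as)
  then show ?case by (simp add: fmult_assoc valid_heads_Delta_forest valid_heads_forest_of)
qed

lemma Delta_forest_hole:
  assumes "\<forall>t\<in>set pre. valid t" "valid t" "\<forall>t\<in>set post. valid t"
  shows "Delta_forest (pre @ t # post) = fmult (fmult (Delta_forest pre) (forest_of (Delta_tree t))) (Delta_forest post :: 'k::field fvec)"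
proof -
  have "Delta_forest (pre @ t # post) = fmult (Delta_forest pre) (fmult (forest_of (Delta_tree t)) (Delta_forest post) :: 'k fvec)"
    using assms by (simp add: Delta_forest_append)
  also have "\<dots> = fmult (fmult (Delta_forest pre) (forest_of (Delta_tree t))) (Delta_forest post)"
    using assms by (simp add: fmult_assoc valid_heads_Delta_forest valid_heads_forest_of)
  finally show ?thesis .
qed

lemma Delta_cut_lin_ext: "Delta_cut (lin f v) = lin (\<lambda>t. Delta_cut (f t)) v"
  by (simp add: Delta_cut_lin lin_lin)

lemma Delta_cut_tvec [simp]: "Delta_cut (tvec t) = Delta_tree t"
  by (simp add: Delta_cut_lin)

lemma forest_of_lin: "forest_of (lin f P) = lin (\<lambda>u. forest_of (f u)) P"
  by (simp add: forest_of_def lin_lin)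

lemma node_right_lin: "node_right (lin f E) = lin (\<lambda>u. node_right (f u)) E"
  by (simp add: node_right_def lin_lin)

lemma barprod_lin_left: "barprod op (lin f P) Q = lin (\<lambda>u. barprod op (f u) Q) P"
  by (simp add: barprod_lin lin_lin)

lemma barprod_lin_right: "barprod op P (lin f Q) = lin (\<lambda>v. barprod op P (f v)) Q"
proof -
  have "barprod op P (lin f Q) = lin (\<lambda>u. lin (\<lambda>v. lin (\<lambda>w. bar_basis op u w) (f v)) Q) P"
    by (simp add: barprod_lin lin_lin)
  also have "\<dots> = lin (\<lambda>v. lin (\<lambda>u. lin (\<lambda>w. bar_basis op u w) (f v)) P) Q"
    by (rule lin_swap)
  finally show ?thesis by (simp add: barprod_lin)
qed

lemma barprod_add_left: "barprod op (P + P') Q = barprod op P Q + barprod op P' Q"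
  by (simp add: barprod_lin lin_add)

lemma barprod_add_right: "barprod op P (Q + Q') = barprod op P Q + barprod op P Q'"
  by (simp add: barprod_lin lin_add lin_fadd)

lemma barprod_single_left: "barprod op (Poly_Mapping.single u 1) Q = lin (\<lambda>v. bar_basis op u v) Q"
  by (simp add: barprod_lin)

lemma barprod_node_right_left: "barprod op (node_right E) Q = lin (\<lambda>e. lin (\<lambda>v. bar_basis op (fst e, Node (snd e)) v) Q) E"
  by (simp add: node_right_def barprod_lin_left barprod_single_left)

lemma lin_node_right: "lin h (node_right E) = lin (\<lambda>e. h (fst e, Node (snd e))) E"
  by (simp add: node_right_def lin_lin)

lemma bar_basis_Leaf_Leaf: "x \<noteq> Leaf \<Longrightarrow> y \<noteq> Leaf \<Longrightarrow> bar_basis op (x, Leaf) (y, Leaf) = tens (tp op x y) unitA"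
  by (simp add: bar_basis_def)

lemma bar_basis_nonleaf: "b \<noteq> Leaf \<or> d \<noteq> Leaf \<Longrightarrow> bar_basis op (a, b) (c, d) = tens (tp 3 a c) (tp op b d)"
  by (auto simp: bar_basis_def)

section \<open>Compatibility with the products\<close>

lemma Delta_tree_hole:
  assumes "\<forall>s\<in>set pre. valid s" "valid t" "\<forall>s\<in>set post. valid s" "pre @ post \<noteq> []"
  shows "Delta_tree (Node (pre @ t # post)) = Poly_Mapping.single (Node (pre @ t # post), Leaf) 1
     + node_right (fmult (fmult (Delta_forest pre) (forest_of (Delta_tree t))) (Delta_forest post) :: 'k::field fvec)"
proof -
  have "valid (Node (pre @ t # post))" using assms by (cases pre; cases post) auto
  from Delta_tree_Node[OF this, where 'k='k] show ?thesis using Delta_forest_hole[OF assms(1-3), where 'k='k] by simp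
qed

lemma Delta_cut_graft_at:
  assumes "\<forall>s\<in>set pre. valid s" "v \<in> Aspace" "\<forall>s\<in>set post. valid s" "pre @ post \<noteq> []"
  shows "Delta_cut (graft_at pre v post) = tens (graft_at pre v post) unitA
     + node_right (fmult (fmult (Delta_forest pre) (forest_of (Delta_cut v))) (Delta_forest post) :: 'k::field fvec)"
proof -
  have "Delta_cut (graft_at pre v post) = lin (\<lambda>t. Delta_tree (Node (pre @ t # post))) v"
    by (simp add: graft_at_def Delta_cut_lin_ext)
  also have "\<dots> = lin (\<lambda>t. Poly_Mapping.single (Node (pre @ t # post), Leaf) 1
     + node_right (fmult (fmult (Delta_forest pre) (forest_of (Delta_tree t))) (Delta_forest post) :: 'k fvec)) v"
    using assms by (intro lin_cong Delta_tree_hole) (auto dest: AspaceD)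
  also have "\<dots> = tens (graft_at pre v post) unitA + node_right (fmult (fmult (Delta_forest pre) (forest_of (Delta_cut v))) (Delta_forest post))"
    by (simp add: lin_fadd graft_at_def tens_lin_left unitA_def Delta_cut_lin forest_of_lin fmult_lin_left fmult_lin_right node_right_lin)
  finally show ?thesis .
qed

lemma fmult_tens_left: "fmult (tens A (Poly_Mapping.single ps 1)) E3 =
   lin (\<lambda>u3. tens (prodA 3 A (tvec (fst u3))) (Poly_Mapping.single (ps @ snd u3) 1)) (E3 :: 'k::field fvec)"
proof -
  have "fmult (tens A (Poly_Mapping.single ps 1)) E3 = lin (\<lambda>u3. fmult (tens A (Poly_Mapping.single ps 1)) (Poly_Mapping.single u3 1)) E3"
    by (rule fmult_expand_right)
  also have "\<dots> = lin (\<lambda>u3. tens (prodA 3 A (tvec (fst u3))) (Poly_Mapping.single (ps @ snd u3) 1)) E3"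
  proof (rule lin_cong)
    fix u3 :: "tree \<times> tree list"
    show "fmult (tens A (Poly_Mapping.single ps 1)) (Poly_Mapping.single u3 1) = tens (prodA 3 A (tvec (fst u3))) (Poly_Mapping.single (ps @ snd u3) (1::'k))"
      by (cases u3) (simp add: single_pair_tens fmult_tens)
  qed
  finally show ?thesis .
qed

lemma fmult_hole_expand: "fmult (fmult E (forest_of X)) E3 = lin (\<lambda>u1. lin (\<lambda>ux. lin (\<lambda>u3.
    tens (prodA 3 (tp 3 (fst u1) (fst ux)) (tvec (fst u3))) (Poly_Mapping.single (snd u1 @ snd ux # snd u3) 1)) E3) X) (E :: 'k::field fvec)"
proof -
  have "fmult E (forest_of X) = lin (\<lambda>u1. lin (\<lambda>ux. tens (tp 3 (fst u1) (fst ux)) (Poly_Mapping.single (snd u1 @ [snd ux]) (1::'k))) X) E"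
    by (simp add: fmult_def forest_of_def lin_lin)
  then show ?thesis by (simp add: fmult_lin_left fmult_tens_left)
qed

lemma node_right_hole_expand: "node_right (fmult (fmult E (forest_of X)) E3) = lin (\<lambda>u1. lin (\<lambda>ux. lin (\<lambda>u3.
    tens (prodA 3 (tp 3 (fst u1) (fst ux)) (tvec (fst u3))) (tvec (Node (snd u1 @ snd ux # snd u3)))) E3) X) (E :: 'k::field fvec)"
  by (simp add: fmult_hole_expand node_right_lin node_right_tens)

lemma lin_prod2: "lin h (prod2 A B) = lin (\<lambda>a. lin (\<lambda>b. lin (\<lambda>G. lin (\<lambda>P. h (G, P)) (tp 3 (snd a) (snd b))) (tp 3 (fst a) (fst b))) B) A"
  by (simp add: prod2_lin lin_lin lin_tens)

lemma lin_swap_graft_hole: "lin (\<lambda>G. lin (\<lambda>P. lin (\<lambda>u3. tens (prodA 3 (tp 3 g1 G) (tvec (fst u3))) (tvec (Node (ps1 @ P # snd u3)))) E3) Pv) Gv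
  = lin (\<lambda>u3. tens (prodA 3 (prodA 3 (tvec g1) Gv) (tvec (fst u3))) (graft_at ps1 Pv (snd u3))) (E3 :: 'k::field fvec)"
proof -
  have "lin (\<lambda>G. lin (\<lambda>P. lin (\<lambda>u3. tens (prodA 3 (tp 3 g1 G) (tvec (fst u3))) (tvec (Node (ps1 @ P # snd u3)))) E3) Pv) Gv
     = lin (\<lambda>G. lin (\<lambda>u3. lin (\<lambda>P. tens (prodA 3 (tp 3 g1 G) (tvec (fst u3))) (tvec (Node (ps1 @ P # snd u3)))) Pv) E3) Gv"
    by (intro lin_cong lin_swap)
  also have "\<dots> = lin (\<lambda>u3. lin (\<lambda>G. lin (\<lambda>P. tens (prodA 3 (tp 3 g1 G) (tvec (fst u3))) (tvec (Node (ps1 @ P # snd u3)))) Pv) Gv) E3"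
    by (rule lin_swap)
  also have "\<dots> = lin (\<lambda>u3. lin (\<lambda>P. lin (\<lambda>G. tens (prodA 3 (tp 3 g1 G) (tvec (fst u3))) (tvec (Node (ps1 @ P # snd u3)))) Gv) Pv) E3"
    by (intro lin_cong lin_swap)
  also have "\<dots> = lin (\<lambda>u3. tens (prodA 3 (prodA 3 (tvec g1) Gv) (tvec (fst u3))) (graft_at ps1 Pv (snd u3))) E3"
    by (simp add: prodA_tvec_left prodA_lin_left tens_lin_left graft_at_def tens_lin_right)
  finally show ?thesis .
qed

lemma node_right_hole_prod2: "node_right (fmult (fmult E (forest_of (prod2 A B))) E3) = lin (\<lambda>u1. lin (\<lambda>a. lin (\<lambda>b. lin (\<lambda>u3.
    tens (prodA 3 (prodA 3 (tvec (fst u1)) (tp 3 (fst a) (fst b))) (tvec (fst u3))) (graft_at (snd u1) (tp 3 (snd a) (snd b)) (snd u3))) E3) B) A) (E :: 'k::field fvec)"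
  by (simp add: node_right_hole_expand lin_prod2 lin_swap_graft_hole)

lemma star_tvec_Leaf_right [simp]: "prodA 3 a (tvec Leaf) = a"
  using star_unit_right by (simp add: unitA_def)

lemma star_tvec_Leaf_left [simp]: "prodA 3 (tvec Leaf) a = a"
  using star_unit_left by (simp add: unitA_def)

lemma fmult_hole_post_Nil: "fmult (fmult E (forest_of X)) (Delta_forest []) = lin (\<lambda>u1. lin (\<lambda>ux.
    tens (tp 3 (fst u1) (fst ux)) (Poly_Mapping.single (snd u1 @ [snd ux]) 1)) X) (E :: 'k::field fvec)"
  by (simp add: fmult_hole_expand)

lemma fmult_hole_pre_Nil: "fmult (fmult (Delta_forest []) (forest_of X)) E3 = lin (\<lambda>ux. lin (\<lambda>u3.
    tens (prodA 3 (tvec (fst ux)) (tvec (fst u3))) (Poly_Mapping.single (snd ux # snd u3) 1)) E3) (X :: 'k::field vec2)"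
  by (simp add: fmult_hole_expand)

lemma Delta_tree_valid_node:
  assumes "valid_node y"
  shows "Delta_tree y = Poly_Mapping.single (y, Leaf) 1 + node_right (Delta_forest (children y) :: 'k::field fvec)"
  using Delta_tree_Node[of "children y", where 'k='k] valid_node_Node[OF assms] assms by (simp add: valid_node_def)

lemma barprod_single_right: "barprod op P (Poly_Mapping.single v 1) = lin (\<lambda>u. bar_basis op u v) P"
  by (simp add: barprod_lin)

lemma barprod_node_right_right: "barprod op P (node_right E) = lin (\<lambda>u. lin (\<lambda>f. bar_basis op u (fst f, Node (snd f))) E) P"
  by (simp add: node_right_def barprod_lin_right barprod_single_right) (rule lin_swap)

lemma tp0_Node_left:
  assumes "ps \<noteq> []" "valid w"
  shows "tp 0 (Node ps) w = (graft_at (butlast ps) (tp 3 (last ps) w) [] :: 'k::field vec)"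
proof (cases "w = Leaf")
  case True
  then show ?thesis using assms(1) by (simp add: tp0_Leaf_right)
next
  case False
  then have "valid_node w" using assms(2) by (simp add: valid_node_def)
  then show ?thesis using assms(1) by (simp add: tp0_Node valid_node_children_ne valid_node_not_Leaf)
qed

lemma tp2_Node_right:
  assumes "valid w"
  shows "tp 2 w (Node (q # qs)) = (graft_at [] (tp 3 w q) qs :: 'k::field vec)"
proof (cases "w = Leaf")
  case True
  then show ?thesis by (simp add: tp2_Leaf_left)
next
  case False
  then have "valid_node w" using assms by (simp add: valid_node_def)
  then show ?thesis by (simp add: tp2_Node valid_node_children_ne valid_node_not_Leaf)
qed

lemma barprod_prec_hole:
  assumes "\<And>g p. (g, p) \<in> Poly_Mapping.keys Q \<Longrightarrow> valid p"
  shows "barprod 0 (node_right (fmult (fmult E (forest_of X)) (Delta_forest []))) Q =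
    lin (\<lambda>u1. lin (\<lambda>a. lin (\<lambda>b. tens (prodA 3 (tp 3 (fst u1) (fst a)) (tvec (fst b)))
      (graft_at (snd u1) (tp 3 (snd a) (snd b)) [])) Q) X) (E :: 'k::field fvec)"
proof -
  have "barprod 0 (node_right (fmult (fmult E (forest_of X)) (Delta_forest []))) Q =
     lin (\<lambda>u1. lin (\<lambda>a. lin (\<lambda>G. lin (\<lambda>b. bar_basis 0 (G, Node (snd u1 @ [snd a])) b) Q) (tp 3 (fst u1) (fst a))) X) E"
    unfolding barprod_node_right_left fmult_hole_post_Nil by (simp add: lin_lin lin_tens)
  also have "\<dots> = lin (\<lambda>u1. lin (\<lambda>a. lin (\<lambda>G. lin (\<lambda>b.
      tens (tp 3 G (fst b)) (graft_at (snd u1) (tp 3 (snd a) (snd b)) [])) Q) (tp 3 (fst u1) (fst a))) X) E"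
  proof (intro lin_cong)
    fix u1 a G b assume "b \<in> Poly_Mapping.keys Q"
    with assms have "valid (snd b)" by (cases b) auto
    then show "bar_basis 0 (G, Node (snd u1 @ [snd a])) b =
        tens (tp 3 G (fst b)) (graft_at (snd u1) (tp 3 (snd a) (snd b)) [] :: 'k vec)"
      by (cases b) (simp add: bar_basis_nonleaf tp0_Node_left)
  qed
  also have "\<dots> = lin (\<lambda>u1. lin (\<lambda>a. lin (\<lambda>b. lin (\<lambda>G.
      tens (tp 3 G (fst b)) (graft_at (snd u1) (tp 3 (snd a) (snd b)) [])) (tp 3 (fst u1) (fst a))) Q) X) E"
    by (intro lin_cong lin_swap)
  finally show ?thesis by (simp add: prodA_tvec_right tens_lin_left)
qed

lemma barprod_dot_hole:
  "barprod 1 (node_right (fmult (fmult E (forest_of X)) (Delta_forest [])))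
      (node_right (fmult (fmult (Delta_forest []) (forest_of Y)) E3)) =
    lin (\<lambda>u1. lin (\<lambda>a. lin (\<lambda>b. lin (\<lambda>u3. tens (prodA 3 (tp 3 (fst u1) (fst a)) (tp 3 (fst b) (fst u3)))
      (graft_at (snd u1) (tp 3 (snd a) (snd b)) (snd u3))) E3) Y) X) (E :: 'k::field fvec)"
proof -
  have "barprod 1 (node_right (fmult (fmult E (forest_of X)) (Delta_forest [])))
      (node_right (fmult (fmult (Delta_forest []) (forest_of Y)) E3)) =
    lin (\<lambda>u1. lin (\<lambda>a. lin (\<lambda>G. lin (\<lambda>b. lin (\<lambda>u3. lin (\<lambda>G'.
      bar_basis 1 (G, Node (snd u1 @ [snd a])) (G', Node (snd b # snd u3))) (tp 3 (fst b) (fst u3))) E3) Y)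
      (tp 3 (fst u1) (fst a))) X) E"
    unfolding barprod_node_right_left fmult_hole_post_Nil fmult_hole_pre_Nil
    by (simp add: lin_lin lin_tens lin_node_right)
  also have "\<dots> = lin (\<lambda>u1. lin (\<lambda>a. lin (\<lambda>G. lin (\<lambda>b. lin (\<lambda>u3. lin (\<lambda>G'.
      tens (tp 3 G G') (graft_at (snd u1) (tp 3 (snd a) (snd b)) (snd u3))) (tp 3 (fst b) (fst u3))) E3) Y)
      (tp 3 (fst u1) (fst a))) X) E"
    by (intro lin_cong) (simp add: bar_basis_nonleaf tp1_Node)
  also have "\<dots> = lin (\<lambda>u1. lin (\<lambda>a. lin (\<lambda>b. lin (\<lambda>G. lin (\<lambda>u3. lin (\<lambda>G'.
      tens (tp 3 G G') (graft_at (snd u1) (tp 3 (snd a) (snd b)) (snd u3))) (tp 3 (fst b) (fst u3))) E3)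
      (tp 3 (fst u1) (fst a))) Y) X) E"
    by (intro lin_cong lin_swap)
  also have "\<dots> = lin (\<lambda>u1. lin (\<lambda>a. lin (\<lambda>b. lin (\<lambda>u3. lin (\<lambda>G. lin (\<lambda>G'.
      tens (tp 3 G G') (graft_at (snd u1) (tp 3 (snd a) (snd b)) (snd u3))) (tp 3 (fst b) (fst u3)))
      (tp 3 (fst u1) (fst a))) E3) Y) X) E"
    by (intro lin_cong lin_swap)
  finally show ?thesis by (simp add: prodA_lin tens_lin_left)
qed

lemma barprod_succ_hole:
  assumes "\<And>g p. (g, p) \<in> Poly_Mapping.keys P \<Longrightarrow> valid p"
  shows "barprod 2 P (node_right (fmult (fmult (Delta_forest []) (forest_of Y)) E3)) =
    lin (\<lambda>a. lin (\<lambda>b. lin (\<lambda>u3. tens (prodA 3 (tvec (fst a)) (tp 3 (fst b) (fst u3)))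
      (graft_at [] (tp 3 (snd a) (snd b)) (snd u3))) E3) Y) (P :: 'k::field vec2)"
proof -
  have "barprod 2 P (node_right (fmult (fmult (Delta_forest []) (forest_of Y)) E3)) =
    lin (\<lambda>a. lin (\<lambda>b. lin (\<lambda>u3. lin (\<lambda>G'. bar_basis 2 a (G', Node (snd b # snd u3))) (tp 3 (fst b) (fst u3))) E3) Y) P"
    unfolding barprod_node_right_right fmult_hole_pre_Nil by (simp add: lin_lin lin_tens)
  also have "\<dots> = lin (\<lambda>a. lin (\<lambda>b. lin (\<lambda>u3. lin (\<lambda>G'.
      tens (tp 3 (fst a) G') (graft_at [] (tp 3 (snd a) (snd b)) (snd u3))) (tp 3 (fst b) (fst u3))) E3) Y) P"
  proof (intro lin_cong)
    fix a b u3 G' assume "a \<in> Poly_Mapping.keys P"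
    with assms have "valid (snd a)" by (cases a) auto
    then show "bar_basis 2 a (G', Node (snd b # snd u3)) =
        tens (tp 3 (fst a) G') (graft_at [] (tp 3 (snd a) (snd b)) (snd u3) :: 'k vec)"
      by (cases a) (simp add: bar_basis_nonleaf tp2_Node_right)
  qed
  finally show ?thesis by (simp add: prodA_tvec_left tens_lin_left)
qed

text \<open>In each product only one pair of subtrees meets under the new root, so the product of
  the two coproducts is the term of the two roots plus a single hole, filled with the product of
  the coproducts of that pair.\<close>

lemma barprod_prec_Delta_tree:
  assumes x: "x = Node (bx @ [xk])" "bx \<noteq> []" "\<forall>s\<in>set bx. valid s" "valid xk" and y: "valid_node y"
  shows "barprod 0 (Delta_tree x) (Delta_tree y) = tens (tp 0 x y) unitA
    + node_right (fmult (fmult (Delta_forest bx) (forest_of (prod2 (Delta_tree xk) (Delta_tree y)))) (Delta_forest [])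
        :: 'k::field fvec)"
proof -
  have vy: "valid y" using y by (simp add: valid_node_def)
  have Dx: "Delta_tree x = Poly_Mapping.single (x, Leaf) 1
      + node_right (fmult (fmult (Delta_forest bx) (forest_of (Delta_tree xk))) (Delta_forest []) :: 'k fvec)"
    using Delta_tree_hole[of bx xk "[]", where 'k='k] x by simp
  obtain Ey where Dy: "Delta_tree y = Poly_Mapping.single (y, Leaf) 1 + node_right (Ey :: 'k fvec)"
    using Delta_tree_valid_node[OF y] by blast
  let ?Ex = "fmult (fmult (Delta_forest bx) (forest_of (Delta_tree xk))) (Delta_forest []) :: 'k fvec"
  have split: "barprod 0 (Delta_tree x) (Delta_tree y) =
      barprod 0 (Poly_Mapping.single (x, Leaf) 1) (Delta_tree y) + barprod 0 (node_right ?Ex) (Delta_tree y :: 'k vec2)"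
    unfolding Dx by (rule barprod_add_left)
  have root: "barprod 0 (Poly_Mapping.single (x, Leaf) 1) (Delta_tree y) = tens (tp 0 x y) (unitA :: 'k vec)"
    unfolding Dy using x y
    by (simp add: barprod_single_left lin_add lin_node_right bar_basis_Leaf_Leaf bar_basis_nonleaf valid_node_not_Leaf)
  have "barprod 0 (Delta_tree x) (Delta_tree y) = tens (tp 0 x y) unitA + lin (\<lambda>u1. lin (\<lambda>a. lin (\<lambda>b.
      tens (prodA 3 (tp 3 (fst u1) (fst a)) (tvec (fst b))) (graft_at (snd u1) (tp 3 (snd a) (snd b)) []))
      (Delta_tree y)) (Delta_tree xk)) (Delta_forest bx :: 'k fvec)"
    unfolding split root by (simp add: barprod_prec_hole keys_Delta_tree(2)[OF vy] del: Delta_forest.simps)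
  also have "\<dots> = tens (tp 0 x y) unitA + lin (\<lambda>u1. lin (\<lambda>a. lin (\<lambda>b.
      tens (prodA 3 (tvec (fst u1)) (tp 3 (fst a) (fst b))) (graft_at (snd u1) (tp 3 (snd a) (snd b)) []))
      (Delta_tree y)) (Delta_tree xk)) (Delta_forest bx)"
  proof (intro arg_cong[where f="\<lambda>z. tens (tp 0 x y) unitA + z"] lin_cong)
    fix u1 a b assume "u1 \<in> Poly_Mapping.keys (Delta_forest bx :: 'k fvec)"
      "a \<in> Poly_Mapping.keys (Delta_tree xk :: 'k vec2)" "b \<in> Poly_Mapping.keys (Delta_tree y :: 'k vec2)"
    then have "valid (fst u1)" "valid (fst a)" "valid (fst b)"
      using keys_Delta_forest(1)[OF x(3), of "fst u1" "snd u1"] keys_Delta_tree(1)[OF x(4), of "fst a" "snd a"]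
        keys_Delta_tree(1)[OF vy, of "fst b" "snd b"] by simp_all
    then show "tens (prodA 3 (tp 3 (fst u1) (fst a)) (tvec (fst b))) (graft_at (snd u1) (tp 3 (snd a) (snd b)) []) =
        tens (prodA 3 (tvec (fst u1)) (tp 3 (fst a) (fst b))) (graft_at (snd u1) (tp 3 (snd a) (snd b)) [] :: 'k vec)"
      by (simp add: assoc_tree)
  qed
  finally show ?thesis by (simp add: node_right_hole_prod2)
qed

lemma barprod_dot_Delta_tree:
  assumes x: "x = Node (bx @ [xk])" "bx \<noteq> []" "\<forall>s\<in>set bx. valid s" "valid xk"
    and y: "y = Node (y0 # ty)" "ty \<noteq> []" "valid y0" "\<forall>s\<in>set ty. valid s"
  shows "barprod 1 (Delta_tree x) (Delta_tree y) = tens (tp 1 x y) unitA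
    + node_right (fmult (fmult (Delta_forest bx) (forest_of (prod2 (Delta_tree xk) (Delta_tree y0)))) (Delta_forest ty)
        :: 'k::field fvec)"
proof -
  have Dx: "Delta_tree x = Poly_Mapping.single (x, Leaf) 1
      + node_right (fmult (fmult (Delta_forest bx) (forest_of (Delta_tree xk))) (Delta_forest []) :: 'k fvec)"
    using Delta_tree_hole[of bx xk "[]", where 'k='k] x by simp
  have Dy: "Delta_tree y = Poly_Mapping.single (y, Leaf) 1
      + node_right (fmult (fmult (Delta_forest []) (forest_of (Delta_tree y0))) (Delta_forest ty) :: 'k fvec)"
    using Delta_tree_hole[of "[]" y0 ty, where 'k='k] y by simp
  let ?Ex = "fmult (fmult (Delta_forest bx) (forest_of (Delta_tree xk))) (Delta_forest []) :: 'k fvec"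
  let ?Ey = "fmult (fmult (Delta_forest []) (forest_of (Delta_tree y0))) (Delta_forest ty) :: 'k fvec"
  have split_x: "barprod 1 (Delta_tree x) (Delta_tree y) =
      barprod 1 (Poly_Mapping.single (x, Leaf) 1) (Delta_tree y) + barprod 1 (node_right ?Ex) (Delta_tree y)"
    unfolding Dx by (rule barprod_add_left)
  have split_y: "barprod 1 (node_right ?Ex) (Delta_tree y) =
      barprod 1 (node_right ?Ex) (Poly_Mapping.single (y, Leaf) 1) + barprod 1 (node_right ?Ex) (node_right ?Ey)"
    unfolding Dy by (rule barprod_add_right)
  have root: "barprod 1 (Poly_Mapping.single (x, Leaf) 1) (Delta_tree y) = tens (tp 1 x y) (unitA :: 'k vec)"
    unfolding Dy using x y
    by (simp add: barprod_single_left lin_add lin_node_right bar_basis_Leaf_Leaf bar_basis_nonleaf)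
  have "barprod 1 (node_right ?Ex) (Poly_Mapping.single (y, Leaf) 1) = 0"
    by (simp add: barprod_node_right_left bar_basis_nonleaf lin_eq_zero)
  then have "barprod 1 (Delta_tree x) (Delta_tree y) = tens (tp 1 x y) unitA + lin (\<lambda>u1. lin (\<lambda>a. lin (\<lambda>b. lin (\<lambda>u3.
      tens (prodA 3 (tp 3 (fst u1) (fst a)) (tp 3 (fst b) (fst u3))) (graft_at (snd u1) (tp 3 (snd a) (snd b)) (snd u3)))
      (Delta_forest ty)) (Delta_tree y0)) (Delta_tree xk)) (Delta_forest bx :: 'k fvec)"
    unfolding split_x split_y root barprod_dot_hole by simp
  also have "\<dots> = tens (tp 1 x y) unitA + lin (\<lambda>u1. lin (\<lambda>a. lin (\<lambda>b. lin (\<lambda>u3.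
      tens (prodA 3 (prodA 3 (tvec (fst u1)) (tp 3 (fst a) (fst b))) (tvec (fst u3)))
        (graft_at (snd u1) (tp 3 (snd a) (snd b)) (snd u3)))
      (Delta_forest ty)) (Delta_tree y0)) (Delta_tree xk)) (Delta_forest bx)"
  proof (intro arg_cong[where f="\<lambda>z. tens (tp 1 x y) unitA + z"] lin_cong)
    fix u1 a b u3 assume "u1 \<in> Poly_Mapping.keys (Delta_forest bx :: 'k fvec)"
      "a \<in> Poly_Mapping.keys (Delta_tree xk :: 'k vec2)" "b \<in> Poly_Mapping.keys (Delta_tree y0 :: 'k vec2)"
      "u3 \<in> Poly_Mapping.keys (Delta_forest ty :: 'k fvec)"
    then have "valid (fst u1)" "valid (fst a)" "valid (fst b)" "valid (fst u3)"
      using keys_Delta_forest(1)[OF x(3), of "fst u1" "snd u1"] keys_Delta_tree(1)[OF x(4), of "fst a" "snd a"]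
        keys_Delta_tree(1)[OF y(3), of "fst b" "snd b"] keys_Delta_forest(1)[OF y(4), of "fst u3" "snd u3"]
      by simp_all
    then show "tens (prodA 3 (tp 3 (fst u1) (fst a)) (tp 3 (fst b) (fst u3)))
        (graft_at (snd u1) (tp 3 (snd a) (snd b)) (snd u3)) =
      tens (prodA 3 (prodA 3 (tvec (fst u1)) (tp 3 (fst a) (fst b))) (tvec (fst u3)))
        (graft_at (snd u1) (tp 3 (snd a) (snd b)) (snd u3) :: 'k vec)"
      by (simp add: assoc_tree4)
  qed
  finally show ?thesis by (simp add: node_right_hole_prod2)
qed

lemma barprod_succ_Delta_tree:
  assumes x: "valid_node x" and y: "y = Node (y0 # ty)" "ty \<noteq> []" "valid y0" "\<forall>s\<in>set ty. valid s"
  shows "barprod 2 (Delta_tree x) (Delta_tree y) = tens (tp 2 x y) unitA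
    + node_right (fmult (fmult (Delta_forest []) (forest_of (prod2 (Delta_tree x) (Delta_tree y0)))) (Delta_forest ty)
        :: 'k::field fvec)"
proof -
  have vx: "valid x" using x by (simp add: valid_node_def)
  obtain Ex where Dx: "Delta_tree x = Poly_Mapping.single (x, Leaf) 1 + node_right (Ex :: 'k fvec)"
    using Delta_tree_valid_node[OF x] by blast
  have Dy: "Delta_tree y = Poly_Mapping.single (y, Leaf) 1
      + node_right (fmult (fmult (Delta_forest []) (forest_of (Delta_tree y0))) (Delta_forest ty) :: 'k fvec)"
    using Delta_tree_hole[of "[]" y0 ty, where 'k='k] y by simp
  let ?Ey = "fmult (fmult (Delta_forest []) (forest_of (Delta_tree y0))) (Delta_forest ty) :: 'k fvec"
  have split: "barprod 2 (Delta_tree x) (Delta_tree y) =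
      barprod 2 (Delta_tree x) (Poly_Mapping.single (y, Leaf) 1) + barprod 2 (Delta_tree x) (node_right ?Ey)"
    unfolding Dy by (rule barprod_add_right)
  have root: "barprod 2 (Delta_tree x) (Poly_Mapping.single (y, Leaf) 1) = tens (tp 2 x y) (unitA :: 'k vec)"
    unfolding Dx using x y
    by (simp add: barprod_single_right lin_add lin_node_right bar_basis_Leaf_Leaf bar_basis_nonleaf valid_node_not_Leaf lin_eq_zero)
  have "barprod 2 (Delta_tree x) (Delta_tree y) = tens (tp 2 x y) unitA + lin (\<lambda>a. lin (\<lambda>b. lin (\<lambda>u3.
      tens (prodA 3 (tvec (fst a)) (tp 3 (fst b) (fst u3))) (graft_at [] (tp 3 (snd a) (snd b)) (snd u3)))
      (Delta_forest ty)) (Delta_tree y0)) (Delta_tree x :: 'k vec2)"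
    unfolding split root by (simp add: barprod_succ_hole keys_Delta_tree(2)[OF vx] del: Delta_forest.simps)
  also have "\<dots> = tens (tp 2 x y) unitA + lin (\<lambda>a. lin (\<lambda>b. lin (\<lambda>u3.
      tens (prodA 3 (tp 3 (fst a) (fst b)) (tvec (fst u3))) (graft_at [] (tp 3 (snd a) (snd b)) (snd u3)))
      (Delta_forest ty)) (Delta_tree y0)) (Delta_tree x)"
  proof (intro arg_cong[where f="\<lambda>z. tens (tp 2 x y) unitA + z"] lin_cong)
    fix a b u3 assume "a \<in> Poly_Mapping.keys (Delta_tree x :: 'k vec2)"
      "b \<in> Poly_Mapping.keys (Delta_tree y0 :: 'k vec2)" "u3 \<in> Poly_Mapping.keys (Delta_forest ty :: 'k fvec)"
    then have "valid (fst a)" "valid (fst b)" "valid (fst u3)"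
      using keys_Delta_tree(1)[OF vx, of "fst a" "snd a"] keys_Delta_tree(1)[OF y(3), of "fst b" "snd b"]
        keys_Delta_forest(1)[OF y(4), of "fst u3" "snd u3"] by simp_all
    then show "tens (prodA 3 (tvec (fst a)) (tp 3 (fst b) (fst u3))) (graft_at [] (tp 3 (snd a) (snd b)) (snd u3)) =
        tens (prodA 3 (tp 3 (fst a) (fst b)) (tvec (fst u3))) (graft_at [] (tp 3 (snd a) (snd b)) (snd u3) :: 'k vec)"
      by (simp add: assoc_tree)
  qed
  finally show ?thesis by (simp add: node_right_hole_prod2)
qed

lemma Delta_compat_prec:
  assumes x: "x = Node (bx @ [xk])" "bx \<noteq> []" "\<forall>s\<in>set bx. valid s" "valid xk" and y: "valid_node y"
    and IH: "Delta_cut (tp 3 xk y) = prod2 (Delta_tree xk) (Delta_tree y :: 'k::field vec2)"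
  shows "Delta_cut (tp 0 x y) = barprod 0 (Delta_tree x) (Delta_tree y :: 'k vec2)"
proof -
  have "tp 0 x y = (graft_at bx (tp 3 xk y) [] :: 'k vec)"
    using x y by (simp add: tp0_Node valid_node_children_ne valid_node_not_Leaf)
  then show ?thesis
    using x y by (simp add: Delta_cut_graft_at tp_Aspace valid_node_valid IH barprod_prec_Delta_tree)
qed

lemma Delta_compat_dot:
  assumes x: "x = Node (bx @ [xk])" "bx \<noteq> []" "\<forall>s\<in>set bx. valid s" "valid xk"
    and y: "y = Node (y0 # ty)" "ty \<noteq> []" "valid y0" "\<forall>s\<in>set ty. valid s"
    and IH: "Delta_cut (tp 3 xk y0) = prod2 (Delta_tree xk) (Delta_tree y0 :: 'k::field vec2)"
  shows "Delta_cut (tp 1 x y) = barprod 1 (Delta_tree x) (Delta_tree y :: 'k vec2)"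
proof -
  have "tp 1 x y = (graft_at bx (tp 3 xk y0) ty :: 'k vec)"
    using x y by (simp add: tp1_Node)
  then show ?thesis
    using x y by (simp add: Delta_cut_graft_at tp_Aspace IH barprod_dot_Delta_tree)
qed

lemma Delta_compat_succ:
  assumes x: "valid_node x" and y: "y = Node (y0 # ty)" "ty \<noteq> []" "valid y0" "\<forall>s\<in>set ty. valid s"
    and IH: "Delta_cut (tp 3 x y0) = prod2 (Delta_tree x) (Delta_tree y0 :: 'k::field vec2)"
  shows "Delta_cut (tp 2 x y) = barprod 2 (Delta_tree x) (Delta_tree y :: 'k vec2)"
proof -
  have "tp 2 x y = (graft_at [] (tp 3 x y0) ty :: 'k vec)"
    using x y by (simp add: tp2_Node valid_node_children_ne valid_node_not_Leaf)
  then show ?thesis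
    using x y by (simp add: Delta_cut_graft_at tp_Aspace valid_node_valid IH barprod_succ_Delta_tree)
qed

lemma prod2_lin_left: "prod2 (lin f P) Q = lin (\<lambda>u. prod2 (f u) Q) P"
  by (simp add: prod2_lin lin_lin)

lemma prod2_lin_right: "prod2 P (lin f Q) = lin (\<lambda>v. prod2 P (f v)) Q"
proof -
  have "prod2 P (lin f Q) = lin (\<lambda>u. lin (\<lambda>v. lin (\<lambda>w. tens (tp 3 (fst u) (fst w)) (tp 3 (snd u) (snd w))) (f v)) Q) P"
    by (simp add: prod2_lin lin_lin)
  also have "\<dots> = lin (\<lambda>v. lin (\<lambda>u. lin (\<lambda>w. tens (tp 3 (fst u) (fst w)) (tp 3 (snd u) (snd w))) (f v)) P) Q"
    by (rule lin_swap)
  finally show ?thesis by (simp add: prod2_lin)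
qed

lemma valid_node_leaves: "valid_node x \<Longrightarrow> 2 \<le> leaves x"
proof -
  assume "valid_node x"
  then obtain bx xk where x: "x = Node (bx @ [xk])" "bx \<noteq> []" "valid xk" "\<forall>s\<in>set bx. valid s"
    using valid_node_obtain_last by metis
  have "1 \<le> sum_list (map leaves bx)" using sum_list_leaves_pos[OF x(2) x(4)] .
  moreover have "1 \<le> leaves xk" using leaves_pos[OF x(3)] .
  ultimately show ?thesis using x(1) by simp
qed

lemma Leaf_Leaf_notin_keys_Delta_tree: "valid_node x \<Longrightarrow> (Leaf, Leaf) \<notin> Poly_Mapping.keys (Delta_tree x :: 'k::field vec2)"
  using keys_Delta_tree(3)[of x Leaf Leaf, where 'k='k] valid_node_leaves[of x] by (auto simp: valid_node_def)

lemma tp_ops_sum: "b \<noteq> Leaf \<or> d \<noteq> Leaf \<Longrightarrow> tp 0 b d + tp 1 b d + tp 2 b d = (tp 3 b d :: 'k::field vec)"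
  by (cases "b = Leaf"; cases "d = Leaf") (auto simp: tp3_split tp2_Leaf_left tp0_Leaf_right)

lemma bar_basis_ops_sum: "u \<noteq> (Leaf, Leaf) \<Longrightarrow> v \<noteq> (Leaf, Leaf) \<Longrightarrow>
  bar_basis 0 u v + bar_basis 1 u v + bar_basis 2 u v = (tens (tp 3 (fst u) (fst v)) (tp 3 (snd u) (snd v)) :: 'k::field vec2)"
proof -
  assume a: "u \<noteq> (Leaf, Leaf)" "v \<noteq> (Leaf, Leaf)"
  obtain a1 a2 where u: "u = (a1, a2)" by (cases u)
  obtain c1 c2 where v: "v = (c1, c2)" by (cases v)
  show ?thesis
  proof (cases "a2 = Leaf \<and> c2 = Leaf")
    case True
    then have "a1 \<noteq> Leaf" "c1 \<noteq> Leaf" using a u v by auto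
    then show ?thesis using True u v
      by (simp add: bar_basis_Leaf_Leaf tens_add_left[symmetric] tp3_split unitA_def)
  next
    case False
    then show ?thesis using u v
      by (simp add: bar_basis_nonleaf tens_add_right[symmetric] tp_ops_sum)
  qed
qed

lemma barprod_ops_sum:
  assumes "(Leaf, Leaf) \<notin> Poly_Mapping.keys P" "(Leaf, Leaf) \<notin> Poly_Mapping.keys Q"
  shows "barprod 0 P Q + barprod 1 P Q + barprod 2 P Q = prod2 P (Q :: 'k::field vec2)"
proof -
  have "barprod 0 P Q + barprod 1 P Q + barprod 2 P Q = lin (\<lambda>u. lin (\<lambda>v. bar_basis 0 u v + bar_basis 1 u v + bar_basis 2 u v) Q) P"
    by (simp add: barprod_lin lin_fadd)
  also have "\<dots> = prod2 P Q"
    unfolding prod2_lin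
  proof (intro lin_cong)
    fix u v assume "u \<in> Poly_Mapping.keys P" "v \<in> Poly_Mapping.keys Q"
    then have "u \<noteq> (Leaf, Leaf)" "v \<noteq> (Leaf, Leaf)" using assms by auto
    then show "bar_basis 0 u v + bar_basis 1 u v + bar_basis 2 u v = (tens (tp 3 (fst u) (fst v)) (tp 3 (snd u) (snd v)) :: 'k vec2)"
      by (rule bar_basis_ops_sum)
  qed
  finally show ?thesis .
qed

lemma Delta_tree_Leaf_single: "Delta_tree Leaf = Poly_Mapping.single (Leaf, Leaf) (1::'k::field)"
  by (simp add: Delta_tree_Leaf unitA_def)

lemma prod2_Delta_Leaf_left: "prod2 (Delta_tree Leaf) Q = (Q :: 'k::field vec2)"
proof -
  have "prod2 (Delta_tree Leaf) Q = lin (\<lambda>u. Poly_Mapping.single u 1) Q"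
    by (simp add: Delta_tree_Leaf_single prod2_lin)
  then show ?thesis by (simp add: lin_id)
qed

lemma prod2_Delta_Leaf_right: "prod2 P (Delta_tree Leaf) = (P :: 'k::field vec2)"
proof -
  have "prod2 P (Delta_tree Leaf) = lin (\<lambda>u. Poly_Mapping.single u 1) P"
    by (simp add: Delta_tree_Leaf_single prod2_lin)
  then show ?thesis by (simp add: lin_id)
qed

lemma Delta_tree_mult_of_compat:
  assumes nx: "valid_node x" and ny: "valid_node y"
    and compat: "\<And>op. op < 3 \<Longrightarrow> Delta_cut (tp op x y) = barprod op (Delta_tree x) (Delta_tree y :: 'k::field vec2)"
  shows "Delta_cut (tp 3 x y) = prod2 (Delta_tree x) (Delta_tree y :: 'k vec2)"
proof -
  have "Delta_cut (tp 3 x y) = Delta_cut (tp 0 x y) + Delta_cut (tp 1 x y) + (Delta_cut (tp 2 x y) :: 'k vec2)"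
    unfolding tp3_valid_node[OF nx ny] Delta_cut_lin by (simp only: lin_add)
  also have "\<dots> = barprod 0 (Delta_tree x) (Delta_tree y) + barprod 1 (Delta_tree x) (Delta_tree y)
      + barprod 2 (Delta_tree x) (Delta_tree y)"
    using compat by simp
  also have "\<dots> = prod2 (Delta_tree x) (Delta_tree y)"
    using Leaf_Leaf_notin_keys_Delta_tree[OF nx] Leaf_Leaf_notin_keys_Delta_tree[OF ny] by (rule barprod_ops_sum)
  finally show ?thesis .
qed

lemma Delta_tree_mult_and_compat:
  "valid x \<Longrightarrow> valid y \<Longrightarrow>
     Delta_cut (tp 3 x y) = prod2 (Delta_tree x) (Delta_tree y :: 'k::field vec2) \<and>
     (valid_node x \<and> valid_node y \<longrightarrow> (\<forall>op<3. Delta_cut (tp op x y) = barprod op (Delta_tree x) (Delta_tree y :: 'k vec2)))"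
proof (induction "leaves x + leaves y" arbitrary: x y rule: less_induct)
  case less
  have compat: "Delta_cut (tp op x y) = barprod op (Delta_tree x) (Delta_tree y :: 'k vec2)"
    if nx: "valid_node x" and ny: "valid_node y" and "op < 3" for op
  proof -
    obtain bx xk where x: "x = Node (bx @ [xk])" "bx \<noteq> []" "valid xk" "\<forall>s\<in>set bx. valid s" "leaves xk < leaves x"
      using valid_node_obtain_last[OF nx] by metis
    obtain y0 ty where y: "y = Node (y0 # ty)" "ty \<noteq> []" "valid y0" "\<forall>s\<in>set ty. valid s" "leaves y0 < leaves y"
      using valid_node_obtain_first[OF ny] by metis
    from \<open>op < 3\<close> consider "op = 0" | "op = 1" | "op = 2" by (auto simp: numeral_3_eq_3 less_Suc_eq)
    then show ?thesis
    proof cases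
      case 1
      have "Delta_cut (tp 3 xk y) = prod2 (Delta_tree xk) (Delta_tree y :: 'k vec2)"
        using less x(3,5) by simp
      with 1 show ?thesis using Delta_compat_prec[OF x(1,2,4,3) ny] by simp
    next
      case 2
      have "Delta_cut (tp 3 xk y0) = prod2 (Delta_tree xk) (Delta_tree y0 :: 'k vec2)"
        using less x(3,5) y(3,5) by simp
      with 2 show ?thesis using Delta_compat_dot[OF x(1,2,4,3) y(1-4)] by simp
    next
      case 3
      have "Delta_cut (tp 3 x y0) = prod2 (Delta_tree x) (Delta_tree y0 :: 'k vec2)"
        using less y(3,5) by simp
      with 3 show ?thesis using Delta_compat_succ[OF nx y(1-4)] by simp
    qed
  qed
  have "Delta_cut (tp 3 x y) = prod2 (Delta_tree x) (Delta_tree y :: 'k vec2)"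
  proof (cases "x = Leaf \<or> y = Leaf")
    case True
    then show ?thesis by (auto simp: prod2_Delta_Leaf_left prod2_Delta_Leaf_right)
  next
    case False
    with less.prems have nx: "valid_node x" and ny: "valid_node y" by (auto simp: valid_node_def)
    show ?thesis using compat[OF nx ny] by (rule Delta_tree_mult_of_compat[OF nx ny])
  qed
  with compat show ?case by blast
qed

lemma Delta_tree_mult: "valid x \<Longrightarrow> valid y \<Longrightarrow> Delta_cut (tp 3 x y) = prod2 (Delta_tree x) (Delta_tree y :: 'k::field vec2)"
  using Delta_tree_mult_and_compat by blast

lemma Delta_tree_compat: "valid_node x \<Longrightarrow> valid_node y \<Longrightarrow> op < 3 \<Longrightarrow> Delta_cut (tp op x y) = barprod op (Delta_tree x) (Delta_tree y :: 'k::field vec2)"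
  using Delta_tree_mult_and_compat valid_node_valid by blast

section \<open>Coassociativity\<close>

type_synonym 'k vec3 = "(tree \<times> (tree \<times> tree)) \<Rightarrow>\<^sub>0 'k"
type_synonym 'k fvec3 = "(tree \<times> (tree \<times> tree list)) \<Rightarrow>\<^sub>0 'k"

text \<open>coassoc_left t and coassoc_right t are (\<Delta> \<otimes> id) (\<Delta> t) and (id \<otimes> \<Delta>) (\<Delta> t), both written in
  the bracketing u \<otimes> (v \<otimes> w).  Their forest versions apply \<Delta> to the left factor, respectively to
  every tree of the forest factor, and fmult3 is the analogue of fmult on triples.\<close>

definition coassoc_left :: "tree \<Rightarrow> 'k::field vec3" where
  "coassoc_left t = lin (\<lambda>s. lin (\<lambda>d. Poly_Mapping.single (fst d, (snd d, snd s)) 1) (Delta_tree (fst s))) (Delta_tree t)"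

definition coassoc_right :: "tree \<Rightarrow> 'k::field vec3" where
  "coassoc_right t = lin (\<lambda>s. lin (\<lambda>d. Poly_Mapping.single (fst s, (fst d, snd d)) 1) (Delta_tree (snd s))) (Delta_tree t)"

definition coassoc_left_forest :: "'k::field fvec \<Rightarrow> 'k fvec3" where
  "coassoc_left_forest E = lin (\<lambda>s. lin (\<lambda>d. Poly_Mapping.single (fst d, (snd d, snd s)) 1) (Delta_tree (fst s))) E"

definition coassoc_right_forest :: "'k::field fvec \<Rightarrow> 'k fvec3" where
  "coassoc_right_forest E = lin (\<lambda>s. lin (\<lambda>d. Poly_Mapping.single (fst s, (fst d, snd d)) 1) (Delta_forest (snd s))) E"

definition tens3 :: "'k::field vec \<Rightarrow> 'k vec \<Rightarrow> tree list \<Rightarrow> 'k fvec3" where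
  "tens3 A B ps = lin (\<lambda>h1. lin (\<lambda>h2. Poly_Mapping.single (h1, (h2, ps)) 1) B) A"

definition fmult3 :: "'k::field vec3 \<Rightarrow> 'k fvec3 \<Rightarrow> 'k fvec3" where
  "fmult3 Z W = lin (\<lambda>z. lin (\<lambda>w. tens3 (tp 3 (fst z) (fst w)) (tp 3 (fst (snd z)) (fst (snd w))) (snd (snd z) # snd (snd w))) W) Z"

lemma fmult_forest_of_expand: "fmult (forest_of P) E = lin (\<lambda>s. lin (\<lambda>e. tens (tp 3 (fst s) (fst e)) (Poly_Mapping.single (snd s # snd e) 1)) E) (P :: 'k::field vec2)"
  by (simp add: fmult_def forest_of_def lin_lin)

lemma lin_Delta_tree: "lin (\<lambda>h. lin f (Delta_tree h)) A = lin f (Delta_cut A)"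
  by (simp add: Delta_cut_lin lin_lin)

lemma coassoc_left_forest_Cons:
  assumes "valid t" "\<forall>s\<in>set ts. valid s"
  shows "coassoc_left_forest (Delta_forest (t # ts)) = fmult3 (coassoc_left t) (coassoc_left_forest (Delta_forest ts) :: 'k::field fvec3)"
proof -
  have "coassoc_left_forest (Delta_forest (t # ts)) = lin (\<lambda>s. lin (\<lambda>e. lin (\<lambda>d. Poly_Mapping.single (fst d, (snd d, snd s # snd e)) 1)
      (Delta_cut (tp 3 (fst s) (fst e)))) (Delta_forest ts)) (Delta_tree t :: 'k vec2)"
    by (simp add: coassoc_left_forest_def fmult_forest_of_expand lin_lin lin_tens lin_Delta_tree)
  also have "\<dots> = lin (\<lambda>s. lin (\<lambda>e. lin (\<lambda>d. Poly_Mapping.single (fst d, (snd d, snd s # snd e)) 1)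
      (prod2 (Delta_tree (fst s)) (Delta_tree (fst e)))) (Delta_forest ts)) (Delta_tree t)"
  proof (intro lin_cong)
    fix s e assume s: "s \<in> Poly_Mapping.keys (Delta_tree t :: 'k vec2)" and e: "e \<in> Poly_Mapping.keys (Delta_forest ts :: 'k fvec)"
    have "valid (fst s)" using keys_Delta_tree(1)[OF assms(1), of "fst s" "snd s"] s by simp
    moreover have "valid (fst e)" using keys_Delta_forest(1)[OF assms(2), of "fst e" "snd e"] e by simp
    ultimately have "Delta_cut (tp 3 (fst s) (fst e)) = prod2 (Delta_tree (fst s)) (Delta_tree (fst e) :: 'k vec2)"
      by (rule Delta_tree_mult)
    then show "lin (\<lambda>d. Poly_Mapping.single (fst d, (snd d, snd s # snd e)) 1) (Delta_cut (tp 3 (fst s) (fst e))) =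
      lin (\<lambda>d. Poly_Mapping.single (fst d, (snd d, snd s # snd e)) (1::'k)) (prod2 (Delta_tree (fst s)) (Delta_tree (fst e)))"
      by simp
  qed
  also have "\<dots> = lin (\<lambda>s. lin (\<lambda>e. lin (\<lambda>a. lin (\<lambda>b. tens3 (tp 3 (fst a) (fst b)) (tp 3 (snd a) (snd b)) (snd s # snd e))
      (Delta_tree (fst e))) (Delta_tree (fst s))) (Delta_forest ts)) (Delta_tree t)"
    by (simp add: lin_prod2 tens3_def)
  also have "\<dots> = lin (\<lambda>s. lin (\<lambda>a. lin (\<lambda>e. lin (\<lambda>b. tens3 (tp 3 (fst a) (fst b)) (tp 3 (snd a) (snd b)) (snd s # snd e))
      (Delta_tree (fst e))) (Delta_forest ts)) (Delta_tree (fst s))) (Delta_tree t)"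
    by (intro lin_cong lin_swap)
  also have "\<dots> = fmult3 (coassoc_left t) (coassoc_left_forest (Delta_forest ts))"
    by (simp add: fmult3_def coassoc_left_def coassoc_left_forest_def lin_lin)
  finally show ?thesis .
qed

lemma coassoc_right_forest_Cons:
  assumes "valid t" "\<forall>s\<in>set ts. valid s"
  shows "coassoc_right_forest (Delta_forest (t # ts)) = fmult3 (coassoc_right t) (coassoc_right_forest (Delta_forest ts) :: 'k::field fvec3)"
proof -
  have "coassoc_right_forest (Delta_forest (t # ts)) = lin (\<lambda>s. lin (\<lambda>e. lin (\<lambda>h. lin (\<lambda>c. lin (\<lambda>f. lin (\<lambda>Q.
      Poly_Mapping.single (h, (Q, snd c # snd f)) 1) (tp 3 (fst c) (fst f))) (Delta_forest (snd e))) (Delta_tree (snd s)))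
      (tp 3 (fst s) (fst e))) (Delta_forest ts)) (Delta_tree t :: 'k vec2)"
    by (simp add: coassoc_right_forest_def fmult_forest_of_expand lin_lin lin_tens)
  also have "\<dots> = lin (\<lambda>s. lin (\<lambda>e. lin (\<lambda>c. lin (\<lambda>h. lin (\<lambda>f. lin (\<lambda>Q.
      Poly_Mapping.single (h, (Q, snd c # snd f)) 1) (tp 3 (fst c) (fst f))) (Delta_forest (snd e)))
      (tp 3 (fst s) (fst e))) (Delta_tree (snd s))) (Delta_forest ts)) (Delta_tree t)"
    by (intro lin_cong lin_swap)
  also have "\<dots> = lin (\<lambda>s. lin (\<lambda>e. lin (\<lambda>c. lin (\<lambda>f. lin (\<lambda>h. lin (\<lambda>Q.
      Poly_Mapping.single (h, (Q, snd c # snd f)) 1) (tp 3 (fst c) (fst f)))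
      (tp 3 (fst s) (fst e))) (Delta_forest (snd e))) (Delta_tree (snd s))) (Delta_forest ts)) (Delta_tree t)"
    by (intro lin_cong lin_swap)
  also have "\<dots> = lin (\<lambda>s. lin (\<lambda>e. lin (\<lambda>c. lin (\<lambda>f. tens3 (tp 3 (fst s) (fst e)) (tp 3 (fst c) (fst f)) (snd c # snd f))
      (Delta_forest (snd e))) (Delta_tree (snd s))) (Delta_forest ts)) (Delta_tree t)"
    by (simp add: tens3_def)
  also have "\<dots> = lin (\<lambda>s. lin (\<lambda>c. lin (\<lambda>e. lin (\<lambda>f. tens3 (tp 3 (fst s) (fst e)) (tp 3 (fst c) (fst f)) (snd c # snd f))
      (Delta_forest (snd e))) (Delta_forest ts)) (Delta_tree (snd s))) (Delta_tree t)"
    by (intro lin_cong lin_swap)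
  also have "\<dots> = fmult3 (coassoc_right t) (coassoc_right_forest (Delta_forest ts))"
    by (simp add: fmult3_def coassoc_right_def coassoc_right_forest_def lin_lin)
  finally show ?thesis .
qed

lemma coassoc_left_right_forest: "(\<And>t. t \<in> set ts \<Longrightarrow> valid t \<and> coassoc_left t = (coassoc_right t :: 'k::field vec3)) \<Longrightarrow>
  coassoc_left_forest (Delta_forest ts) = (coassoc_right_forest (Delta_forest ts) :: 'k fvec3)"
proof (induction ts)
  case Nil
  then show ?case by (simp add: coassoc_left_forest_def coassoc_right_forest_def Delta_tree_Leaf_single)
next
  case (Cons t ts)
  then have "valid t" "\<forall>s\<in>set ts. valid s" "coassoc_left t = (coassoc_right t :: 'k vec3)"
    "coassoc_left_forest (Delta_forest ts) = (coassoc_right_forest (Delta_forest ts) :: 'k fvec3)" by auto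
  then show ?case using coassoc_left_forest_Cons[of t ts, where 'k='k] coassoc_right_forest_Cons[of t ts, where 'k='k] by (simp del: Delta_forest.simps)
qed

definition node_right3 :: "'k::field fvec3 \<Rightarrow> 'k vec3" where
  "node_right3 X = lin (\<lambda>z. Poly_Mapping.single (fst z, (fst (snd z), Node (snd (snd z)))) 1) X"

lemma coassoc_left_right: "valid t \<Longrightarrow> coassoc_left t = (coassoc_right t :: 'k::field vec3)"
proof (induction t)
  case Leaf
  then show ?case by (simp add: coassoc_left_def coassoc_right_def Delta_tree_Leaf_single)
next
  case (Node ts)
  have D: "Delta_tree (Node ts) = Poly_Mapping.single (Node ts, Leaf) 1 + node_right (Delta_forest ts :: 'k fvec)"
    using Delta_tree_Node[OF Node.prems] .
  have vts: "\<forall>s\<in>set ts. valid s" using Node.prems by simp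
  have CLe: "coassoc_left (Node ts) = Poly_Mapping.single (Node ts, (Leaf, Leaf)) 1
     + lin (\<lambda>e. Poly_Mapping.single (fst e, (Node (snd e), Leaf)) 1) (Delta_forest ts) + node_right3 (coassoc_left_forest (Delta_forest ts) :: 'k fvec3)"
    unfolding coassoc_left_def by (simp add: D lin_add lin_node_right node_right3_def coassoc_left_forest_def lin_lin)
  have "coassoc_right (Node ts) = Poly_Mapping.single (Node ts, (Leaf, Leaf)) 1
     + lin (\<lambda>e. lin (\<lambda>d. Poly_Mapping.single (fst e, (fst d, snd d)) 1) (Delta_tree (Node (snd e)))) (Delta_forest ts :: 'k fvec)"
    unfolding coassoc_right_def D by (simp add: lin_add lin_node_right Delta_tree_Leaf_single)
  also have "\<dots> = Poly_Mapping.single (Node ts, (Leaf, Leaf)) 1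
     + lin (\<lambda>e. Poly_Mapping.single (fst e, (Node (snd e), Leaf)) 1 +
         lin (\<lambda>f. Poly_Mapping.single (fst e, (fst f, Node (snd f))) 1) (Delta_forest (snd e))) (Delta_forest ts :: 'k fvec)"
  proof (intro arg_cong[where f="\<lambda>z. Poly_Mapping.single (Node ts, (Leaf, Leaf)) 1 + z"] lin_cong)
    fix e assume e: "e \<in> Poly_Mapping.keys (Delta_forest ts :: 'k fvec)"
    have "length (snd e) = length ts" "\<forall>p\<in>set (snd e). valid p"
      using keys_Delta_forest(2,3)[OF vts, of "fst e" "snd e"] e by auto
    then have "valid (Node (snd e))" using Node.prems by simp
    from Delta_tree_Node[OF this, where 'k='k]
    show "lin (\<lambda>d. Poly_Mapping.single (fst e, (fst d, snd d)) 1) (Delta_tree (Node (snd e))) =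
      Poly_Mapping.single (fst e, (Node (snd e), Leaf)) (1::'k) + lin (\<lambda>f. Poly_Mapping.single (fst e, (fst f, Node (snd f))) 1) (Delta_forest (snd e))"
      by (simp add: lin_add lin_node_right)
  qed
  also have "\<dots> = Poly_Mapping.single (Node ts, (Leaf, Leaf)) 1
     + lin (\<lambda>e. Poly_Mapping.single (fst e, (Node (snd e), Leaf)) 1) (Delta_forest ts) + node_right3 (coassoc_right_forest (Delta_forest ts) :: 'k fvec3)"
    by (simp add: lin_fadd node_right3_def coassoc_right_forest_def lin_lin add.assoc)
  finally have CRe: "coassoc_right (Node ts) = Poly_Mapping.single (Node ts, (Leaf, Leaf)) 1
     + lin (\<lambda>e. Poly_Mapping.single (fst e, (Node (snd e), Leaf)) 1) (Delta_forest ts) + node_right3 (coassoc_right_forest (Delta_forest ts) :: 'k fvec3)" .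
  have "coassoc_left_forest (Delta_forest ts) = (coassoc_right_forest (Delta_forest ts) :: 'k fvec3)"
    using Node.IH Node.prems by (intro coassoc_left_right_forest) auto
  then show ?case by (simp only: CLe CRe)
qed

definition reassoc :: "((tree \<times> tree) \<times> tree \<Rightarrow>\<^sub>0 'k::field) \<Rightarrow> 'k vec3" where
  "reassoc X = lin (\<lambda>z. Poly_Mapping.single (fst (fst z), (snd (fst z), snd z)) 1) X"

lemma lookup_reassoc: "Poly_Mapping.lookup (reassoc X) (u, (v, w)) = Poly_Mapping.lookup X ((u, v), w)"
proof -
  have "Poly_Mapping.lookup (reassoc X) (u, (v, w)) = (\<Sum>z\<in>Poly_Mapping.keys X. if z = ((u, v), w) then Poly_Mapping.lookup X z else 0)"
    unfolding reassoc_def lookup_lin by (intro sum.cong) (auto simp: lookup_single when_def prod_eq_iff)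
  also have "\<dots> = Poly_Mapping.lookup X ((u, v), w)"
    by (simp add: sum.delta in_keys_iff)
  finally show ?thesis .
qed

lemma reassoc_Delta_id: "reassoc (Delta_id Delta_cut (Delta_cut a)) = lin coassoc_left (a :: 'k::field vec)"
  by (simp add: reassoc_def Delta_id_lin Delta_cut_lin lin_lin tens_lin coassoc_left_def[abs_def])

lemma id_Delta_coassoc_right: "id_Delta Delta_cut (Delta_cut a) = lin coassoc_right (a :: 'k::field vec)"
  by (simp add: id_Delta_lin Delta_cut_lin lin_lin tens_lin coassoc_right_def[abs_def])

theorem Delta_cut_coassoc:
  assumes "a \<in> (Aspace :: 'k::field vec set)"
  shows "Poly_Mapping.lookup (Delta_id Delta_cut (Delta_cut a)) ((u, v), w) = Poly_Mapping.lookup (id_Delta Delta_cut (Delta_cut a)) (u, (v, (w::tree)))"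
proof -
  have "lin coassoc_left a = (lin coassoc_right a :: 'k vec3)"
    using assms by (intro lin_cong coassoc_left_right) (auto dest: AspaceD)
  then show ?thesis
    by (metis reassoc_Delta_id id_Delta_coassoc_right lookup_reassoc)
qed

section \<open>Counit and grading\<close>

lemma eps_tp3: "valid x \<Longrightarrow> valid y \<Longrightarrow> eps (tp 3 x y :: 'k::field vec) = eps (tvec x :: 'k vec) * eps (tvec y :: 'k vec)"
proof (cases "x = Leaf \<and> y = Leaf")
  case True
  then show ?thesis by (simp add: eps_tvec)
next
  case False
  assume v: "valid x" "valid y"
  have "Leaf \<notin> Poly_Mapping.keys (tp 3 x y :: 'k vec)"
    using keys_tp(3)[OF v, of Leaf 3, where 'k='k] False by blast
  then have "eps (tp 3 x y :: 'k vec) = 0" by (simp add: eps_def in_keys_iff)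
  then show ?thesis using False by (auto simp: eps_tvec)
qed

lemma eps_star:
  assumes "a \<in> Aspace" "b \<in> Aspace"
  shows "eps (prodA 3 a b :: 'k::field vec) = eps a * eps b"
proof -
  have "eps (prodA 3 a b) = (\<Sum>s\<in>Poly_Mapping.keys a. \<Sum>t\<in>Poly_Mapping.keys b.
      Poly_Mapping.lookup a s * (Poly_Mapping.lookup b t * (eps (tvec s :: 'k vec) * eps (tvec t :: 'k vec))))"
    unfolding prodA_lin eps_lin using assms
    by (intro sum.cong refl) (simp add: sum_distrib_left eps_tp3 AspaceD)
  also have "\<dots> = (\<Sum>s\<in>Poly_Mapping.keys a. Poly_Mapping.lookup a s * eps (tvec s :: 'k vec)) *
      (\<Sum>t\<in>Poly_Mapping.keys b. Poly_Mapping.lookup b t * eps (tvec t :: 'k vec))"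
    by (simp add: sum_product algebra_simps)
  also have "\<dots> = eps a * eps b"
    by (subst (3) lin_id_tvec[symmetric], subst (4) lin_id_tvec[symmetric]) (simp only: eps_lin)
  finally show ?thesis .
qed

lemma eps_id_lin_ext: "eps_id (lin f a) = lin (\<lambda>t. eps_id (f t)) a"
  by (simp add: eps_id_lin lin_lin)

lemma id_eps_lin_ext: "id_eps (lin f a) = lin (\<lambda>t. id_eps (f t)) a"
  by (simp add: id_eps_lin lin_lin)

lemma id_eps_Delta_tree: "valid t \<Longrightarrow> id_eps (Delta_tree t) = (tvec t :: 'k::field vec)"
proof (cases t)
  case Leaf
  then show ?thesis by (simp add: Delta_tree_Leaf_single id_eps_lin eps_tvec)
next
  case (Node ts)
  assume "valid t"
  then have "Delta_tree t = Poly_Mapping.single (t, Leaf) 1 + node_right (Delta_forest ts :: 'k fvec)"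
    using Delta_tree_Node Node by blast
  then show ?thesis
    by (simp add: id_eps_lin lin_add lin_node_right eps_tvec Node)
qed

lemma eps_star_prod: "\<forall>a\<in>set as. a \<in> Aspace \<Longrightarrow> eps (star_prod as :: 'k::field vec) = prod_list (map eps as)"
  by (induction as) (simp_all add: eps_star star_prod_Aspace unitA_def eps_tvec)

lemma eps_Gcut:
  assumes "valid t" "C \<in> admissible_cuts t"
  shows "eps (Gcut C t :: 'k::field vec) = (if C = {} then 1 else 0)"
proof -
  have sub: "C \<subseteq> ipos t" using assms(2) by (simp add: admissible_cuts_iff)
  have v: "\<forall>s\<in>set (forest C t). valid s" using forest_valid assms(1) by blast
  have "eps (Gcut C t :: 'k vec) = (\<Prod>s\<leftarrow>forest C t. eps (tvec s :: 'k vec))"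
    by (simp add: Gcut_star_prod eps_star_prod tvec_Aspace v comp_def)
  also have "\<dots> = (if C = {} then 1 else 0)"
  proof (cases "C = {}")
    case True
    then show ?thesis by simp
  next
    case False
    then obtain p where "p \<in> C" by blast
    then obtain s l where "forest C t = s # l" using forest_ne[OF sub] by (cases "forest C t") auto
    moreover have "s \<noteq> Leaf" using forest_nonleaf[OF sub, of s] calculation by simp
    ultimately show ?thesis using False by (simp add: eps_tvec)
  qed
  finally show ?thesis .
qed

lemma scale_sum_left: "scale (sum c I) v = (\<Sum>i\<in>I. scale (c i) v)"
  by (rule poly_mapping_eqI) (simp add: lookup_sum sum_distrib_right)

lemma lin_scale_eps: "lin (\<lambda>s. scale (eps (tvec s :: 'k::field vec)) v) A = scale (eps A) (v :: 'a \<Rightarrow>\<^sub>0 'k)"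
proof -
  have e: "eps A = (\<Sum>x\<in>Poly_Mapping.keys A. Poly_Mapping.lookup A x * eps (tvec x :: 'k vec))"
    using eps_lin[of tvec A] lin_id_tvec[of A] by simp
  show ?thesis unfolding lin_def e by (simp add: scale_sum_left)
qed

lemma eps_id_Delta_tree: "valid t \<Longrightarrow> eps_id (Delta_tree t) = (tvec t :: 'k::field vec)"
proof -
  assume v: "valid t"
  have "eps_id (Delta_tree t :: 'k vec2) = (\<Sum>C\<in>admissible_cuts t. eps_id (tens (Gcut C t) (tvec (Pcut C t)) :: 'k vec2))"
    by (simp add: Delta_tree_cut_sum eps_id_lin lin_sum)
  also have "\<dots> = (\<Sum>C\<in>admissible_cuts t. if C = {} then tvec t else 0)"
  proof (rule sum.cong[OF refl])
    fix C assume C: "C \<in> admissible_cuts t"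
    have "eps_id (tens (Gcut C t) (tvec (Pcut C t)) :: 'k vec2) = scale (eps (Gcut C t :: 'k vec)) (tvec (Pcut C t))"
      by (simp add: eps_id_lin lin_tens lin_scale_eps)
    also have "\<dots> = (if C = {} then tvec t else 0)"
      using eps_Gcut[OF v C, where 'k='k] by (simp add: Pcut_def)
    finally show "eps_id (tens (Gcut C t) (tvec (Pcut C t)) :: 'k vec2) = (if C = {} then tvec t else 0)" .
  qed
  also have "\<dots> = tvec t"
    by (simp add: sum.delta finite_admissible_cuts admissible_cuts_iff prefix_free_def)
  finally show ?thesis .
qed

lemma Delta_cut_A2space: "a \<in> Aspace \<Longrightarrow> Delta_cut (a :: 'k::field vec) \<in> A2space"
  unfolding A2space_def mem_Collect_eq Delta_cut_lin
proof (rule keys_linI)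
  fix t assume "a \<in> Aspace" "t \<in> Poly_Mapping.keys a"
  then have "valid t" by (rule AspaceD)
  then show "Poly_Mapping.keys (Delta_tree t :: 'k vec2) \<subseteq> {(s, t). valid s \<and> valid t}"
    using keys_Delta_tree(1,2) by fastforce
qed

lemma linear_A_Delta_cut: "linear_A (Delta_cut :: 'k::field vec \<Rightarrow> 'k vec2)"
  unfolding linear_A_def using Delta_cut_A2space[where 'k='k] by (simp add: Delta_cut_lin lin_add lin_scale)

lemma Delta_cut_mult:
  assumes "a \<in> Aspace" "b \<in> Aspace"
  shows "Delta_cut (prodA 3 a b) = prod2 (Delta_cut a) (Delta_cut (b :: 'k::field vec))"
proof -
  have "Delta_cut (prodA 3 a b) = lin (\<lambda>s. lin (\<lambda>t. Delta_cut (tp 3 s t)) b) a"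
    by (simp add: prodA_lin Delta_cut_lin_ext)
  also have "\<dots> = lin (\<lambda>s. lin (\<lambda>t. prod2 (Delta_tree s) (Delta_tree t)) b) a"
    using assms by (intro lin_cong Delta_tree_mult) (auto dest: AspaceD)
  also have "\<dots> = prod2 (Delta_cut a) (Delta_cut b)"
    by (simp add: Delta_cut_lin prod2_lin_left prod2_lin_right) (rule lin_swap)
  finally show ?thesis .
qed

lemma Aplus_keys_valid_node: "a \<in> Aplus \<Longrightarrow> t \<in> Poly_Mapping.keys a \<Longrightarrow> valid_node t"
  by (auto simp: Aplus_def valid_node_def)

lemma tridendriform_compatible_Delta_cut: "tridendriform_compatible (Delta_cut :: 'k::field vec \<Rightarrow> 'k vec2)"
  unfolding tridendriform_compatible_def
proof (intro ballI allI impI)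
  fix x y :: "'k vec" and op :: nat assume xy: "x \<in> Aplus" "y \<in> Aplus" and op: "op < 3"
  have "Delta_cut (prodA op x y) = lin (\<lambda>s. lin (\<lambda>t. Delta_cut (tp op s t)) y) x"
    by (simp add: prodA_lin Delta_cut_lin_ext)
  also have "\<dots> = lin (\<lambda>s. lin (\<lambda>t. barprod op (Delta_tree s) (Delta_tree t)) y) x"
    using xy op by (intro lin_cong Delta_tree_compat) (auto dest: Aplus_keys_valid_node)
  also have "\<dots> = barprod op (Delta_cut x) (Delta_cut y)"
    by (simp add: Delta_cut_lin barprod_lin_left barprod_lin_right) (rule lin_swap)
  finally show "Delta_cut (prodA op x y) = barprod op (Delta_cut x) (Delta_cut y)" .
qed

lemma deg_tp: "valid x \<Longrightarrow> valid y \<Longrightarrow> w \<in> Poly_Mapping.keys (tp op x y :: 'k::field vec) \<Longrightarrow> deg w = deg x + deg y"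
  using keys_tp(2)[of x y w op, where 'k='k] leaves_pos[of x] leaves_pos[of y] leaves_pos[of w] keys_tp(1)[of x y w op, where 'k='k]
  by (simp add: deg_def)

lemma homog_star:
  assumes "a \<in> Aspace" "b \<in> Aspace" "homog n a" "homog m b"
  shows "homog (n + m) (prodA 3 a (b :: 'k::field vec))"
  unfolding homog_def
proof
  fix w assume "w \<in> Poly_Mapping.keys (prodA 3 a b)"
  then have "w \<in> (\<Union>s\<in>Poly_Mapping.keys a. Poly_Mapping.keys (lin (\<lambda>t. tp 3 s t) b :: 'k vec))"
    unfolding prodA_lin by (rule keys_lin[THEN subsetD])
  then obtain s where s: "s \<in> Poly_Mapping.keys a" "w \<in> Poly_Mapping.keys (lin (\<lambda>t. tp 3 s t) b :: 'k vec)"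
    by (rule UN_E)
  then have "w \<in> (\<Union>t\<in>Poly_Mapping.keys b. Poly_Mapping.keys (tp 3 s t :: 'k vec))"
    by (intro keys_lin[THEN subsetD])
  then obtain t where t: "t \<in> Poly_Mapping.keys b" "w \<in> Poly_Mapping.keys (tp 3 s t :: 'k vec)"
    by (rule UN_E)
  have "deg w = deg s + deg t" using deg_tp[OF AspaceD[OF assms(1) s(1)] AspaceD[OF assms(2) t(1)] t(2)] .
  then show "deg w = n + m" using assms(3,4) s(1) t(1) by (simp add: homog_def)
qed

lemma homog_Delta:
  assumes "a \<in> Aspace" "homog n (a :: 'k::field vec)"
  shows "\<forall>(s, t)\<in>Poly_Mapping.keys (Delta_cut a). deg s + deg t = n"
proof
  fix u assume "u \<in> Poly_Mapping.keys (Delta_cut a)"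
  then have "u \<in> (\<Union>t0\<in>Poly_Mapping.keys a. Poly_Mapping.keys (Delta_tree t0 :: 'k vec2))"
    unfolding Delta_cut_lin by (rule keys_lin[THEN subsetD])
  then obtain t0 where t0: "t0 \<in> Poly_Mapping.keys a" "u \<in> Poly_Mapping.keys (Delta_tree t0 :: 'k vec2)"
    by (rule UN_E)
  have v: "valid t0" using AspaceD[OF assms(1) t0(1)] .
  obtain s t where u: "u = (s, t)" by (cases u)
  have "valid s" "valid t" "leaves s + leaves t = leaves t0 + 1"
    using keys_Delta_tree[OF v, of s t, where 'k='k] t0(2) u by auto
  moreover have "deg t0 = n" using assms(2) t0(1) by (simp add: homog_def)
  ultimately show "case u of (s, t) \<Rightarrow> deg s + deg t = n"
    using u leaves_pos[of s] leaves_pos[of t] by (auto simp: deg_def)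
qed

lemma valid_leaves_1: "valid t \<Longrightarrow> leaves t \<le> 1 \<Longrightarrow> t = Leaf"
  using valid_node_leaves[of t] by (cases "t = Leaf") (auto simp: valid_node_def)

lemma homog_0_Aspace_eq: "{a \<in> (Aspace :: 'k::field vec set). homog 0 a} = range (\<lambda>c. scale c unitA)"
proof (intro set_eqI iffI)
  fix a :: "'k vec" assume "a \<in> {a \<in> Aspace. homog 0 a}"
  then have k: "Poly_Mapping.keys a \<subseteq> {Leaf}"
    using valid_leaves_1 by (auto simp: homog_def Aspace_def deg_def)
  have "a = scale (Poly_Mapping.lookup a Leaf) unitA"
  proof (rule poly_mapping_eqI)
    fix t show "Poly_Mapping.lookup a t = Poly_Mapping.lookup (scale (Poly_Mapping.lookup a Leaf) unitA) t"
      using k by (cases "t = Leaf") (auto simp: unitA_def lookup_tvec in_keys_iff)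
  qed
  then show "a \<in> range (\<lambda>c. scale c unitA)" by blast
next
  fix a :: "'k vec" assume "a \<in> range (\<lambda>c. scale c unitA)"
  then obtain c where a: "a = scale c unitA" by blast
  have "Poly_Mapping.keys a \<subseteq> {Leaf}" using keys_scale[of c "unitA :: 'k vec"] a by (simp add: unitA_def)
  then show "a \<in> {a \<in> Aspace. homog 0 a}" by (auto simp: Aspace_def homog_def deg_def)
qed

lemma eps_homog: "a \<in> Aspace \<Longrightarrow> homog n a \<Longrightarrow> 0 < n \<Longrightarrow> eps (a :: 'k::field vec) = 0"
proof -
  assume h: "homog n a" "0 < n"
  have "Leaf \<notin> Poly_Mapping.keys a"
  proof
    assume "Leaf \<in> Poly_Mapping.keys a"
    then have "deg Leaf = n" using h(1) by (simp add: homog_def)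
    then show False using h(2) by (simp add: deg_def)
  qed
  then show ?thesis by (simp add: eps_def in_keys_iff)
qed

lemma eps_id_Delta: "a \<in> Aspace \<Longrightarrow> eps_id (Delta_cut a) = (a :: 'k::field vec)"
proof -
  assume a: "a \<in> Aspace"
  have "eps_id (Delta_cut a) = lin (\<lambda>t. eps_id (Delta_tree t)) a" by (simp add: Delta_cut_lin eps_id_lin_ext)
  also have "\<dots> = lin tvec a" using a by (intro lin_cong eps_id_Delta_tree) (auto dest: AspaceD)
  finally show ?thesis by (simp add: lin_id_tvec)
qed

lemma id_eps_Delta: "a \<in> Aspace \<Longrightarrow> id_eps (Delta_cut a) = (a :: 'k::field vec)"
proof -
  assume a: "a \<in> Aspace"
  have "id_eps (Delta_cut a) = lin (\<lambda>t. id_eps (Delta_tree t)) a" by (simp add: Delta_cut_lin id_eps_lin_ext)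
  also have "\<dots> = lin tvec a" using a by (intro lin_cong id_eps_Delta_tree) (auto dest: AspaceD)
  finally show ?thesis by (simp add: lin_id_tvec)
qed

theorem graded_connected_bialgebra_Delta_cut: "graded_connected_bialgebra (Delta_cut :: 'k::field vec \<Rightarrow> 'k vec2)"
  unfolding graded_connected_bialgebra_def
  by (auto simp: star_assoc Delta_cut_coassoc eps_id_Delta id_eps_Delta Delta_cut_mult Delta_tree_Leaf unitA_def[symmetric]
      eps_star homog_star homog_Delta eps_homog homog_0_Aspace_eq)
     (simp_all add: unitA_def eps_tvec Delta_tree_Leaf_single)

section \<open>Uniqueness\<close>

lemma valid_leaves_2: "valid t \<Longrightarrow> leaves t = 2 \<Longrightarrow> t = Node [Leaf, Leaf]"
proof -
  assume v: "valid t" and l: "leaves t = 2"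
  then obtain ts where t: "t = Node ts" by (cases t) auto
  with v obtain a b rest where ts: "ts = a # b # rest" "valid a" "valid b" "\<forall>s\<in>set rest. valid s"
    by (cases ts rule: remdups_adj.cases) auto
  have la: "1 \<le> leaves a" "1 \<le> leaves b" using ts leaves_pos by auto
  have s2: "leaves a + leaves b + sum_list (map leaves rest) = 2" using l t ts by simp
  have "leaves a = 1" using s2 la by linarith
  moreover have "leaves b = 1" using s2 la by linarith
  moreover have s0: "sum_list (map leaves rest) = 0" using s2 la by linarith
  moreover have "rest = []"
  proof (rule ccontr)
    assume "rest \<noteq> []"
    then have "1 \<le> sum_list (map leaves rest)" using sum_list_leaves_pos ts(4) by blast
    then show False using s0 by simp
  qed
  ultimately show ?thesis using t ts valid_leaves_1 by auto
qed

lemma poly_mapping_two_keys: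
  assumes "Poly_Mapping.keys P \<subseteq> {u, v}" "u \<noteq> v"
  shows "P = Poly_Mapping.single u (Poly_Mapping.lookup P u) + Poly_Mapping.single v (Poly_Mapping.lookup P v)"
proof (rule poly_mapping_eqI)
  fix w show "Poly_Mapping.lookup P w = Poly_Mapping.lookup (Poly_Mapping.single u (Poly_Mapping.lookup P u) + Poly_Mapping.single v (Poly_Mapping.lookup P v)) w"
    using assms by (cases "w = u"; cases "w = v") (auto simp: lookup_add lookup_single in_keys_iff)
qed

abbreviation "Ytree \<equiv> Node [Leaf, Leaf]"

lemma Ytree_coproduct_determined:
  assumes k: "Poly_Mapping.keys P \<subseteq> {(Leaf, Ytree), (Ytree, Leaf)}"
    and e1: "eps_id P = tvec Ytree" and e2: "id_eps P = (tvec Ytree :: 'k::field vec)"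
  shows "P = Poly_Mapping.single (Leaf, Ytree) 1 + Poly_Mapping.single (Ytree, Leaf) 1"
proof -
  define \<alpha> where "\<alpha> = Poly_Mapping.lookup P (Leaf, Ytree)"
  define \<beta> where "\<beta> = Poly_Mapping.lookup P (Ytree, Leaf)"
  have P: "P = Poly_Mapping.single (Leaf, Ytree) \<alpha> + Poly_Mapping.single (Ytree, Leaf) \<beta>"
    unfolding \<alpha>_def \<beta>_def using k by (rule poly_mapping_two_keys) simp
  have "eps_id P = scale \<alpha> (tvec Ytree)"
    by (subst P) (simp add: eps_id_lin lin_add eps_tvec)
  then have "\<alpha> = 1" using e1 by (metis lookup_scale lookup_tvec mult.right_neutral)
  have "id_eps P = scale \<beta> (tvec Ytree)"
    by (subst P) (simp add: id_eps_lin lin_add eps_tvec)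
  then have "\<beta> = 1" using e2 by (metis lookup_scale lookup_tvec mult.right_neutral)
  show ?thesis using P \<open>\<alpha> = 1\<close> \<open>\<beta> = 1\<close> by simp
qed

lemma Ytree_keys:
  assumes "valid s" "valid t" "leaves s + leaves t = 3"
  shows "(s, t) \<in> {(Leaf, Ytree), (Ytree, Leaf)}"
proof -
  have "1 \<le> leaves s" "1 \<le> leaves t" using assms leaves_pos by auto
  then consider "leaves s = 1" "leaves t = 2" | "leaves s = 2" "leaves t = 1" using assms(3) by linarith
  then show ?thesis
    by cases (use assms valid_leaves_1 valid_leaves_2 in auto)
qed

lemma tp1_Node_Y_right: "bts \<noteq> [] \<Longrightarrow> tp 1 (Node bts) (Node [Leaf, t]) = (tvec (Node (bts @ [t])) :: 'k::field vec)"
  by (cases bts rule: rev_cases) (simp_all add: tp1_Node)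

lemma tp0_Node_Y_left: "valid_node b \<Longrightarrow> tp 0 (Node [a, Leaf]) b = (tvec (Node [a, b]) :: 'k::field vec)"
  by (simp add: tp0_Node valid_node_children_ne valid_node_not_Leaf)

lemma tp2_Ytree_right: "valid_node a \<Longrightarrow> tp 2 a Ytree = (tvec (Node [a, Leaf]) :: 'k::field vec)"
  by (simp add: tp2_Node valid_node_children_ne valid_node_not_Leaf)

lemma obtain_tp_decomposition:
  assumes v: "valid t" and l: "3 \<le> leaves t"
  obtains x y op where "op < 3" "valid_node x" "valid_node y" "leaves x < leaves t" "leaves y < leaves t"
    "tp op x y = (tvec t :: 'k::field vec)"
proof -
  from v l obtain ts where t: "t = Node ts" by (cases t) auto
  with v have ts: "2 \<le> length ts" "\<forall>s\<in>set ts. valid s" by auto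
  show ?thesis
  proof (cases "3 \<le> length ts")
    case True
    then obtain bts lt where e: "ts = bts @ [lt]" by (cases ts rule: rev_cases) auto
    with True ts obtain a b r where bts: "bts = a # b # r" "valid a" "valid b" "\<forall>s\<in>set bts. valid s" "valid lt"
      by (cases bts rule: remdups_adj.cases) auto
    have "valid_node (Node bts)" "valid_node (Node [Leaf, lt])"
      using bts by (auto simp: valid_node_def)
    moreover have "leaves (Node bts) < leaves t" "leaves (Node [Leaf, lt]) < leaves t"
      using t e bts leaves_pos[of a] leaves_pos[of b] leaves_pos[of lt] by auto
    moreover have "tp 1 (Node bts) (Node [Leaf, lt]) = (tvec t :: 'k vec)"
      using t e bts(1) by (simp add: tp1_Node_Y_right)
    ultimately show ?thesis by (intro that[of 1]) auto
  next
    case False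
    with ts have "length ts = 2" by simp
    then obtain a b where "ts = [a, b]" by (auto simp: numeral_2_eq_2 length_Suc_conv)
    with ts have ab: "ts = [a, b]" "valid a" "valid b" by auto
    show ?thesis
    proof (cases "b = Leaf")
      case False
      then have nb: "valid_node b" using ab by (simp add: valid_node_def)
      have "leaves (Node [a, Leaf]) < leaves t" "leaves b < leaves t"
        using t ab valid_node_leaves[OF nb] leaves_pos[of a] by auto
      with nb ab(2) show ?thesis
        by (intro that[of 0 "Node [a, Leaf]" b]) (auto simp: valid_node_def t ab(1) tp0_Node_Y_left)
    next
      case True
      with l t ab have "a \<noteq> Leaf" by auto
      with ab have na: "valid_node a" by (simp add: valid_node_def)
      have "leaves a < leaves t" "leaves Ytree < leaves t"
        using t ab True valid_node_leaves[OF na] by auto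
      with na show ?thesis
        by (intro that[of 2 a Ytree]) (auto simp: valid_node_def t ab(1) True tp2_Ytree_right)
    qed
  qed
qed

lemma graded_connected_bialgebraD:
  assumes "graded_connected_bialgebra D"
  shows "a \<in> Aspace \<Longrightarrow> eps_id (D a) = a" and "a \<in> Aspace \<Longrightarrow> id_eps (D a) = a"
    and "D unitA = tens unitA unitA"
    and "a \<in> Aspace \<Longrightarrow> homog n a \<Longrightarrow> (s, t) \<in> Poly_Mapping.keys (D a) \<Longrightarrow> deg s + deg t = n"
proof -
  show "a \<in> Aspace \<Longrightarrow> eps_id (D a) = a" "a \<in> Aspace \<Longrightarrow> id_eps (D a) = a" "D unitA = tens unitA unitA"
    using assms by (simp_all add: graded_connected_bialgebra_def)
  have "\<forall>n a. a \<in> Aspace \<longrightarrow> homog n a \<longrightarrow> (\<forall>(s, t)\<in>Poly_Mapping.keys (D a). deg s + deg t = n)"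
    using assms unfolding graded_connected_bialgebra_def by blast
  then show "a \<in> Aspace \<Longrightarrow> homog n a \<Longrightarrow> (s, t) \<in> Poly_Mapping.keys (D a) \<Longrightarrow> deg s + deg t = n"
    by fastforce
qed

lemma compatible_coproduct_Ytree:
  assumes lin: "linear_A D" and gcb: "graded_connected_bialgebra (D :: 'k::field vec \<Rightarrow> 'k vec2)"
  shows "D (tvec Ytree) = Delta_tree Ytree"
proof -
  have vY: "tvec Ytree \<in> Aspace" and hY: "homog 1 (tvec Ytree :: 'k vec)"
    by (simp_all add: tvec_Aspace homog_def deg_def)
  note counit = graded_connected_bialgebraD(1,2)[OF gcb vY]
  have "Poly_Mapping.keys (D (tvec Ytree)) \<subseteq> {(Leaf, Ytree), (Ytree, Leaf)}"
  proof
    fix u assume u: "u \<in> Poly_Mapping.keys (D (tvec Ytree))"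
    obtain s r where ur: "u = (s, r)" by (cases u)
    have "valid s" "valid r"
      using lin vY u ur by (auto simp: linear_A_def A2space_def)
    moreover have "deg s + deg r = 1" using graded_connected_bialgebraD(4)[OF gcb vY hY] u ur by simp
    ultimately have "leaves s + leaves r = 3" using leaves_pos[of s] leaves_pos[of r] by (simp add: deg_def)
    then show "u \<in> {(Leaf, Ytree), (Ytree, Leaf)}" using Ytree_keys \<open>valid s\<close> \<open>valid r\<close> ur by blast
  qed
  then have "D (tvec Ytree) = Poly_Mapping.single (Leaf, Ytree) 1 + Poly_Mapping.single (Ytree, Leaf) 1"
    using counit by (rule Ytree_coproduct_determined)
  moreover have "Poly_Mapping.keys (Delta_tree Ytree :: 'k vec2) \<subseteq> {(Leaf, Ytree), (Ytree, Leaf)}"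
  proof
    fix u assume "u \<in> Poly_Mapping.keys (Delta_tree Ytree :: 'k vec2)"
    with keys_Delta_tree[of Ytree "fst u" "snd u", where 'k='k] show "u \<in> {(Leaf, Ytree), (Ytree, Leaf)}"
      using Ytree_keys[of "fst u" "snd u"] by simp
  qed
  then have "Delta_tree Ytree = Poly_Mapping.single (Leaf, Ytree) 1 + (Poly_Mapping.single (Ytree, Leaf) 1 :: 'k vec2)"
    by (rule Ytree_coproduct_determined) (simp_all add: eps_id_Delta_tree id_eps_Delta_tree)
  ultimately show ?thesis by simp
qed

lemma Delta_unique_tree:
  assumes lin: "linear_A D" and gcb: "graded_connected_bialgebra D"
    and compat: "tridendriform_compatible (D :: 'k::field vec \<Rightarrow> 'k vec2)"
  shows "valid t \<Longrightarrow> D (tvec t) = Delta_tree t"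
proof (induction "leaves t" arbitrary: t rule: less_induct)
  case less
  from leaves_pos[OF less.prems] consider "leaves t = 1" | "leaves t = 2" | "3 \<le> leaves t" by linarith
  then show ?case
  proof cases
    case 1
    with less.prems have "t = Leaf" by (simp add: valid_leaves_1)
    with graded_connected_bialgebraD(3)[OF gcb] show ?thesis by (simp add: Delta_tree_Leaf unitA_def)
  next
    case 2
    with less.prems have "t = Ytree" by (rule valid_leaves_2)
    with lin gcb show ?thesis by (simp add: compatible_coproduct_Ytree)
  next
    case 3
    obtain x y op where d: "op < 3" "valid_node x" "valid_node y" "leaves x < leaves t" "leaves y < leaves t"
      "tp op x y = (tvec t :: 'k vec)"
      using obtain_tp_decomposition[OF less.prems 3] by blast
    have "tvec x \<in> Aplus" "tvec y \<in> Aplus" using d(2,3) by (auto simp: Aplus_def valid_node_def)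
    then have "D (tvec t) = barprod op (D (tvec x)) (D (tvec y))"
      using compat d(1) unfolding tridendriform_compatible_def d(6)[symmetric] by (metis prodA_tvec)
    also have "\<dots> = barprod op (Delta_tree x) (Delta_tree y)"
      using less.hyps[OF d(4)] less.hyps[OF d(5)] d(2,3) by (simp add: valid_node_def)
    also have "\<dots> = Delta_tree t"
      using Delta_tree_compat[OF d(2,3,1), where 'k='k] d(6) by simp
    finally show ?thesis .
  qed
qed

lemma linear_A_sum:
  assumes lin: "linear_A D"
  shows "finite K \<Longrightarrow> (\<forall>t\<in>K. valid t) \<Longrightarrow> D (\<Sum>t\<in>K. scale (c t) (tvec t)) = (\<Sum>t\<in>K. scale (c t) (D (tvec t :: 'k::field vec)) :: 'k vec2)"
proof (induction K rule: finite_induct)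
  case empty
  have z: "(0::'k vec) \<in> Aspace" by (simp add: Aspace_def)
  have "D (scale 0 0) = scale 0 (D 0)" using lin z unfolding linear_A_def by blast
  then show ?case by simp
next
  case (insert t K)
  have A1: "scale (c t) (tvec t) \<in> Aspace" using insert keys_scale[of "c t" "tvec t :: 'k vec"]
    by (auto simp: Aspace_def)
  have A2: "(\<Sum>t\<in>K. scale (c t) (tvec t)) \<in> (Aspace :: 'k vec set)"
    using insert.prems keys_sum[of "\<lambda>t. scale (c t) (tvec t) :: 'k vec" K] keys_scale
    by (fastforce simp: Aspace_def)
  have "D (\<Sum>t\<in>insert t K. scale (c t) (tvec t)) = D (scale (c t) (tvec t) + (\<Sum>t\<in>K. scale (c t) (tvec t)))"
    using insert by simp
  also have "\<dots> = D (scale (c t) (tvec t)) + D (\<Sum>t\<in>K. scale (c t) (tvec t))"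
    using lin A1 A2 by (simp add: linear_A_def)
  also have "\<dots> = scale (c t) (D (tvec t)) + (\<Sum>t\<in>K. scale (c t) (D (tvec t)))"
    using lin insert by (simp add: linear_A_def tvec_Aspace)
  finally show ?case using insert by simp
qed

theorem Delta_cut_unique:
  assumes "linear_A D" "graded_connected_bialgebra D" "tridendriform_compatible (D :: 'k::field vec \<Rightarrow> 'k vec2)"
  shows "\<forall>a\<in>Aspace. D a = Delta_cut a"
proof
  fix a :: "'k vec" assume a: "a \<in> Aspace"
  have "a = (\<Sum>t\<in>Poly_Mapping.keys a. scale (Poly_Mapping.lookup a t) (tvec t))"
    using lin_id_tvec[of a] by (simp add: lin_def)
  then have "D a = (\<Sum>t\<in>Poly_Mapping.keys a. scale (Poly_Mapping.lookup a t) (D (tvec t)))"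
    using linear_A_sum[OF assms(1), of "Poly_Mapping.keys a" "Poly_Mapping.lookup a"] a by (auto simp: Aspace_def)
  also have "\<dots> = (\<Sum>t\<in>Poly_Mapping.keys a. scale (Poly_Mapping.lookup a t) (Delta_tree t))"
    using Delta_unique_tree[OF assms] a by (intro sum.cong refl) (auto dest: AspaceD)
  also have "\<dots> = Delta_cut a" by (simp add: Delta_cut_def)
  finally show "D a = Delta_cut a" .
qed

theorem mainTheorem6:
  shows "linear_A (Delta_cut :: 'k::field vec \<Rightarrow> 'k vec2) \<and>
         graded_connected_bialgebra (Delta_cut :: 'k vec \<Rightarrow> 'k vec2) \<and>
         tridendriform_compatible (Delta_cut :: 'k vec \<Rightarrow> 'k vec2) \<and>
         (\<forall>D :: 'k vec \<Rightarrow> 'k vec2. linear_A D \<and> graded_connected_bialgebra D \<and>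
            tridendriform_compatible D \<longrightarrow> (\<forall>a\<in>Aspace. D a = Delta_cut a))"
  using linear_A_Delta_cut graded_connected_bialgebra_Delta_cut tridendriform_compatible_Delta_cut Delta_cut_unique by blast

end
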